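(* Let $k$ be a commutative ring, $P,P'$ invertible $k$-modules, $Q'=P'^*$. Let $A$ be a $P$-Frobenius $k$-algebra and $B$ a $P'$-Frobenius $k$-algebra such that $B$ is a subalgebra of $A$, $A_B$ is a finitely generated projective right $B$-module, and some Nakayama automorphism $\nu_A$ of $A$ satisfies $\nu_A(B)=B$. Let $\nu_B$ be a Nakayama automorphism of $B$ and $\beta=\nu_B\circ\nu_A^{-1}$ (restricted to $B$). Then $A$ is a $W$-Frobenius extension of $B$, where $W={}_\beta B\otimes_kQ'\otimes_kP$.
   Context: For an invertible (finitely generated projective rank-one) $k$-module $P$, a $k$-algebra $A$ is $P$-Frobenius if it is finitely generated projective over $k$ and $A_A\cong\mathrm{Hom}_k(A,P)_A$ as right $A$-modules, where $\mathrm{Hom}_k(A,P)$ is an $A$-bimodule via $(bfc)(a)=f(cab)$. A Frobenius homomorphism is $\phi\in\mathrm{Hom}_k(A,P)$ such that $a\mapsto\phi a$ is such an isomorphism; its Nakayama automorphism is the algebra automorphism $\nu$ with $a\phi=\phi\nu(a)$, i.e. $\phi(xa)=\phi(\nu(a)x)$ for all $a,x$; a Nakayama automorphism of $A$ is one arising from some Frobenius homomorphism. ${}_\beta B$ denotes $B$ with right regular action and left action $b\cdot x=\beta(b)x$; $W$ is a $B$-bimodule via its first factor. For a subring $B\subseteq A$ and an invertible $B$-bimodule $W$, $A$ is a $W$-Frobenius extension of $B$ if $A_B$ is finitely generated projective and ${}_BA_A\cong{}_B\mathrm{Hom}_B(A_B,W_B)_A$, where $(bfa)(x)=bf(ax)$.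 *)

theory Defs
  imports Main
begin

record ('k, 'm) kmod =
  carr  :: "'m set"
  addm  :: "'m \<Rightarrow> 'm \<Rightarrow> 'm"
  zerom :: "'m"
  smulm :: "'k \<Rightarrow> 'm \<Rightarrow> 'm"

record ('k, 'a) kalg = "('k, 'a) kmod" +
  mulm :: "'a \<Rightarrow> 'a \<Rightarrow> 'a"
  onem :: "'a"

definition kmodule :: "('k::comm_ring_1, 'm, 'z) kmod_scheme \<Rightarrow> bool" where
  "kmodule M \<longleftrightarrow>
     zerom M \<in> carr M \<and>
     (\<forall>x\<in>carr M. \<forall>y\<in>carr M. addm M x y \<in> carr M) \<and>
     (\<forall>r. \<forall>x\<in>carr M. smulm M r x \<in> carr M) \<and>
     (\<forall>x\<in>carr M. \<forall>y\<in>carr M. \<forall>z\<in>carr M. addm M (addm M x y) z = addm M x (addm M y z)) \<and>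
     (\<forall>x\<in>carr M. \<forall>y\<in>carr M. addm M x y = addm M y x) \<and>
     (\<forall>x\<in>carr M. addm M (zerom M) x = x) \<and>
     (\<forall>x\<in>carr M. \<exists>y\<in>carr M. addm M x y = zerom M) \<and>
     (\<forall>r. \<forall>x\<in>carr M. \<forall>y\<in>carr M. smulm M r (addm M x y) = addm M (smulm M r x) (smulm M r y)) \<and>
     (\<forall>r s. \<forall>x\<in>carr M. smulm M (r + s) x = addm M (smulm M r x) (smulm M s x)) \<and>
     (\<forall>r s. \<forall>x\<in>carr M. smulm M (r * s) x = smulm M r (smulm M s x)) \<and>
     (\<forall>x\<in>carr M. smulm M 1 x = x)"

text \<open>k-linear maps, and the set Hom_k(M,N) (maps are made extensional: zero off the carrier).\<close>

definition klinear :: "('k::comm_ring_1, 'm, 'z1) kmod_scheme \<Rightarrow> ('k, 'n, 'z2) kmod_scheme \<Rightarrow> ('m \<Rightarrow> 'n) \<Rightarrow> bool" where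
  "klinear M N f \<longleftrightarrow>
     (\<forall>x\<in>carr M. f x \<in> carr N) \<and>
     (\<forall>x\<in>carr M. \<forall>y\<in>carr M. f (addm M x y) = addm N (f x) (f y)) \<and>
     (\<forall>r. \<forall>x\<in>carr M. f (smulm M r x) = smulm N r (f x))"

definition homk :: "('k::comm_ring_1, 'm, 'z1) kmod_scheme \<Rightarrow> ('k, 'n, 'z2) kmod_scheme \<Rightarrow> ('m \<Rightarrow> 'n) set" where
  "homk M N = {f. klinear M N f \<and> (\<forall>x. x \<notin> carr M \<longrightarrow> f x = zerom N)}"

definition kring :: "('k::comm_ring_1, 'k) kmod" where
  "kring = \<lparr>carr = UNIV, addm = (+), zerom = 0, smulm = (*)\<rparr>"

definition kdual :: "('k::comm_ring_1, 'm, 'z) kmod_scheme \<Rightarrow> ('k, 'm \<Rightarrow> 'k) kmod" where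
  "kdual M = \<lparr>carr = homk M kring, addm = (\<lambda>f g x. f x + g x), zerom = (\<lambda>x. 0),
              smulm = (\<lambda>r f x. r * f x)\<rparr>"

primrec msum :: "('m \<Rightarrow> 'm \<Rightarrow> 'm) \<Rightarrow> 'm \<Rightarrow> (nat \<Rightarrow> 'm) \<Rightarrow> nat \<Rightarrow> 'm" where
  "msum ad z f 0 = z"
| "msum ad z f (Suc n) = ad (msum ad z f n) (f n)"

text \<open>Finitely generated projective k-module (dual basis lemma form: direct summand of k^n).\<close>

definition kfgp :: "('k::comm_ring_1, 'm, 'z) kmod_scheme \<Rightarrow> bool" where
  "kfgp M \<longleftrightarrow> (\<exists>n x \<phi>. (\<forall>i<n. x i \<in> carr M \<and> \<phi> i \<in> homk M kring) \<and>
      (\<forall>y\<in>carr M. y = msum (addm M) (zerom M) (\<lambda>i. smulm M (\<phi> i y) (x i)) n))"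

text \<open>Invertible k-module: finitely generated projective of constant rank one.  For a finitely
  generated projective module P this is equivalent to the structure map k \<rightarrow> End_k(P)
  being bijective (checked locally: k_p \<rightarrow> M_n(k_p) is bijective iff n = 1).\<close>

definition invertible_kmod :: "('k::comm_ring_1, 'm, 'z) kmod_scheme \<Rightarrow> bool" where
  "invertible_kmod P \<longleftrightarrow> kmodule P \<and> kfgp P \<and>
     bij_betw (\<lambda>r x. if x \<in> carr P then smulm P r x else zerom P) UNIV (homk P P)"

definition kalgebra :: "('k::comm_ring_1, 'a, 'z) kalg_scheme \<Rightarrow> bool" where
  "kalgebra A \<longleftrightarrow> kmodule A \<and> onem A \<in> carr A \<and>
     (\<forall>x\<in>carr A. \<forall>y\<in>carr A. mulm A x y \<in> carr A) \<and>
     (\<forall>x\<in>carr A. \<forall>y\<in>carr A. \<forall>z\<in>carr A. mulm A (mulm A x y) z = mulm A x (mulm A y z)) \<and>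
     (\<forall>x\<in>carr A. mulm A (onem A) x = x \<and> mulm A x (onem A) = x) \<and>
     (\<forall>x\<in>carr A. \<forall>y\<in>carr A. \<forall>z\<in>carr A.
        mulm A x (addm A y z) = addm A (mulm A x y) (mulm A x z) \<and>
        mulm A (addm A y z) x = addm A (mulm A y x) (mulm A z x)) \<and>
     (\<forall>r. \<forall>x\<in>carr A. \<forall>y\<in>carr A.
        smulm A r (mulm A x y) = mulm A (smulm A r x) y \<and>
        smulm A r (mulm A x y) = mulm A x (smulm A r y))"

definition subalgebra :: "('k::comm_ring_1, 'a, 'z1) kalg_scheme \<Rightarrow> ('k, 'a, 'z2) kalg_scheme \<Rightarrow> bool" where
  "subalgebra B A \<longleftrightarrow> kalgebra A \<and> kalgebra B \<and> carr B \<subseteq> carr A \<and>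
     zerom B = zerom A \<and> onem B = onem A \<and>
     (\<forall>x\<in>carr B. \<forall>y\<in>carr B. addm B x y = addm A x y \<and> mulm B x y = mulm A x y) \<and>
     (\<forall>r. \<forall>x\<in>carr B. smulm B r x = smulm A r x)"

definition alg_aut :: "('k::comm_ring_1, 'a, 'z) kalg_scheme \<Rightarrow> ('a \<Rightarrow> 'a) \<Rightarrow> bool" where
  "alg_aut A \<nu> \<longleftrightarrow> bij_betw \<nu> (carr A) (carr A) \<and> \<nu> (onem A) = onem A \<and>
     (\<forall>x\<in>carr A. \<forall>y\<in>carr A. \<nu> (addm A x y) = addm A (\<nu> x) (\<nu> y) \<and>
                              \<nu> (mulm A x y) = mulm A (\<nu> x) (\<nu> y)) \<and>
     (\<forall>r. \<forall>x\<in>carr A. \<nu> (smulm A r x) = smulm A r (\<nu> x))"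

definition hom_ract :: "('k::comm_ring_1, 'a, 'z1) kalg_scheme \<Rightarrow> ('k, 'p, 'z2) kmod_scheme \<Rightarrow>
    ('a \<Rightarrow> 'p) \<Rightarrow> 'a \<Rightarrow> ('a \<Rightarrow> 'p)" where
  "hom_ract A P f c = (\<lambda>a. if a \<in> carr A then f (mulm A c a) else zerom P)"

text \<open>P-Frobenius algebra: A is f.g. projective over k and A_A \<cong> Hom_k(A,P)_A.\<close>

definition frobenius :: "('k::comm_ring_1, 'a, 'z1) kalg_scheme \<Rightarrow> ('k, 'p, 'z2) kmod_scheme \<Rightarrow> bool" where
  "frobenius A P \<longleftrightarrow> kalgebra A \<and> kmodule P \<and> kfgp A \<and>
     (\<exists>h. bij_betw h (carr A) (homk A P) \<and>
        (\<forall>x\<in>carr A. \<forall>y\<in>carr A. h (addm A x y) =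
              (\<lambda>a. if a \<in> carr A then addm P (h x a) (h y a) else zerom P)) \<and>
        (\<forall>x\<in>carr A. \<forall>c\<in>carr A. h (mulm A x c) = hom_ract A P (h x) c))"

text \<open>Frobenius homomorphism: a \<mapsto> \<phi> a is such an isomorphism (it is automatically additive
  and right A-linear).\<close>

definition frobenius_hom :: "('k::comm_ring_1, 'a, 'z1) kalg_scheme \<Rightarrow> ('k, 'p, 'z2) kmod_scheme \<Rightarrow>
    ('a \<Rightarrow> 'p) \<Rightarrow> bool" where
  "frobenius_hom A P \<phi> \<longleftrightarrow> \<phi> \<in> homk A P \<and> bij_betw (hom_ract A P \<phi>) (carr A) (homk A P)"

definition nakayama_aut :: "('k::comm_ring_1, 'a, 'z1) kalg_scheme \<Rightarrow> ('k, 'p, 'z2) kmod_scheme \<Rightarrow>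
    ('a \<Rightarrow> 'a) \<Rightarrow> bool" where
  "nakayama_aut A P \<nu> \<longleftrightarrow> (\<exists>\<phi>. frobenius_hom A P \<phi> \<and> alg_aut A \<nu> \<and>
      (\<forall>a\<in>carr A. \<forall>x\<in>carr A. \<phi> (mulm A x a) = \<phi> (mulm A (\<nu> a) x)))"

record ('m, 'b) bimod =
  bcarr :: "'m set"
  badd  :: "'m \<Rightarrow> 'm \<Rightarrow> 'm"
  bzero :: "'m"
  lact  :: "'b \<Rightarrow> 'm \<Rightarrow> 'm"
  ract  :: "'m \<Rightarrow> 'b \<Rightarrow> 'm"

definition bimodule :: "('k::comm_ring_1, 'b, 'z1) kalg_scheme \<Rightarrow> ('m, 'b, 'z2) bimod_scheme \<Rightarrow> bool" where
  "bimodule B W \<longleftrightarrow>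
     bzero W \<in> bcarr W \<and>
     (\<forall>x\<in>bcarr W. \<forall>y\<in>bcarr W. badd W x y \<in> bcarr W) \<and>
     (\<forall>x\<in>bcarr W. \<forall>y\<in>bcarr W. \<forall>z\<in>bcarr W. badd W (badd W x y) z = badd W x (badd W y z)) \<and>
     (\<forall>x\<in>bcarr W. \<forall>y\<in>bcarr W. badd W x y = badd W y x) \<and>
     (\<forall>x\<in>bcarr W. badd W (bzero W) x = x) \<and>
     (\<forall>x\<in>bcarr W. \<exists>y\<in>bcarr W. badd W x y = bzero W) \<and>
     (\<forall>b\<in>carr B. \<forall>x\<in>bcarr W. lact W b x \<in> bcarr W \<and> ract W x b \<in> bcarr W) \<and>
     (\<forall>b\<in>carr B. \<forall>x\<in>bcarr W. \<forall>y\<in>bcarr W.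
        lact W b (badd W x y) = badd W (lact W b x) (lact W b y) \<and>
        ract W (badd W x y) b = badd W (ract W x b) (ract W y b)) \<and>
     (\<forall>b\<in>carr B. \<forall>c\<in>carr B. \<forall>x\<in>bcarr W.
        lact W (addm B b c) x = badd W (lact W b x) (lact W c x) \<and>
        ract W x (addm B b c) = badd W (ract W x b) (ract W x c) \<and>
        lact W (mulm B b c) x = lact W b (lact W c x) \<and>
        ract W x (mulm B b c) = ract W (ract W x b) c \<and>
        lact W b (ract W x c) = ract W (lact W b x) c) \<and>
     (\<forall>x\<in>bcarr W. lact W (onem B) x = x \<and> ract W x (onem B) = x)"

definition alg_bimod :: "('k, 'a, 'z) kalg_scheme \<Rightarrow> ('a, 'a) bimod" where
  "alg_bimod A = \<lparr>bcarr = carr A, badd = addm A, bzero = zerom A, lact = mulm A, ract = mulm A\<rparr>"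

definition rhom :: "('k::comm_ring_1, 'b, 'z1) kalg_scheme \<Rightarrow> ('m, 'b, 'z2) bimod_scheme \<Rightarrow>
    ('n, 'b, 'z3) bimod_scheme \<Rightarrow> ('m \<Rightarrow> 'n) set" where
  "rhom B M N = {f. (\<forall>x\<in>bcarr M. f x \<in> bcarr N) \<and>
      (\<forall>x\<in>bcarr M. \<forall>y\<in>bcarr M. f (badd M x y) = badd N (f x) (f y)) \<and>
      (\<forall>x\<in>bcarr M. \<forall>b\<in>carr B. f (ract M x b) = ract N (f x) b) \<and>
      (\<forall>x. x \<notin> bcarr M \<longrightarrow> f x = bzero N)}"

definition rfgp :: "('k::comm_ring_1, 'b, 'z1) kalg_scheme \<Rightarrow> ('m, 'b, 'z2) bimod_scheme \<Rightarrow> bool" where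
  "rfgp B M \<longleftrightarrow> (\<exists>n x \<phi>. (\<forall>i<n. x i \<in> bcarr M \<and> \<phi> i \<in> rhom B M (alg_bimod B)) \<and>
      (\<forall>y\<in>bcarr M. y = msum (badd M) (bzero M) (\<lambda>i. ract M (x i) (\<phi> i y)) n))"

text \<open>Invertible B-bimodule (Morita characterisation): W_B is a progenerator and the left
  action B \<rightarrow> End(W_B) is bijective.\<close>

definition invertible_bimod :: "('k::comm_ring_1, 'b, 'z1) kalg_scheme \<Rightarrow> ('m, 'b, 'z2) bimod_scheme \<Rightarrow> bool" where
  "invertible_bimod B W \<longleftrightarrow> bimodule B W \<and> rfgp B W \<and>
     (\<exists>n w f. (\<forall>i<n. w i \<in> bcarr W \<and> f i \<in> rhom B W (alg_bimod B)) \<and>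
         msum (addm B) (zerom B) (\<lambda>i. f i (w i)) n = onem B) \<and>
     bij_betw (\<lambda>b x. if x \<in> bcarr W then lact W b x else bzero W) (carr B) (rhom B W W)"

text \<open>A is a W-Frobenius extension of B: A_B f.g. projective and
  {}_B A_A \<cong> {}_B Hom_B(A_B, W_B)_A with (b f a)(x) = b f(a x).\<close>

definition frobenius_ext :: "('k::comm_ring_1, 'a, 'z1) kalg_scheme \<Rightarrow> ('k, 'a, 'z2) kalg_scheme \<Rightarrow>
    ('m, 'a, 'z3) bimod_scheme \<Rightarrow> bool" where
  "frobenius_ext B A W \<longleftrightarrow> subalgebra B A \<and> invertible_bimod B W \<and>
     rfgp B (alg_bimod A) \<and>
     (\<exists>H. bij_betw H (carr A) (rhom B (alg_bimod A) W) \<and>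
        (\<forall>x\<in>carr A. \<forall>y\<in>carr A. H (addm A x y) =
            (\<lambda>z. if z \<in> carr A then badd W (H x z) (H y z) else bzero W)) \<and>
        (\<forall>b\<in>carr B. \<forall>x\<in>carr A. \<forall>a\<in>carr A.
            H (mulm A (mulm A b x) a) =
            (\<lambda>z. if z \<in> carr A then lact W b (H x (mulm A a z)) else bzero W)))"

section \<open>Tensor products over k (free module on M \<times> N modulo bilinearity relations)\<close>

definition tdelta :: "'m \<times> 'n \<Rightarrow> ('m \<times> 'n \<Rightarrow> 'k::comm_ring_1)" where
  "tdelta z = (\<lambda>w. if w = z then 1 else 0)"

definition tfree :: "('k::comm_ring_1, 'm, 'z1) kmod_scheme \<Rightarrow> ('k, 'n, 'z2) kmod_scheme \<Rightarrow>
    ('m \<times> 'n \<Rightarrow> 'k) set" where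
  "tfree M N = {u. finite {z. u z \<noteq> 0} \<and> {z. u z \<noteq> 0} \<subseteq> carr M \<times> carr N}"

definition tgens :: "('k::comm_ring_1, 'm, 'z1) kmod_scheme \<Rightarrow> ('k, 'n, 'z2) kmod_scheme \<Rightarrow>
    ('m \<times> 'n \<Rightarrow> 'k) set" where
  "tgens M N =
     {(\<lambda>z. tdelta (addm M m m', n) z - tdelta (m, n) z - tdelta (m', n) z) | m m' n.
         m \<in> carr M \<and> m' \<in> carr M \<and> n \<in> carr N} \<union>
     {(\<lambda>z. tdelta (m, addm N n n') z - tdelta (m, n) z - tdelta (m, n') z) | m n n'.
         m \<in> carr M \<and> n \<in> carr N \<and> n' \<in> carr N} \<union>
     {(\<lambda>z. tdelta (smulm M r m, n) z - r * tdelta (m, n) z) | r m n.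
         m \<in> carr M \<and> n \<in> carr N} \<union>
     {(\<lambda>z. tdelta (m, smulm N r n) z - r * tdelta (m, n) z) | r m n.
         m \<in> carr M \<and> n \<in> carr N}"

definition tspan :: "('k::comm_ring_1, 'm, 'z1) kmod_scheme \<Rightarrow> ('k, 'n, 'z2) kmod_scheme \<Rightarrow>
    ('m \<times> 'n \<Rightarrow> 'k) set" where
  "tspan M N = {(\<lambda>z. \<Sum>i<(n::nat). c i * g i z) | n c g. \<forall>i<n. g i \<in> tgens M N}"

definition tcoset :: "('k::comm_ring_1, 'm, 'z1) kmod_scheme \<Rightarrow> ('k, 'n, 'z2) kmod_scheme \<Rightarrow>
    ('m \<times> 'n \<Rightarrow> 'k) \<Rightarrow> ('m \<times> 'n \<Rightarrow> 'k) set" where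
  "tcoset M N u = {(\<lambda>z. u z + v z) | v. v \<in> tspan M N}"

definition tensor :: "('k::comm_ring_1, 'm, 'z1) kmod_scheme \<Rightarrow> ('k, 'n, 'z2) kmod_scheme \<Rightarrow>
    ('k, ('m \<times> 'n \<Rightarrow> 'k) set) kmod" where
  "tensor M N = \<lparr>carr = tcoset M N ` tfree M N,
     addm = (\<lambda>X Y. {(\<lambda>z. x z + y z) | x y. x \<in> X \<and> y \<in> Y}),
     zerom = tspan M N,
     smulm = (\<lambda>r X. {(\<lambda>z. r * x z + v z) | x v. x \<in> X \<and> v \<in> tspan M N})\<rparr>"

text \<open>f \<otimes> g : M \<otimes> N \<rightarrow> M' \<otimes> N' for k-linear f, g (computed on a representative).\<close>

definition tmap :: "('k::comm_ring_1, 'm2, 'z1) kmod_scheme \<Rightarrow> ('k, 'n2, 'z2) kmod_scheme \<Rightarrow>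
    ('m \<Rightarrow> 'm2) \<Rightarrow> ('n \<Rightarrow> 'n2) \<Rightarrow> ('m \<times> 'n \<Rightarrow> 'k) set \<Rightarrow> ('m2 \<times> 'n2 \<Rightarrow> 'k) set" where
  "tmap M' N' f g X = (let u = (SOME u. u \<in> X) in
     tcoset M' N' (\<lambda>w. \<Sum>z\<in>{z. u z \<noteq> 0 \<and> (f (fst z), g (snd z)) = w}. u z))"

text \<open>W = (beta-twisted B) \<otimes>_k Q \<otimes>_k P as a B-bimodule via its first factor:
  b (x \<otimes> q \<otimes> p) c = \<beta>(b) x c \<otimes> q \<otimes> p.\<close>

definition W_bimod :: "('k::comm_ring_1, 'b, 'z1) kalg_scheme \<Rightarrow> ('b \<Rightarrow> 'b) \<Rightarrow>
    ('k, 'q, 'z2) kmod_scheme \<Rightarrow> ('k, 'p, 'z3) kmod_scheme \<Rightarrow>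
    (((('b \<times> 'q \<Rightarrow> 'k) set) \<times> 'p \<Rightarrow> 'k) set, 'b) bimod" where
  "W_bimod B \<beta> Q P =
     (let BQ = tensor B Q; W = tensor BQ P in
      \<lparr>bcarr = carr W, badd = addm W, bzero = zerom W,
       lact = (\<lambda>b w. tmap BQ P (tmap B Q (\<lambda>x. mulm B (\<beta> b) x) id) id w),
       ract = (\<lambda>w c. tmap BQ P (tmap B Q (\<lambda>x. mulm B x c) id) id w)\<rparr>)"

end

(*
  Fix Frobenius homomorphisms phi of A and psi of B with Nakayama automorphisms nuA and nuB, and
  write W = B (x) Q (x) P with Q the dual of P'.  Since c |-> psi(x c) runs through Hom(B, P') exactly
  once as x runs through B, the evaluation x (x) q (x) p |-> q(psi x) p identifies W with Hom(B, P),
  the right action of B becoming precomposition with left multiplication.  The twisted left action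
  by beta = nuB o nuA^-1 becomes precomposition with right multiplication, because psi(b x) = psi(x nuB^-1 b)
  -- this is where the two Nakayama automorphisms meet.  The map sending a to z |-> (c |-> phi(a z c))
  is then a bimodule map from A to Hom_B(A, W), bijective because phi is a Frobenius homomorphism.
  Finally W is invertible: dual bases of P and Q give a dual basis of W over B, the generator property
  of P and P' gives a generator, and every right B-linear endomorphism of W is a left multiplication
  because every bilinear form on Q x P' is a multiple of evaluation.
*)

theory Submission
  imports Defs "HOL-Algebra.FiniteProduct"
begin

section \<open>Modules and finite sums\<close>

definition add_monoid :: "('k::comm_ring_1, 'm, 'z) kmod_scheme \<Rightarrow> 'm monoid" where
  "add_monoid M = \<lparr>carrier = carr M, mult = addm M, one = zerom M\<rparr>"

definition ksum :: "('k::comm_ring_1, 'm, 'z) kmod_scheme \<Rightarrow> ('i \<Rightarrow> 'm) \<Rightarrow> 'i set \<Rightarrow> 'm" where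
  "ksum M f A = finprod (add_monoid M) f A"

locale k_module =
  fixes M :: "('k::comm_ring_1, 'm, 'z) kmod_scheme"
  assumes kmod: "kmodule M"
begin

lemma zero_closed [simp, intro]: "zerom M \<in> carr M"
  using kmod unfolding kmodule_def by (elim conjE) blast
lemma add_closed [simp, intro]: "x \<in> carr M \<Longrightarrow> y \<in> carr M \<Longrightarrow> addm M x y \<in> carr M"
  using kmod unfolding kmodule_def by (elim conjE) blast
lemma smul_closed [simp, intro]: "x \<in> carr M \<Longrightarrow> smulm M r x \<in> carr M"
  using kmod unfolding kmodule_def by (elim conjE) blast
lemma add_assoc:
  "x \<in> carr M \<Longrightarrow> y \<in> carr M \<Longrightarrow> z \<in> carr M \<Longrightarrow> addm M (addm M x y) z = addm M x (addm M y z)"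
  using kmod unfolding kmodule_def by (elim conjE) blast
lemma add_comm: "x \<in> carr M \<Longrightarrow> y \<in> carr M \<Longrightarrow> addm M x y = addm M y x"
  using kmod unfolding kmodule_def by (elim conjE) blast
lemma zero_add [simp]: "x \<in> carr M \<Longrightarrow> addm M (zerom M) x = x"
  using kmod unfolding kmodule_def by (elim conjE) blast
lemma add_zero [simp]: "x \<in> carr M \<Longrightarrow> addm M x (zerom M) = x"
  using add_comm zero_add by simp
lemma neg_ex: "x \<in> carr M \<Longrightarrow> \<exists>y\<in>carr M. addm M x y = zerom M"
  using kmod unfolding kmodule_def by (elim conjE) blast
lemma smul_add: "x \<in> carr M \<Longrightarrow> y \<in> carr M \<Longrightarrow> smulm M r (addm M x y) = addm M (smulm M r x) (smulm M r y)"
  using kmod unfolding kmodule_def by (elim conjE) blast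
lemma add_smul: "x \<in> carr M \<Longrightarrow> smulm M (r + s) x = addm M (smulm M r x) (smulm M s x)"
  using kmod unfolding kmodule_def by (elim conjE) blast
lemma smul_smul: "x \<in> carr M \<Longrightarrow> smulm M (r * s) x = smulm M r (smulm M s x)"
  using kmod unfolding kmodule_def by (elim conjE) blast
lemma one_smul [simp]: "x \<in> carr M \<Longrightarrow> smulm M 1 x = x"
  using kmod unfolding kmodule_def by auto

lemma add_lcomm:
  "x \<in> carr M \<Longrightarrow> y \<in> carr M \<Longrightarrow> z \<in> carr M \<Longrightarrow> addm M x (addm M y z) = addm M y (addm M x z)"
  by (metis add_assoc add_comm)

lemma add_left_cancel:
  assumes "x \<in> carr M" "y \<in> carr M" "z \<in> carr M" "addm M x y = addm M x z"
  shows "y = z"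
proof -
  obtain n where n: "n \<in> carr M" "addm M n x = zerom M"
    using neg_ex assms add_comm by metis
  have "y = addm M (addm M n x) y" using n assms by simp
  also have "\<dots> = addm M (addm M n x) z" using add_assoc assms n by metis
  also have "\<dots> = z" using n assms by simp
  finally show ?thesis .
qed

lemma add_eq_self: "x \<in> carr M \<Longrightarrow> y \<in> carr M \<Longrightarrow> addm M x y = x \<Longrightarrow> y = zerom M"
  using add_left_cancel[of x y "zerom M"] by simp

lemma zero_smul [simp]: "x \<in> carr M \<Longrightarrow> smulm M 0 x = zerom M"
  using add_smul[of x 0 0] add_eq_self[of "smulm M 0 x" "smulm M 0 x"] by simp

lemma smul_zero [simp]: "smulm M r (zerom M) = zerom M"
  using smul_add[of "zerom M" "zerom M" r] add_eq_self[of "smulm M r (zerom M)"] by simp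

lemma add_neg_smul: "x \<in> carr M \<Longrightarrow> addm M x (smulm M (-1) x) = zerom M"
  using add_smul[of x 1 "-1"] by simp

lemma add_add_swap: "a \<in> carr M \<Longrightarrow> b \<in> carr M \<Longrightarrow> c \<in> carr M \<Longrightarrow> d \<in> carr M \<Longrightarrow>
    addm M (addm M a b) (addm M c d) = addm M (addm M a c) (addm M b d)"
  by (simp add: add_assoc add_lcomm)

lemma comm_monoid_add_monoid: "comm_monoid (add_monoid M)"
  by unfold_locales (auto simp: add_monoid_def add_assoc add_comm add_lcomm)

lemma ksum_empty [simp]: "ksum M f {} = zerom M"
  unfolding ksum_def using comm_monoid.finprod_empty[OF comm_monoid_add_monoid]
  by (simp add: add_monoid_def)

lemma ksum_infinite: "\<not> finite A \<Longrightarrow> ksum M f A = zerom M"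
  unfolding ksum_def using comm_monoid.finprod_infinite[OF comm_monoid_add_monoid]
  by (simp add: add_monoid_def)

lemma ksum_closed [simp, intro]: "(\<And>i. i \<in> A \<Longrightarrow> f i \<in> carr M) \<Longrightarrow> ksum M f A \<in> carr M"
  unfolding ksum_def using comm_monoid.finprod_closed[OF comm_monoid_add_monoid, of f A]
  by (auto simp: add_monoid_def)

lemma ksum_insert: "finite A \<Longrightarrow> a \<notin> A \<Longrightarrow> f a \<in> carr M \<Longrightarrow> (\<And>i. i \<in> A \<Longrightarrow> f i \<in> carr M) \<Longrightarrow>
    ksum M f (insert a A) = addm M (f a) (ksum M f A)"
  unfolding ksum_def using comm_monoid.finprod_insert[OF comm_monoid_add_monoid, of A a f]
  by (auto simp: add_monoid_def)

lemma ksum_cong: "A = B \<Longrightarrow> (\<And>i. i \<in> B \<Longrightarrow> f i = g i) \<Longrightarrow> (\<And>i. i \<in> B \<Longrightarrow> g i \<in> carr M) \<Longrightarrow>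
    ksum M f A = ksum M g B"
  unfolding ksum_def using comm_monoid.finprod_cong'[OF comm_monoid_add_monoid, of A B g f]
  by (auto simp: add_monoid_def)

lemma ksum_add: "(\<And>i. i \<in> A \<Longrightarrow> f i \<in> carr M) \<Longrightarrow> (\<And>i. i \<in> A \<Longrightarrow> g i \<in> carr M) \<Longrightarrow>
    ksum M (\<lambda>i. addm M (f i) (g i)) A = addm M (ksum M f A) (ksum M g A)"
  unfolding ksum_def using comm_monoid.finprod_multf[OF comm_monoid_add_monoid, of f A g]
  by (auto simp: add_monoid_def)

lemma ksum_eq_add:
  assumes "\<And>i. i \<in> A \<Longrightarrow> h i = addm M (f i) (g i)"
    and "\<And>i. i \<in> A \<Longrightarrow> f i \<in> carr M" "\<And>i. i \<in> A \<Longrightarrow> g i \<in> carr M"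
  shows "ksum M h A = addm M (ksum M f A) (ksum M g A)"
  using assms by (subst ksum_cong[OF refl assms(1)]) (auto simp: ksum_add)

lemma ksum_Un: "finite A \<Longrightarrow> finite B \<Longrightarrow> A \<inter> B = {} \<Longrightarrow> (\<And>i. i \<in> A \<union> B \<Longrightarrow> f i \<in> carr M) \<Longrightarrow>
    ksum M f (A \<union> B) = addm M (ksum M f A) (ksum M f B)"
  unfolding ksum_def using comm_monoid.finprod_Un_disjoint[OF comm_monoid_add_monoid, of A B f]
  by (auto simp: add_monoid_def)

lemma ksum_reindex: "inj_on h A \<Longrightarrow> (\<And>i. i \<in> h ` A \<Longrightarrow> f i \<in> carr M) \<Longrightarrow>
    ksum M f (h ` A) = ksum M (f \<circ> h) A"
  unfolding ksum_def using comm_monoid.finprod_reindex[OF comm_monoid_add_monoid, of f h A]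
  by (auto simp: add_monoid_def comp_def)

lemma ksum_zero: "(\<And>i. i \<in> A \<Longrightarrow> f i = zerom M) \<Longrightarrow> ksum M f A = zerom M"
  unfolding ksum_def using comm_monoid.finprod_one_eqI[OF comm_monoid_add_monoid, of A f]
  by (auto simp: add_monoid_def)

lemma ksum_single [simp]: "f a \<in> carr M \<Longrightarrow> ksum M f {a} = f a"
  using ksum_insert[of "{}" a f] by simp

lemma ksum_smul: "(\<And>i. i \<in> A \<Longrightarrow> f i \<in> carr M) \<Longrightarrow>
    smulm M r (ksum M f A) = ksum M (\<lambda>i. smulm M r (f i)) A"
  by (induction A rule: infinite_finite_induct) (simp_all add: ksum_infinite ksum_insert smul_add)

lemma smul_sum: "x \<in> carr M \<Longrightarrow> smulm M (\<Sum>i\<in>A. c i) x = ksum M (\<lambda>i. smulm M (c i) x) A"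
  by (induction A rule: infinite_finite_induct) (simp_all add: ksum_infinite ksum_insert add_smul)

lemma ksum_product:
  assumes "finite A" "finite B" "\<And>a b. a \<in> A \<Longrightarrow> b \<in> B \<Longrightarrow> f (a, b) \<in> carr M"
  shows "ksum M f (A \<times> B) = ksum M (\<lambda>a. ksum M (\<lambda>b. f (a, b)) B) A"
  using assms
proof (induction A rule: finite_induct)
  case (insert a A)
  have split: "insert a A \<times> B = (\<lambda>b. (a, b)) ` B \<union> A \<times> B"
    and disjoint: "(\<lambda>b. (a, b)) ` B \<inter> A \<times> B = {}"
    using insert by auto
  have "ksum M f (insert a A \<times> B) = addm M (ksum M f ((\<lambda>b. (a, b)) ` B)) (ksum M f (A \<times> B))"
    unfolding split using insert disjoint by (intro ksum_Un) auto
  also have "ksum M f ((\<lambda>b. (a, b)) ` B) = ksum M (\<lambda>b. f (a, b)) B"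
    using insert by (subst ksum_reindex) (auto simp: inj_on_def comp_def)
  finally show ?case
    using insert by (simp add: ksum_insert)
qed simp

lemma msum_eq_ksum: "(\<And>i. i < n \<Longrightarrow> f i \<in> carr M) \<Longrightarrow> msum (addm M) (zerom M) f n = ksum M f {..<n}"
proof (induction n)
  case (Suc n)
  then have "ksum M f {..<Suc n} = addm M (f n) (ksum M f {..<n})"
    unfolding lessThan_Suc by (intro ksum_insert) auto
  moreover have "ksum M f {..<n} \<in> carr M"
    using Suc.prems by (intro ksum_closed) simp
  ultimately show ?case using Suc add_comm[of "f n" "ksum M f {..<n}"] by simp
qed simp

lemma ksum_eq_msum:
  assumes "bij_betw h {..<n} I" "\<And>i. i \<in> I \<Longrightarrow> f i \<in> carr M"
  shows "ksum M f I = msum (addm M) (zerom M) (f \<circ> h) n"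
proof -
  have "ksum M f I = ksum M (f \<circ> h) {..<n}"
    using assms ksum_reindex[of h "{..<n}" f] by (auto simp: bij_betw_def)
  also have "\<dots> = msum (addm M) (zerom M) (f \<circ> h) n"
    using assms bij_betwE by (intro msum_eq_ksum[symmetric]) fastforce
  finally show ?thesis .
qed

end

locale k_module_pair = M: k_module M + N: k_module N
  for M :: "('k::comm_ring_1, 'm, 'z1) kmod_scheme" and N :: "('k, 'n, 'z2) kmod_scheme"
begin

lemma linear_zero: "klinear M N f \<Longrightarrow> f (zerom M) = zerom N"
  unfolding klinear_def by (metis M.zero_closed M.add_zero N.add_eq_self)

lemma linear_ksum:
  assumes "klinear M N h" "\<And>i. i \<in> A \<Longrightarrow> f i \<in> carr M"
  shows "h (ksum M f A) = ksum N (\<lambda>i. h (f i)) A"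
  using assms(2)
proof (induction A rule: infinite_finite_induct)
  case (infinite A)
  then show ?case using linear_zero[OF assms(1)] by (simp add: M.ksum_infinite N.ksum_infinite)
next
  case empty
  then show ?case using linear_zero[OF assms(1)] by simp
next
  case (insert x F)
  with assms(1) show ?case unfolding klinear_def by (simp add: M.ksum_insert N.ksum_insert)
qed

end

section \<open>Tensor products and their universal property\<close>

lemma sum_lessThan_add: "(\<Sum>i<(n::nat)+m. f i) = (\<Sum>i<n. f i) + (\<Sum>i<m. f (i + n))"
  by (induction m) (simp_all add: ac_simps)

definition tens :: "('k::comm_ring_1, 'm, 'z1) kmod_scheme \<Rightarrow> ('k, 'n, 'z2) kmod_scheme \<Rightarrow>
    'm \<Rightarrow> 'n \<Rightarrow> ('m \<times> 'n \<Rightarrow> 'k) set" where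
  "tens M N m n = tcoset M N (tdelta (m, n))"

definition supp :: "('x \<Rightarrow> 'k::zero) \<Rightarrow> 'x set" where
  "supp u = {z. u z \<noteq> 0}"

definition bilinear :: "('k::comm_ring_1, 'm, 'z1) kmod_scheme \<Rightarrow> ('k, 'n, 'z2) kmod_scheme \<Rightarrow>
    ('k, 'l, 'z3) kmod_scheme \<Rightarrow> ('m \<Rightarrow> 'n \<Rightarrow> 'l) \<Rightarrow> bool" where
  "bilinear M N L f \<longleftrightarrow> (\<forall>m\<in>carr M. \<forall>n\<in>carr N. f m n \<in> carr L) \<and>
     (\<forall>m\<in>carr M. \<forall>m'\<in>carr M. \<forall>n\<in>carr N. f (addm M m m') n = addm L (f m n) (f m' n)) \<and>
     (\<forall>m\<in>carr M. \<forall>n\<in>carr N. \<forall>n'\<in>carr N. f m (addm N n n') = addm L (f m n) (f m n')) \<and>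
     (\<forall>r. \<forall>m\<in>carr M. \<forall>n\<in>carr N. f (smulm M r m) n = smulm L r (f m n)) \<and>
     (\<forall>r. \<forall>m\<in>carr M. \<forall>n\<in>carr N. f m (smulm N r n) = smulm L r (f m n))"

definition free_lift :: "('k::comm_ring_1, 'l, 'z) kmod_scheme \<Rightarrow> ('m \<Rightarrow> 'n \<Rightarrow> 'l) \<Rightarrow>
    ('m \<times> 'n \<Rightarrow> 'k) \<Rightarrow> 'l" where
  "free_lift L f u = ksum L (\<lambda>z. smulm L (u z) (f (fst z) (snd z))) (supp u)"

text \<open>The linear map induced by f, evaluated on an arbitrary representative of the class;
  independence of the choice is free_lift_tspan.\<close>

definition tensor_lift :: "('k::comm_ring_1, 'l, 'z) kmod_scheme \<Rightarrow> ('m \<Rightarrow> 'n \<Rightarrow> 'l) \<Rightarrow>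
    ('m \<times> 'n \<Rightarrow> 'k) set \<Rightarrow> 'l" where
  "tensor_lift L f X = free_lift L f (SOME u. u \<in> X)"

context k_module_pair
begin

abbreviation "S \<equiv> tspan M N"
abbreviation "T \<equiv> tensor M N"

lemma tspan_iff:
  "u \<in> S \<longleftrightarrow> (\<exists>(n::nat) c g. u = (\<lambda>z. \<Sum>i<n. c i * g i z) \<and> (\<forall>i<n. g i \<in> tgens M N))"
  unfolding tspan_def by (simp add: eq_commute)

lemma tspan_zero: "(\<lambda>z. 0) \<in> S"
  unfolding tspan_iff by (rule exI[of _ 0]) auto

lemma tspan_add:
  assumes "u \<in> S" "v \<in> S"
  shows "(\<lambda>z. u z + v z) \<in> S"
proof -
  obtain n1 :: nat and c1 g1 where 1: "u = (\<lambda>z. \<Sum>i<n1. c1 i * g1 i z)" "\<forall>i<n1. g1 i \<in> tgens M N"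
    using assms(1) tspan_iff by blast
  obtain n2 :: nat and c2 g2 where 2: "v = (\<lambda>z. \<Sum>i<n2. c2 i * g2 i z)" "\<forall>i<n2. g2 i \<in> tgens M N"
    using assms(2) tspan_iff by blast
  define c where "c i = (if i < n1 then c1 i else c2 (i - n1))" for i
  define g where "g i = (if i < n1 then g1 i else g2 (i - n1))" for i
  have "(\<lambda>z. u z + v z) = (\<lambda>z. \<Sum>i<n1+n2. c i * g i z)"
    unfolding 1 2 sum_lessThan_add c_def g_def by auto
  moreover have "\<forall>i<n1+n2. g i \<in> tgens M N"
    using 1 2 unfolding g_def by auto
  ultimately show ?thesis
    unfolding tspan_iff by blast
qed

lemma tspan_smul:
  assumes "u \<in> S"
  shows "(\<lambda>z. r * u z) \<in> S"
proof -
  obtain n :: nat and c g where 1: "u = (\<lambda>z. \<Sum>i<n. c i * g i z)" "\<forall>i<n. g i \<in> tgens M N"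
    using assms tspan_iff by blast
  then have "(\<lambda>z. r * u z) = (\<lambda>z. \<Sum>i<n. (r * c i) * g i z)"
    by (auto simp: sum_distrib_left mult.assoc)
  with 1 show ?thesis
    unfolding tspan_iff by (intro exI[of _ n] exI[of _ "\<lambda>i. r * c i"] exI[of _ g]) simp
qed

lemma tspan_gen: "g \<in> tgens M N \<Longrightarrow> g \<in> S"
  unfolding tspan_iff by (intro exI[of _ "1::nat"] exI[of _ "\<lambda>_. 1"] exI[of _ "\<lambda>_. g"]) auto

lemma tspan_diff: "u \<in> S \<Longrightarrow> v \<in> S \<Longrightarrow> (\<lambda>z. u z - v z) \<in> S"
  using tspan_add[of u "\<lambda>z. (-1) * v z"] tspan_smul[of v "-1"] by simp

lemma tfree_iff: "u \<in> tfree M N \<longleftrightarrow> finite (supp u) \<and> supp u \<subseteq> carr M \<times> carr N"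
  unfolding tfree_def supp_def by simp

lemma tfree_zero: "(\<lambda>z. 0) \<in> tfree M N"
  unfolding tfree_def by simp

lemma tfree_add:
  assumes "u \<in> tfree M N" "v \<in> tfree M N"
  shows "(\<lambda>z. u z + v z) \<in> tfree M N"
proof -
  have "supp (\<lambda>z. u z + v z) \<subseteq> supp u \<union> supp v"
    unfolding supp_def by auto
  with assms show ?thesis
    unfolding tfree_iff by (meson finite_Un infinite_super le_sup_iff subset_trans)
qed

lemma tfree_smul:
  assumes "u \<in> tfree M N"
  shows "(\<lambda>z. r * u z) \<in> tfree M N"
proof -
  have "supp (\<lambda>z. r * u z) \<subseteq> supp u"
    unfolding supp_def by auto
  with assms show ?thesis
    unfolding tfree_iff by (meson infinite_super subset_trans)
qed

lemma tfree_diff: "u \<in> tfree M N \<Longrightarrow> v \<in> tfree M N \<Longrightarrow> (\<lambda>z. u z - v z) \<in> tfree M N"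
  using tfree_add[of u "\<lambda>z. (-1) * v z"] tfree_smul[of v "-1"] by simp

lemma supp_tdelta: "supp (tdelta z) = {z}"
  unfolding supp_def tdelta_def by auto

lemma tfree_delta: "m \<in> carr M \<Longrightarrow> n \<in> carr N \<Longrightarrow> tdelta (m, n) \<in> tfree M N"
  unfolding tfree_iff supp_tdelta by simp

lemma tfree_sum: "(\<And>i. i \<in> F \<Longrightarrow> g i \<in> tfree M N) \<Longrightarrow> (\<lambda>z. \<Sum>i\<in>F. c i * g i z) \<in> tfree M N"
  by (induction F rule: infinite_finite_induct) (simp_all add: tfree_zero tfree_add tfree_smul)

lemma tgens_tfree: "g \<in> tgens M N \<Longrightarrow> g \<in> tfree M N"
  unfolding tgens_def by (auto intro!: tfree_diff tfree_smul tfree_delta)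

lemma tspan_tfree: "u \<in> S \<Longrightarrow> u \<in> tfree M N"
  unfolding tspan_iff using tgens_tfree by (auto intro!: tfree_sum)

lemma tcoset_iff: "x \<in> tcoset M N u \<longleftrightarrow> (\<lambda>z. x z - u z) \<in> S"
  unfolding tcoset_def by (auto intro: exI[of _ "\<lambda>z. x z - u z"])

lemma tcoset_self: "u \<in> tcoset M N u"
  unfolding tcoset_iff using tspan_zero by simp

lemma tcoset_eq: "tcoset M N u = tcoset M N v \<longleftrightarrow> (\<lambda>z. u z - v z) \<in> S"
proof
  assume "tcoset M N u = tcoset M N v"
  then show "(\<lambda>z. u z - v z) \<in> S"
    using tcoset_self[of u] tcoset_iff by blast
next
  assume uv: "(\<lambda>z. u z - v z) \<in> S"
  show "tcoset M N u = tcoset M N v"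
  proof (auto simp: tcoset_iff)
    fix x assume "(\<lambda>z. x z - u z) \<in> S"
    from tspan_add[OF this uv] show "(\<lambda>z. x z - v z) \<in> S" by simp
  next
    fix x assume "(\<lambda>z. x z - v z) \<in> S"
    from tspan_diff[OF this uv] show "(\<lambda>z. x z - u z) \<in> S" by simp
  qed
qed

lemma tcoset_add_gen: "g \<in> tgens M N \<Longrightarrow> b = (\<lambda>z. a z + g z) \<Longrightarrow> tcoset M N b = tcoset M N a"
  unfolding tcoset_eq using tspan_gen by auto

lemma T_carr: "X \<in> carr T \<longleftrightarrow> (\<exists>u\<in>tfree M N. X = tcoset M N u)"
  by (auto simp: tensor_def)

lemma tcoset_closed: "u \<in> tfree M N \<Longrightarrow> tcoset M N u \<in> carr T"
  using T_carr by blast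

lemma T_zero: "zerom T = tcoset M N (\<lambda>z. 0)"
proof -
  have "tcoset M N (\<lambda>z. 0) = S" by (auto simp: tcoset_iff)
  then show ?thesis by (simp add: tensor_def)
qed

lemma T_add: "addm T (tcoset M N u) (tcoset M N v) = tcoset M N (\<lambda>z. u z + v z)"
proof (auto simp: tensor_def tcoset_iff)
  fix x y assume "(\<lambda>z. x z - u z) \<in> S" "(\<lambda>z. y z - v z) \<in> S"
  from tspan_add[OF this] show "(\<lambda>z. x z + y z - (u z + v z)) \<in> S"
    by (simp add: algebra_simps)
next
  fix w assume "(\<lambda>z. w z - (u z + v z)) \<in> S"
  then show "\<exists>x y. w = (\<lambda>z. x z + y z) \<and> (\<lambda>z. x z - u z) \<in> S \<and> (\<lambda>z. y z - v z) \<in> S"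
    using tspan_zero by (intro exI[of _ "\<lambda>z. w z - v z"] exI[of _ v]) (simp_all add: algebra_simps)
qed

lemma T_smul: "smulm T r (tcoset M N u) = tcoset M N (\<lambda>z. r * u z)"
proof (auto simp: tensor_def tcoset_iff)
  fix x v assume "(\<lambda>z. x z - u z) \<in> S" "v \<in> S"
  from tspan_add[OF tspan_smul[OF this(1), of r] this(2)]
  show "(\<lambda>z. r * x z + v z - r * u z) \<in> S"
    by (simp add: algebra_simps)
next
  fix w assume "(\<lambda>z. w z - r * u z) \<in> S"
  then show "\<exists>x v. w = (\<lambda>z. r * x z + v z) \<and> (\<lambda>z. x z - u z) \<in> S \<and> v \<in> S"
    using tspan_zero by (intro exI[of _ u] exI[of _ "\<lambda>z. w z - r * u z"]) simp_all
qed

lemma T_carrE: "X \<in> carr T \<Longrightarrow> (\<And>u. u \<in> tfree M N \<Longrightarrow> X = tcoset M N u \<Longrightarrow> P) \<Longrightarrow> P"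
  using T_carr by blast

lemma T_kmodule: "kmodule T"
proof -
  have mem: "\<And>u. u \<in> tfree M N \<Longrightarrow> tcoset M N u \<in> carr T"
    using T_carr by blast
  have neg: "\<exists>Y\<in>carr T. addm T X Y = zerom T" if X: "X \<in> carr T" for X
    using X
  proof (rule T_carrE)
    fix u assume "u \<in> tfree M N" "X = tcoset M N u"
    then show ?thesis
      using mem[OF tfree_smul, of u "-1"] by (intro bexI[of _ "tcoset M N (\<lambda>z. - u z)"]) (simp_all add: T_add T_zero)
  qed
  show ?thesis
    unfolding kmodule_def
    by (intro conjI ballI allI neg; (elim T_carrE)?)
       (simp_all add: T_zero T_add T_smul mem tfree_zero tfree_add tfree_smul algebra_simps)
qed

end

sublocale k_module_pair \<subseteq> T: k_module "tensor M N"
  using T_kmodule by unfold_locales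

context k_module_pair
begin

lemma tens_closed [simp, intro]: "m \<in> carr M \<Longrightarrow> n \<in> carr N \<Longrightarrow> tens M N m n \<in> carr T"
  unfolding tens_def using T_carr tfree_delta by blast

lemma tens_add1: "m \<in> carr M \<Longrightarrow> m' \<in> carr M \<Longrightarrow> n \<in> carr N \<Longrightarrow>
    tens M N (addm M m m') n = addm T (tens M N m n) (tens M N m' n)"
  unfolding tens_def T_add by (rule tcoset_add_gen[of "\<lambda>z. tdelta (addm M m m', n) z - tdelta (m, n) z - tdelta (m', n) z"])
    (auto simp: tgens_def)

lemma tens_add2: "m \<in> carr M \<Longrightarrow> n \<in> carr N \<Longrightarrow> n' \<in> carr N \<Longrightarrow>
    tens M N m (addm N n n') = addm T (tens M N m n) (tens M N m n')"
  unfolding tens_def T_add by (rule tcoset_add_gen[of "\<lambda>z. tdelta (m, addm N n n') z - tdelta (m, n) z - tdelta (m, n') z"])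
    (auto simp: tgens_def)

lemma tens_smul1: "m \<in> carr M \<Longrightarrow> n \<in> carr N \<Longrightarrow> tens M N (smulm M r m) n = smulm T r (tens M N m n)"
  unfolding tens_def T_smul by (rule tcoset_add_gen[of "\<lambda>z. tdelta (smulm M r m, n) z - r * tdelta (m, n) z"])
    (auto simp: tgens_def)

lemma tens_smul2: "m \<in> carr M \<Longrightarrow> n \<in> carr N \<Longrightarrow> tens M N m (smulm N r n) = smulm T r (tens M N m n)"
  unfolding tens_def T_smul by (rule tcoset_add_gen[of "\<lambda>z. tdelta (m, smulm N r n) z - r * tdelta (m, n) z"])
    (auto simp: tgens_def)

lemma tcoset_sum:
  assumes "finite F" "\<And>i. i \<in> F \<Longrightarrow> d i \<in> tfree M N"
  shows "tcoset M N (\<lambda>w. \<Sum>i\<in>F. c i * d i w) = ksum T (\<lambda>i. smulm T (c i) (tcoset M N (d i))) F"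
  using assms
proof (induction F rule: finite_induct)
  case (insert x F)
  have "tcoset M N (\<lambda>w. \<Sum>i\<in>insert x F. c i * d i w) =
      addm T (smulm T (c x) (tcoset M N (d x))) (tcoset M N (\<lambda>w. \<Sum>i\<in>F. c i * d i w))"
    using insert(1,2) by (simp add: T_add T_smul)
  also have "\<dots> = ksum T (\<lambda>i. smulm T (c i) (tcoset M N (d i))) (insert x F)"
    using insert by (subst T.ksum_insert) (auto intro!: T.smul_closed tcoset_closed)
  finally show ?case .
qed (simp add: T_zero)

lemma tfree_eq_sum_tdelta: "finite (supp u) \<Longrightarrow> u = (\<lambda>w. \<Sum>z\<in>supp u. u z * tdelta z w)"
proof
  fix w
  assume fin: "finite (supp u)"
  show "u w = (\<Sum>z\<in>supp u. u z * tdelta z w)"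
  proof (cases "w \<in> supp u")
    case True
    then have "(\<Sum>z\<in>supp u. u z * tdelta z w) = (\<Sum>z\<in>{w}. u z * tdelta z w)"
      using fin by (intro sum.mono_neutral_right) (auto simp: tdelta_def)
    then show ?thesis by (simp add: tdelta_def)
  qed (auto simp: supp_def tdelta_def intro!: sum.neutral)
qed

lemma tcoset_eq_ksum_tens:
  assumes "u \<in> tfree M N"
  shows "tcoset M N u = ksum T (\<lambda>z. tens M N (smulm M (u z) (fst z)) (snd z)) (supp u)"
proof -
  have fin: "finite (supp u)" and sub: "supp u \<subseteq> carr M \<times> carr N"
    using assms tfree_iff by auto
  have "tcoset M N u = ksum T (\<lambda>z. smulm T (u z) (tcoset M N (tdelta z))) (supp u)"
    using fin sub tfree_delta by (subst tfree_eq_sum_tdelta[OF fin], intro tcoset_sum) auto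
  also have "\<dots> = ksum T (\<lambda>z. tens M N (smulm M (u z) (fst z)) (snd z)) (supp u)"
    using sub by (intro T.ksum_cong) (auto simp: tens_smul1 tens_def[symmetric])
  finally show ?thesis .
qed

lemma tensor_induct [consumes 1, case_names zero add tens]:
  assumes "X \<in> carr T" and "Pr (zerom T)"
    and "\<And>X Y. X \<in> carr T \<Longrightarrow> Y \<in> carr T \<Longrightarrow> Pr X \<Longrightarrow> Pr Y \<Longrightarrow> Pr (addm T X Y)"
    and "\<And>m n. m \<in> carr M \<Longrightarrow> n \<in> carr N \<Longrightarrow> Pr (tens M N m n)"
  shows "Pr X"
proof -
  obtain u where u: "u \<in> tfree M N" "X = tcoset M N u"
    using assms(1) T_carr by blast
  have fin: "finite (supp u)" and sub: "supp u \<subseteq> carr M \<times> carr N"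
    using u tfree_iff by auto
  define g where "g z = tens M N (smulm M (u z) (fst z)) (snd z)" for z
  have g: "g z \<in> carr T" "Pr (g z)" if "z \<in> supp u" for z
    using sub that assms(4) unfolding g_def by (auto simp: subset_eq)
  have "Pr (ksum T g F)" if "F \<subseteq> supp u" for F
    using finite_subset[OF that fin] that
  proof (induction F rule: finite_induct)
    case (insert x F)
    then have "ksum T g (insert x F) = addm T (g x) (ksum T g F)"
      using g by (intro T.ksum_insert) auto
    with insert g show ?case
      by (simp add: assms(3) subset_eq)
  qed (simp add: assms(2))
  then show ?thesis
    using u tcoset_eq_ksum_tens unfolding g_def by simp
qed

lemma some_tcoset_tfree:
  assumes "X \<in> carr T"
  shows "(SOME u. u \<in> X) \<in> X" "(SOME u. u \<in> X) \<in> tfree M N"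
proof -
  obtain u0 where u0: "u0 \<in> tfree M N" "X = tcoset M N u0"
    using assms T_carr by blast
  show some: "(SOME u. u \<in> X) \<in> X"
    using tcoset_self[of u0] u0 by (metis someI)
  then have "(\<lambda>z. (SOME u. u \<in> X) z - u0 z) \<in> S"
    using u0 tcoset_iff by blast
  from tfree_add[OF u0(1) tspan_tfree[OF this]] show "(SOME u. u \<in> X) \<in> tfree M N"
    by (simp add: eta_contract_eq)
qed

end

locale k_module_triple = k_module_pair M N + L: k_module L
  for M :: "('k::comm_ring_1, 'm, 'z1) kmod_scheme" and N :: "('k, 'n, 'z2) kmod_scheme"
    and L :: "('k, 'l, 'z3) kmod_scheme"
begin

lemma free_lift_eq_ksum_superset:
  assumes f: "\<And>m n. m \<in> carr M \<Longrightarrow> n \<in> carr N \<Longrightarrow> f m n \<in> carr L"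
    and "u \<in> tfree M N" "finite F" "supp u \<subseteq> F" "F \<subseteq> carr M \<times> carr N"
  shows "free_lift L f u = ksum L (\<lambda>z. smulm L (u z) (f (fst z) (snd z))) F"
proof -
  let ?h = "\<lambda>z. smulm L (u z) (f (fst z) (snd z))"
  have closed: "\<And>z. z \<in> F \<Longrightarrow> ?h z \<in> carr L"
    using assms by auto
  have "ksum L ?h F = ksum L ?h (supp u \<union> (F - supp u))"
    using assms(4) by (simp add: Un_absorb1)
  also have "\<dots> = addm L (ksum L ?h (supp u)) (ksum L ?h (F - supp u))"
    using assms closed by (intro L.ksum_Un) (auto intro: finite_subset)
  also have "ksum L ?h (F - supp u) = zerom L"
    using assms by (intro L.ksum_zero) (auto simp: supp_def)
  finally show ?thesis
    unfolding free_lift_def using assms(4) closed by (simp add: L.ksum_closed subset_eq)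
qed

lemma free_lift_closed:
  "(\<And>m n. m \<in> carr M \<Longrightarrow> n \<in> carr N \<Longrightarrow> f m n \<in> carr L) \<Longrightarrow> u \<in> tfree M N \<Longrightarrow> free_lift L f u \<in> carr L"
  unfolding free_lift_def tfree_iff by (intro L.ksum_closed) auto

context
  fixes f
  assumes f_closed: "\<And>m n. m \<in> carr M \<Longrightarrow> n \<in> carr N \<Longrightarrow> f m n \<in> carr L"
begin

lemma free_lift_add:
  assumes "u \<in> tfree M N" "v \<in> tfree M N"
  shows "free_lift L f (\<lambda>z. u z + v z) = addm L (free_lift L f u) (free_lift L f v)"
proof -
  let ?F = "supp u \<union> supp v"
  have F: "finite ?F" "?F \<subseteq> carr M \<times> carr N" "supp (\<lambda>z. u z + v z) \<subseteq> ?F"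
    using assms tfree_iff unfolding supp_def by auto
  then have "free_lift L f (\<lambda>z. u z + v z) = ksum L (\<lambda>z. smulm L (u z + v z) (f (fst z) (snd z))) ?F"
    using f_closed tfree_add[OF assms] by (intro free_lift_eq_ksum_superset) auto
  also have "\<dots> = addm L (ksum L (\<lambda>z. smulm L (u z) (f (fst z) (snd z))) ?F)
      (ksum L (\<lambda>z. smulm L (v z) (f (fst z) (snd z))) ?F)"
    using F f_closed by (intro L.ksum_eq_add) (auto simp: L.add_smul)
  also have "\<dots> = addm L (free_lift L f u) (free_lift L f v)"
    using free_lift_eq_ksum_superset[OF f_closed assms(1) F(1) _ F(2)]
      free_lift_eq_ksum_superset[OF f_closed assms(2) F(1) _ F(2)] by simp
  finally show ?thesis .
qed

lemma free_lift_smul: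
  assumes "u \<in> tfree M N"
  shows "free_lift L f (\<lambda>z. r * u z) = smulm L r (free_lift L f u)"
proof -
  have F: "finite (supp u)" "supp u \<subseteq> carr M \<times> carr N" "supp (\<lambda>z. r * u z) \<subseteq> supp u"
    using assms tfree_iff unfolding supp_def by auto
  then have "free_lift L f (\<lambda>z. r * u z) = ksum L (\<lambda>z. smulm L (r * u z) (f (fst z) (snd z))) (supp u)"
    using f_closed tfree_smul[OF assms] by (intro free_lift_eq_ksum_superset) auto
  also have "\<dots> = smulm L r (free_lift L f u)"
    unfolding free_lift_def using F f_closed by (subst L.ksum_smul) (auto intro!: L.ksum_cong simp: L.smul_smul)
  finally show ?thesis .
qed

lemma free_lift_diff:
  "u \<in> tfree M N \<Longrightarrow> v \<in> tfree M N \<Longrightarrow>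
    free_lift L f (\<lambda>z. u z - v z) = addm L (free_lift L f u) (smulm L (-1) (free_lift L f v))"
  using free_lift_add[of u "\<lambda>z. (-1) * v z"] free_lift_smul[of v "-1"] tfree_smul[of v "-1"] by simp

lemma free_lift_tdelta: "m \<in> carr M \<Longrightarrow> n \<in> carr N \<Longrightarrow> free_lift L f (tdelta (m, n)) = f m n"
  unfolding free_lift_def supp_tdelta using f_closed by (simp add: tdelta_def)

end

lemma free_lift_fun_add:
  assumes "\<And>m n. m \<in> carr M \<Longrightarrow> n \<in> carr N \<Longrightarrow> f m n \<in> carr L"
    and "\<And>m n. m \<in> carr M \<Longrightarrow> n \<in> carr N \<Longrightarrow> g m n \<in> carr L"
    and "u \<in> tfree M N"
  shows "free_lift L (\<lambda>m n. addm L (f m n) (g m n)) u = addm L (free_lift L f u) (free_lift L g u)"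
  unfolding free_lift_def using assms tfree_iff by (intro L.ksum_eq_add) (auto simp: L.smul_add)

lemma free_lift_fun_smul:
  assumes "\<And>m n. m \<in> carr M \<Longrightarrow> n \<in> carr N \<Longrightarrow> f m n \<in> carr L" and "u \<in> tfree M N"
  shows "free_lift L (\<lambda>m n. smulm L r (f m n)) u = smulm L r (free_lift L f u)"
  unfolding free_lift_def using assms tfree_iff
  by (subst L.ksum_smul) (auto intro!: L.ksum_cong simp: L.smul_smul[symmetric] mult.commute)

lemma free_lift_cong:
  assumes "\<And>m n. m \<in> carr M \<Longrightarrow> n \<in> carr N \<Longrightarrow> f m n = g m n"
    and "\<And>m n. m \<in> carr M \<Longrightarrow> n \<in> carr N \<Longrightarrow> g m n \<in> carr L" and "u \<in> tfree M N"
  shows "free_lift L f u = free_lift L g u"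
  unfolding free_lift_def using assms tfree_iff by (intro L.ksum_cong) (auto simp: subset_eq)

context
  fixes f
  assumes bil: "bilinear M N L f"
begin

lemma bilinear_closed: "m \<in> carr M \<Longrightarrow> n \<in> carr N \<Longrightarrow> f m n \<in> carr L"
  using bil unfolding bilinear_def by blast

lemma free_lift_tgens:
  assumes "g \<in> tgens M N"
  shows "free_lift L f g = zerom L"
proof -
  have cancel: "addm L (addm L (addm L a b) (smulm L (-1) a)) (smulm L (-1) b) = zerom L"
    if "a \<in> carr L" "b \<in> carr L" for a b
    using that by (metis L.add_assoc L.add_comm L.add_zero L.add_neg_smul L.smul_closed)
  note lift = free_lift_diff[OF bilinear_closed] tfree_diff tfree_delta
    free_lift_smul[OF bilinear_closed] free_lift_tdelta[OF bilinear_closed]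
  from assms show ?thesis
    unfolding tgens_def
  proof (elim UnE CollectE exE conjE)
    fix m m' n assume "g = (\<lambda>z. tdelta (addm M m m', n) z - tdelta (m, n) z - tdelta (m', n) z)"
      and "m \<in> carr M" "m' \<in> carr M" "n \<in> carr N"
    with bil show ?thesis
      unfolding bilinear_def by (simp add: lift cancel bilinear_closed)
  next
    fix m n n' assume "g = (\<lambda>z. tdelta (m, addm N n n') z - tdelta (m, n) z - tdelta (m, n') z)"
      and "m \<in> carr M" "n \<in> carr N" "n' \<in> carr N"
    with bil show ?thesis
      unfolding bilinear_def by (simp add: lift cancel bilinear_closed)
  next
    fix r m n assume "g = (\<lambda>z. tdelta (smulm M r m, n) z - r * tdelta (m, n) z)"
      and "m \<in> carr M" "n \<in> carr N"
    with bil show ?thesis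
      unfolding bilinear_def by (simp add: lift tfree_smul bilinear_closed L.add_neg_smul)
  next
    fix r m n assume "g = (\<lambda>z. tdelta (m, smulm N r n) z - r * tdelta (m, n) z)"
      and "m \<in> carr M" "n \<in> carr N"
    with bil show ?thesis
      unfolding bilinear_def by (simp add: lift tfree_smul bilinear_closed L.add_neg_smul)
  qed
qed

lemma free_lift_tspan:
  assumes "u \<in> S"
  shows "free_lift L f u = zerom L"
proof -
  obtain n :: nat and c g where u: "u = (\<lambda>z. \<Sum>i<n. c i * g i z)" and g: "\<forall>i<n. g i \<in> tgens M N"
    using assms tspan_iff by blast
  have "free_lift L f (\<lambda>z. \<Sum>i<k. c i * g i z) = zerom L" if "k \<le> n" for k
    using that
  proof (induction k)
    case (Suc k)
    then have gk: "g k \<in> tgens M N" using g by simp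
    have "(\<lambda>z. \<Sum>i<Suc k. c i * g i z) = (\<lambda>z. (\<Sum>i<k. c i * g i z) + c k * g k z)"
      by simp
    moreover have "(\<lambda>z. \<Sum>i<k. c i * g i z) \<in> tfree M N"
      using g Suc.prems tgens_tfree by (intro tfree_sum) auto
    ultimately show ?case
      using Suc tgens_tfree[OF gk] bilinear_closed
      by (simp add: free_lift_add free_lift_smul tfree_smul free_lift_tgens[OF gk])
  qed (simp add: free_lift_def supp_def)
  then show ?thesis using u by simp
qed

lemma tensor_lift_tcoset:
  assumes "u \<in> tfree M N"
  shows "tensor_lift L f (tcoset M N u) = free_lift L f u"
proof -
  let ?v = "SOME v. v \<in> tcoset M N u"
  have "?v \<in> tcoset M N u"
    by (rule someI[of _ u]) (rule tcoset_self)
  then have d: "(\<lambda>z. ?v z - u z) \<in> S"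
    using tcoset_iff by blast
  have "free_lift L f (\<lambda>z. u z + (?v z - u z)) = addm L (free_lift L f u) (free_lift L f (\<lambda>z. ?v z - u z))"
    by (rule free_lift_add[OF bilinear_closed assms tspan_tfree[OF d]])
  then show ?thesis
    unfolding tensor_lift_def using free_lift_tspan[OF d] free_lift_closed[OF bilinear_closed assms] by simp
qed

lemma tensor_lift_tens: "m \<in> carr M \<Longrightarrow> n \<in> carr N \<Longrightarrow> tensor_lift L f (tens M N m n) = f m n"
  unfolding tens_def using tensor_lift_tcoset tfree_delta free_lift_tdelta bilinear_closed by simp

lemma tensor_lift_linear: "klinear T L (tensor_lift L f)"
  unfolding klinear_def using bilinear_closed
  by (auto elim!: T_carrE simp: tensor_lift_tcoset T_add T_smul tfree_add tfree_smul
      free_lift_closed free_lift_add free_lift_smul)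

end

lemma tensor_lift_fun_add:
  assumes "\<And>m n. m \<in> carr M \<Longrightarrow> n \<in> carr N \<Longrightarrow> f m n \<in> carr L"
    and "\<And>m n. m \<in> carr M \<Longrightarrow> n \<in> carr N \<Longrightarrow> g m n \<in> carr L" and "X \<in> carr T"
  shows "tensor_lift L (\<lambda>m n. addm L (f m n) (g m n)) X = addm L (tensor_lift L f X) (tensor_lift L g X)"
  unfolding tensor_lift_def using assms some_tcoset_tfree by (intro free_lift_fun_add) auto

lemma tensor_lift_fun_smul:
  assumes "\<And>m n. m \<in> carr M \<Longrightarrow> n \<in> carr N \<Longrightarrow> f m n \<in> carr L" and "X \<in> carr T"
  shows "tensor_lift L (\<lambda>m n. smulm L r (f m n)) X = smulm L r (tensor_lift L f X)"
  unfolding tensor_lift_def using assms some_tcoset_tfree by (intro free_lift_fun_smul) auto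

lemma tensor_lift_cong:
  "(\<And>m n. m \<in> carr M \<Longrightarrow> n \<in> carr N \<Longrightarrow> f m n = g m n) \<Longrightarrow>
    (\<And>m n. m \<in> carr M \<Longrightarrow> n \<in> carr N \<Longrightarrow> g m n \<in> carr L) \<Longrightarrow> X \<in> carr T \<Longrightarrow>
    tensor_lift L f X = tensor_lift L g X"
  unfolding tensor_lift_def using some_tcoset_tfree by (intro free_lift_cong) auto

end

locale tensor_maps = k_module_pair M N + Tgt: k_module_pair M' N'
  for M :: "('k::comm_ring_1, 'm, 'z1) kmod_scheme" and N :: "('k, 'n, 'z2) kmod_scheme"
    and M' :: "('k, 'm2, 'z3) kmod_scheme" and N' :: "('k, 'n2, 'z4) kmod_scheme"
begin

sublocale Lift: k_module_triple M N "tensor M' N'"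
  by (rule k_module_triple.intro, rule k_module_pair_axioms, rule Tgt.T.k_module_axioms)

context
  fixes f g
  assumes f: "klinear M M' f" and g: "klinear N N' g"
begin

lemma tens_maps_bilinear: "bilinear M N (tensor M' N') (\<lambda>m n. tens M' N' (f m) (g n))"
  using f g unfolding bilinear_def klinear_def
  by (simp add: Tgt.tens_add1 Tgt.tens_add2 Tgt.tens_smul1 Tgt.tens_smul2)

lemma tmap_eq_tensor_lift:
  assumes "X \<in> carr T"
  shows "tmap M' N' f g X = tensor_lift (tensor M' N') (\<lambda>m n. tens M' N' (f m) (g n)) X"
proof -
  define u where "u = (SOME u. u \<in> X)"
  have fin: "finite (supp u)" and sub: "supp u \<subseteq> carr M \<times> carr N"
    using some_tcoset_tfree[OF assms] tfree_iff unfolding u_def by auto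
  have collect: "(\<lambda>w. \<Sum>z\<in>{z. u z \<noteq> 0 \<and> (f (fst z), g (snd z)) = w}. u z) =
      (\<lambda>w. \<Sum>z\<in>supp u. u z * tdelta (f (fst z), g (snd z)) w)"
  proof
    fix w
    have "{z. u z \<noteq> 0 \<and> (f (fst z), g (snd z)) = w} = {z \<in> supp u. (f (fst z), g (snd z)) = w}"
      unfolding supp_def by auto
    then have "(\<Sum>z\<in>{z. u z \<noteq> 0 \<and> (f (fst z), g (snd z)) = w}. u z) =
        (\<Sum>z\<in>supp u. if (f (fst z), g (snd z)) = w then u z else 0)"
      using fin by (simp add: sum.inter_filter)
    also have "\<dots> = (\<Sum>z\<in>supp u. u z * tdelta (f (fst z), g (snd z)) w)"
      by (rule sum.cong) (auto simp: tdelta_def)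
    finally show "(\<Sum>z\<in>{z. u z \<noteq> 0 \<and> (f (fst z), g (snd z)) = w}. u z) =
        (\<Sum>z\<in>supp u. u z * tdelta (f (fst z), g (snd z)) w)" .
  qed
  have "tmap M' N' f g X = tcoset M' N' (\<lambda>w. \<Sum>z\<in>supp u. u z * tdelta (f (fst z), g (snd z)) w)"
    unfolding tmap_def Let_def u_def[symmetric] collect ..
  also have "\<dots> = free_lift (tensor M' N') (\<lambda>m n. tens M' N' (f m) (g n)) u"
    unfolding free_lift_def tens_def using fin sub f g
    by (intro Tgt.tcoset_sum) (auto intro!: Tgt.tfree_delta simp: klinear_def)
  finally show ?thesis
    unfolding tensor_lift_def u_def .
qed

lemma tmap_tens: "m \<in> carr M \<Longrightarrow> n \<in> carr N \<Longrightarrow> tmap M' N' f g (tens M N m n) = tens M' N' (f m) (g n)"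
  using tmap_eq_tensor_lift Lift.tensor_lift_tens[OF tens_maps_bilinear] by simp

lemma tmap_linear: "klinear T (tensor M' N') (tmap M' N' f g)"
  using Lift.tensor_lift_linear[OF tens_maps_bilinear] tmap_eq_tensor_lift
  unfolding klinear_def by simp

end

end

section \<open>Duals and invertible modules\<close>

lemma homk_linear: "h \<in> homk M N \<Longrightarrow> klinear M N h"
  unfolding homk_def by blast
lemma homk_ext: "h \<in> homk M N \<Longrightarrow> x \<notin> carr M \<Longrightarrow> h x = zerom N"
  unfolding homk_def by blast
lemma homk_closed: "h \<in> homk M N \<Longrightarrow> x \<in> carr M \<Longrightarrow> h x \<in> carr N"
  unfolding homk_def klinear_def by blast
lemma homk_add: "h \<in> homk M N \<Longrightarrow> x \<in> carr M \<Longrightarrow> y \<in> carr M \<Longrightarrow> h (addm M x y) = addm N (h x) (h y)"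
  unfolding homk_def klinear_def by blast
lemma homk_smul: "h \<in> homk M N \<Longrightarrow> x \<in> carr M \<Longrightarrow> h (smulm M r x) = smulm N r (h x)"
  unfolding homk_def klinear_def by blast

lemma homkI:
  "(\<And>x. x \<in> carr M \<Longrightarrow> h x \<in> carr N) \<Longrightarrow>
   (\<And>x y. x \<in> carr M \<Longrightarrow> y \<in> carr M \<Longrightarrow> h (addm M x y) = addm N (h x) (h y)) \<Longrightarrow>
   (\<And>r x. x \<in> carr M \<Longrightarrow> h (smulm M r x) = smulm N r (h x)) \<Longrightarrow>
   (\<And>x. x \<notin> carr M \<Longrightarrow> h x = zerom N) \<Longrightarrow> h \<in> homk M N"
  unfolding homk_def klinear_def by blast

lemma kring_simps [simp]: "carr kring = UNIV" "addm kring = (+)" "zerom kring = 0" "smulm kring = (*)"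
  by (simp_all add: kring_def)

lemma dual_add_closed: "q \<in> homk M kring \<Longrightarrow> q' \<in> homk M kring \<Longrightarrow> (\<lambda>x. q x + q' x) \<in> homk M kring"
  by (rule homkI) (simp_all add: homk_add homk_smul homk_ext[of q] homk_ext[of q'] algebra_simps)

lemma dual_smul_closed: "q \<in> homk M kring \<Longrightarrow> (\<lambda>x. r * q x) \<in> homk M kring"
  by (rule homkI) (simp_all add: homk_add homk_smul homk_ext[of q] algebra_simps)

lemma kring_kmodule: "kmodule (kring :: ('k::comm_ring_1, 'k) kmod)"
  unfolding kmodule_def by (auto simp: algebra_simps intro: exI[of _ "-x" for x])

interpretation Kring: k_module "kring :: ('k::comm_ring_1, 'k) kmod"
  by (rule k_module.intro, rule kring_kmodule)

lemma ksum_kring: "ksum kring f A = sum f A"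
  by (induction A rule: infinite_finite_induct) (simp_all add: Kring.ksum_infinite Kring.ksum_insert)

lemma kdual_simps [simp]:
  "carr (kdual M) = homk M kring" "addm (kdual M) = (\<lambda>f g x. f x + g x)"
  "zerom (kdual M) = (\<lambda>x. 0)" "smulm (kdual M) = (\<lambda>r f x. r * f x)"
  by (simp_all add: kdual_def)

context k_module
begin

lemma dual_ksum:
  assumes "q \<in> homk M kring" "\<And>i. i \<in> A \<Longrightarrow> f i \<in> carr M"
  shows "q (ksum M f A) = (\<Sum>i\<in>A. q (f i))"
  using k_module_pair.linear_ksum[OF k_module_pair.intro[OF k_module_axioms Kring.k_module_axioms]
      homk_linear[OF assms(1)] assms(2)]
  by (simp add: ksum_kring)

lemma kdual_kmodule: "kmodule (kdual M)"
  unfolding kmodule_def kdual_simps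
proof (intro conjI ballI allI)
  show "(\<lambda>x. 0) \<in> homk M kring"
    by (rule homkI) auto
next
  fix f assume "f \<in> homk M kring"
  then show "\<exists>g\<in>homk M kring. (\<lambda>x. f x + g x) = (\<lambda>x. 0)"
    using dual_smul_closed[of f M "-1"] by (intro bexI[of _ "\<lambda>x. - f x"]) auto
qed (simp_all add: dual_add_closed dual_smul_closed algebra_simps)

lemma ksum_kdual_apply:
  "(\<And>i. i \<in> A \<Longrightarrow> f i \<in> homk M kring) \<Longrightarrow> ksum (kdual M) f A = (\<lambda>y. \<Sum>i\<in>A. f i y)"
proof (induction A rule: infinite_finite_induct)
  case (infinite A)
  then show ?case
    using k_module.ksum_infinite[OF k_module.intro[OF kdual_kmodule]] by simp
next
  case (insert x F)
  then have "ksum (kdual M) f (insert x F) = (\<lambda>y. f x y + ksum (kdual M) f F y)"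
    by (subst k_module.ksum_insert[OF k_module.intro[OF kdual_kmodule]]) auto
  with insert show ?case
    by simp
qed (simp add: k_module.ksum_empty[OF k_module.intro[OF kdual_kmodule]])

lemma kfgp_dual_basis:
  assumes "kfgp M"
  obtains n :: nat and e \<xi> where "\<forall>i<n. e i \<in> carr M \<and> \<xi> i \<in> homk M kring"
    "\<forall>y\<in>carr M. y = ksum M (\<lambda>i. smulm M (\<xi> i y) (e i)) {..<n}"
proof -
  obtain n e \<xi> where basis: "\<forall>i<n. e i \<in> carr M \<and> \<xi> i \<in> homk M kring"
    and expand: "\<forall>y\<in>carr M. y = msum (addm M) (zerom M) (\<lambda>i. smulm M (\<xi> i y) (e i)) n"
    using assms unfolding kfgp_def by blast
  have "\<forall>y\<in>carr M. y = ksum M (\<lambda>i. smulm M (\<xi> i y) (e i)) {..<n}"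
    using basis expand by (subst (asm) msum_eq_ksum) auto
  with basis show ?thesis
    using that by blast
qed

lemma dual_basis_expand_dual:
  assumes basis: "\<forall>i<n. e i \<in> carr M \<and> \<xi> i \<in> homk M kring"
    and expand: "\<forall>y\<in>carr M. y = ksum M (\<lambda>i. smulm M (\<xi> i y) (e i)) {..<n}"
    and q: "q \<in> homk M kring"
  shows "ksum (kdual M) (\<lambda>i x. q (e i) * \<xi> i x) {..<n} = q"
proof -
  have "ksum (kdual M) (\<lambda>i x. q (e i) * \<xi> i x) {..<n} = (\<lambda>y. \<Sum>i<n. q (e i) * \<xi> i y)"
    using basis by (subst ksum_kdual_apply) (auto intro: dual_smul_closed)
  also have "\<dots> = q"
  proof
    fix y
    show "(\<Sum>i<n. q (e i) * \<xi> i y) = q y"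
    proof (cases "y \<in> carr M")
      case True
      then have "q y = q (ksum M (\<lambda>i. smulm M (\<xi> i y) (e i)) {..<n})"
        by (rule arg_cong[OF bspec[OF expand]])
      also have "\<dots> = (\<Sum>i<n. q (e i) * \<xi> i y)"
        using basis q True by (subst dual_ksum) (auto simp: homk_smul homk_closed mult.commute)
      finally show ?thesis ..
    qed (use basis q in \<open>simp add: homk_ext[of _ M kring y]\<close>)
  qed
  finally show ?thesis .
qed

end

locale invertible_module = k_module P
  for P :: "('k::comm_ring_1, 'p, 'z) kmod_scheme" +
  assumes invertible: "invertible_kmod P"

lemma invertible_module_iff: "invertible_module P \<longleftrightarrow> invertible_kmod P"
  unfolding invertible_module_def invertible_module_axioms_def k_module_def invertible_kmod_def by blast

context invertible_module
begin

definition scalar_map :: "'k \<Rightarrow> 'p \<Rightarrow> 'p" where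
  "scalar_map r = (\<lambda>x. if x \<in> carr P then smulm P r x else zerom P)"

definition scalar_of :: "('p \<Rightarrow> 'p) \<Rightarrow> 'k" where
  "scalar_of h = the_inv_into UNIV scalar_map h"

lemma scalar_map_bij: "bij_betw scalar_map UNIV (homk P P)"
  using invertible unfolding invertible_kmod_def scalar_map_def by blast

lemma scalar_of:
  assumes "h \<in> homk P P" "x \<in> carr P"
  shows "h x = smulm P (scalar_of h) x"
proof -
  have "inj scalar_map" "h \<in> range scalar_map"
    using scalar_map_bij assms(1) unfolding bij_betw_def by auto
  then have "scalar_map (scalar_of h) = h"
    unfolding scalar_of_def by (rule f_the_inv_into_f)
  then have "h x = scalar_map (scalar_of h) x"
    by simp
  with assms(2) show ?thesis
    by (simp add: scalar_map_def)
qed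

lemma smul_faithful:
  assumes "\<And>x. x \<in> carr P \<Longrightarrow> smulm P r x = smulm P s x"
  shows "r = s"
proof -
  have "scalar_map r = scalar_map s"
    unfolding scalar_map_def using assms by auto
  then show ?thesis
    using scalar_map_bij unfolding bij_betw_def by (metis injD)
qed

text \<open>On an invertible module the endomorphism x \<mapsto> q(x) y is multiplication by a scalar,
  the canonical pairing of q and y.\<close>

definition dual_pair :: "('p \<Rightarrow> 'k) \<Rightarrow> 'p \<Rightarrow> 'k" where
  "dual_pair q y = scalar_of (\<lambda>x. if x \<in> carr P then smulm P (q x) y else zerom P)"

lemma dual_pair:
  assumes "q \<in> homk P kring" "y \<in> carr P" "x \<in> carr P"
  shows "smulm P (q x) y = smulm P (dual_pair q y) x"
proof -
  have "(\<lambda>x. if x \<in> carr P then smulm P (q x) y else zerom P) \<in> homk P P"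
    using assms by (intro homkI) (auto simp: homk_add homk_smul add_smul smul_smul)
  from scalar_of[OF this assms(3)] show ?thesis
    unfolding dual_pair_def using assms by simp
qed

lemma dual_basis:
  obtains n :: nat and e \<xi> where "\<forall>i<n. e i \<in> carr P \<and> \<xi> i \<in> homk P kring"
    "\<forall>y\<in>carr P. y = ksum P (\<lambda>i. smulm P (\<xi> i y) (e i)) {..<n}"
  using invertible kfgp_dual_basis unfolding invertible_kmod_def by blast

lemma dual_pair_mult:
  assumes q: "q \<in> homk P kring" "q' \<in> homk P kring" and y: "y \<in> carr P" "y' \<in> carr P"
  shows "dual_pair q y * dual_pair q' y' = q y' * dual_pair q' y"
proof (rule smul_faithful)
  fix x assume x: "x \<in> carr P"
  have "smulm P (dual_pair q y * dual_pair q' y') x = smulm P (dual_pair q y) (smulm P (q' x) y')"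
    using q y x by (simp add: smul_smul dual_pair[of q' y' x])
  also have "\<dots> = smulm P (q' x) (smulm P (q y') y)"
    using q y x by (simp add: smul_smul[symmetric] mult.commute dual_pair[of q y y'])
  also have "\<dots> = smulm P (q y') (smulm P (q' x) y)"
    using q y x by (simp add: smul_smul[symmetric] mult.commute)
  also have "\<dots> = smulm P (q y') (smulm P (dual_pair q' y) x)"
    using q y x by (simp add: dual_pair)
  also have "\<dots> = smulm P (q y' * dual_pair q' y) x"
    using x by (simp add: smul_smul)
  finally show "smulm P (dual_pair q y * dual_pair q' y') x = smulm P (q y' * dual_pair q' y) x" .
qed

lemma dual_pair_trace:
  assumes basis: "\<forall>i<n. e i \<in> carr P \<and> \<xi> i \<in> homk P kring"
    and expand: "\<forall>y\<in>carr P. y = ksum P (\<lambda>i. smulm P (\<xi> i y) (e i)) {..<n}"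
  shows "(\<Sum>i<n. dual_pair (\<xi> i) (e i)) = 1"
proof (rule smul_faithful)
  fix x assume x: "x \<in> carr P"
  have "smulm P (\<Sum>i<n. dual_pair (\<xi> i) (e i)) x = ksum P (\<lambda>i. smulm P (dual_pair (\<xi> i) (e i)) x) {..<n}"
    by (rule smul_sum[OF x])
  also have "\<dots> = ksum P (\<lambda>i. smulm P (\<xi> i x) (e i)) {..<n}"
    using basis x by (intro ksum_cong) (simp_all add: dual_pair)
  also have "\<dots> = smulm P 1 x"
    using x by (simp add: bspec[OF expand x, symmetric])
  finally show "smulm P (\<Sum>i<n. dual_pair (\<xi> i) (e i)) x = smulm P 1 x" .
qed

text \<open>Squaring the trace identity shows that the evaluation map from the dual tensor P onto k
  is surjective, i.e. P is a generator.\<close>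

lemma dual_generator:
  obtains I :: "(nat \<times> nat) set" and q y where "finite I"
    "\<forall>i\<in>I. q i \<in> homk P kring \<and> y i \<in> carr P" "(\<Sum>i\<in>I. q i (y i)) = 1"
proof -
  obtain n :: nat and e \<xi> where basis: "\<forall>i<n. e i \<in> carr P \<and> \<xi> i \<in> homk P kring"
      and expand: "\<forall>y\<in>carr P. y = ksum P (\<lambda>i. smulm P (\<xi> i y) (e i)) {..<n}"
    by (rule dual_basis)
  define q where "q z = (\<lambda>x. dual_pair (\<xi> (snd z)) (e (fst z)) * \<xi> (fst z) x)" for z :: "nat \<times> nat"
  define y where "y z = e (snd z)" for z :: "nat \<times> nat"
  have "1 = (\<Sum>i<n. dual_pair (\<xi> i) (e i)) * (\<Sum>j<n. dual_pair (\<xi> j) (e j))"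
    using dual_pair_trace[OF basis expand] by simp
  also have "\<dots> = (\<Sum>i<n. \<Sum>j<n. dual_pair (\<xi> i) (e i) * dual_pair (\<xi> j) (e j))"
    by (simp add: sum_product)
  also have "\<dots> = (\<Sum>i<n. \<Sum>j<n. q (i, j) (y (i, j)))"
    using basis by (intro sum.cong refl) (simp add: q_def y_def dual_pair_mult mult.commute)
  also have "\<dots> = (\<Sum>z\<in>{..<n} \<times> {..<n}. q z (y z))"
    by (simp add: sum.cartesian_product)
  finally have "(\<Sum>z\<in>{..<n} \<times> {..<n}. q z (y z)) = 1" ..
  moreover have "\<forall>z\<in>{..<n} \<times> {..<n}. q z \<in> homk P kring \<and> y z \<in> carr P"
    using basis unfolding q_def y_def by (auto intro!: dual_smul_closed)
  ultimately show ?thesis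
    by (intro that[of "{..<n} \<times> {..<n}" q y]) auto
qed

lemma dual_generator_expand_dual:
  assumes I: "finite I" "\<forall>i\<in>I. qg i \<in> homk P kring \<and> yg i \<in> carr P" "(\<Sum>i\<in>I. qg i (yg i)) = 1"
    and q: "q \<in> homk P kring"
  shows "ksum (kdual P) (\<lambda>j x. dual_pair q (yg j) * qg j x) I = q"
proof -
  have "ksum (kdual P) (\<lambda>j x. dual_pair q (yg j) * qg j x) I = (\<lambda>y. \<Sum>j\<in>I. dual_pair q (yg j) * qg j y)"
    using I by (subst ksum_kdual_apply) (auto intro: dual_smul_closed)
  also have "\<dots> = q"
  proof
    fix y
    show "(\<Sum>j\<in>I. dual_pair q (yg j) * qg j y) = q y"
    proof (cases "y \<in> carr P")
      case True
      have "(\<Sum>j\<in>I. dual_pair q (yg j) * qg j y) = (\<Sum>j\<in>I. qg j (smulm P (q y) (yg j)))"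
      proof (rule sum.cong[OF refl])
        fix j assume "j \<in> I"
        with I have "qg j \<in> homk P kring" "yg j \<in> carr P" by auto
        with q True show "dual_pair q (yg j) * qg j y = qg j (smulm P (q y) (yg j))"
          by (simp add: homk_smul dual_pair)
      qed
      also have "\<dots> = q y * (\<Sum>j\<in>I. qg j (yg j))"
        unfolding sum_distrib_left using I by (intro sum.cong refl) (auto simp: homk_smul)
      finally show ?thesis
        using I by simp
    qed (use I q in \<open>simp add: homk_ext[of _ P kring y]\<close>)
  qed
  finally show ?thesis .
qed

text \<open>Every bilinear form on the dual times P is a multiple of evaluation: the map
  y \<mapsto> \<Sum>i \<rho>(\<xi>i, y) ei is an endomorphism of P, hence a scalar.\<close>

lemma bilinear_form_is_scalar:
  assumes add1: "\<And>q q' y. q \<in> homk P kring \<Longrightarrow> q' \<in> homk P kring \<Longrightarrow> y \<in> carr P \<Longrightarrow>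
      \<rho> (\<lambda>x. q x + q' x) y = \<rho> q y + \<rho> q' y"
    and smul1: "\<And>r q y. q \<in> homk P kring \<Longrightarrow> y \<in> carr P \<Longrightarrow> \<rho> (\<lambda>x. r * q x) y = r * \<rho> q y"
    and add2: "\<And>q y y'. q \<in> homk P kring \<Longrightarrow> y \<in> carr P \<Longrightarrow> y' \<in> carr P \<Longrightarrow>
      \<rho> q (addm P y y') = \<rho> q y + \<rho> q y'"
    and smul2: "\<And>r q y. q \<in> homk P kring \<Longrightarrow> y \<in> carr P \<Longrightarrow> \<rho> q (smulm P r y) = r * \<rho> q y"
  obtains c where "\<And>q y. q \<in> homk P kring \<Longrightarrow> y \<in> carr P \<Longrightarrow> \<rho> q y = c * q y"
proof -
  obtain n :: nat and e \<xi> where basis: "\<forall>i<n. e i \<in> carr P \<and> \<xi> i \<in> homk P kring"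
      and expand: "\<forall>y\<in>carr P. y = ksum P (\<lambda>i. smulm P (\<xi> i y) (e i)) {..<n}"
    by (rule dual_basis)
  interpret Dual: k_module_pair "kdual P" kring
    by (intro k_module_pair.intro k_module.intro kdual_kmodule kring_kmodule)
  define D where "D y = (if y \<in> carr P then ksum P (\<lambda>i. smulm P (\<rho> (\<xi> i) y) (e i)) {..<n} else zerom P)" for y
  have D: "D \<in> homk P P"
  proof (rule homkI)
    fix y y' assume "y \<in> carr P" "y' \<in> carr P"
    then show "D (addm P y y') = addm P (D y) (D y')"
      unfolding D_def using basis by (simp, intro ksum_eq_add) (auto simp: add2 add_smul)
  next
    fix r y assume "y \<in> carr P"
    then show "D (smulm P r y) = smulm P r (D y)"
      unfolding D_def using basis by (simp, subst ksum_smul) (auto intro!: ksum_cong simp: smul2 smul_smul)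
  qed (use basis in \<open>auto simp: D_def intro!: ksum_closed\<close>)
  have linear1: "klinear (kdual P) kring (\<lambda>q. \<rho> q y)" if "y \<in> carr P" for y
    unfolding klinear_def using that add1 smul1 by simp
  have "\<rho> q y = scalar_of D * q y" if q: "q \<in> homk P kring" and y: "y \<in> carr P" for q y
  proof -
    have "\<rho> q y = \<rho> (ksum (kdual P) (\<lambda>i x. q (e i) * \<xi> i x) {..<n}) y"
      using dual_basis_expand_dual[OF basis expand q] by simp
    also have "\<dots> = (\<Sum>i<n. q (e i) * \<rho> (\<xi> i) y)"
      using basis y by (subst Dual.linear_ksum[OF linear1]) (auto simp: ksum_kring smul1 dual_smul_closed)
    also have "\<dots> = q (D y)"
      unfolding D_def using basis q y
      by (simp, subst dual_ksum) (auto intro!: sum.cong simp: homk_smul mult.commute)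
    also have "\<dots> = scalar_of D * q y"
      using scalar_of[OF D y] q y by (simp add: homk_smul)
    finally show ?thesis .
  qed
  then show ?thesis
    by (rule that)
qed

end

section \<open>Triple tensor products\<close>

locale triple_tensor = k_module_pair M N + K: k_module K
  for M :: "('k::comm_ring_1, 'm, 'z1) kmod_scheme" and N :: "('k, 'n, 'z2) kmod_scheme"
    and K :: "('k, 'p, 'z3) kmod_scheme"
begin

sublocale Outer: k_module_pair "tensor M N" K
  by (rule k_module_pair.intro, rule T.k_module_axioms, rule K.k_module_axioms)

abbreviation "T3 \<equiv> tensor (tensor M N) K"

definition tens3 :: "'m \<Rightarrow> 'n \<Rightarrow> 'p \<Rightarrow> ((('m \<times> 'n \<Rightarrow> 'k) set) \<times> 'p \<Rightarrow> 'k) set" where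
  "tens3 x q p = tens (tensor M N) K (tens M N x q) p"

lemma tens3_closed [simp, intro]: "x \<in> carr M \<Longrightarrow> q \<in> carr N \<Longrightarrow> p \<in> carr K \<Longrightarrow> tens3 x q p \<in> carr T3"
  unfolding tens3_def by simp

lemma tens3_add1: "x \<in> carr M \<Longrightarrow> x' \<in> carr M \<Longrightarrow> q \<in> carr N \<Longrightarrow> p \<in> carr K \<Longrightarrow>
    tens3 (addm M x x') q p = addm T3 (tens3 x q p) (tens3 x' q p)"
  unfolding tens3_def by (simp add: tens_add1 Outer.tens_add1)
lemma tens3_add2: "x \<in> carr M \<Longrightarrow> q \<in> carr N \<Longrightarrow> q' \<in> carr N \<Longrightarrow> p \<in> carr K \<Longrightarrow>
    tens3 x (addm N q q') p = addm T3 (tens3 x q p) (tens3 x q' p)"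
  unfolding tens3_def by (simp add: tens_add2 Outer.tens_add1)
lemma tens3_add3: "x \<in> carr M \<Longrightarrow> q \<in> carr N \<Longrightarrow> p \<in> carr K \<Longrightarrow> p' \<in> carr K \<Longrightarrow>
    tens3 x q (addm K p p') = addm T3 (tens3 x q p) (tens3 x q p')"
  unfolding tens3_def by (simp add: Outer.tens_add2)
lemma tens3_smul1: "x \<in> carr M \<Longrightarrow> q \<in> carr N \<Longrightarrow> p \<in> carr K \<Longrightarrow>
    tens3 (smulm M r x) q p = smulm T3 r (tens3 x q p)"
  unfolding tens3_def by (simp add: tens_smul1 Outer.tens_smul1)
lemma tens3_smul2: "x \<in> carr M \<Longrightarrow> q \<in> carr N \<Longrightarrow> p \<in> carr K \<Longrightarrow>
    tens3 x (smulm N r q) p = smulm T3 r (tens3 x q p)"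
  unfolding tens3_def by (simp add: tens_smul2 Outer.tens_smul1)
lemma tens3_smul3: "x \<in> carr M \<Longrightarrow> q \<in> carr N \<Longrightarrow> p \<in> carr K \<Longrightarrow>
    tens3 x q (smulm K r p) = smulm T3 r (tens3 x q p)"
  unfolding tens3_def by (simp add: Outer.tens_smul2)

lemma tens3_induct [consumes 1, case_names zero add tens3]:
  assumes "w \<in> carr T3" and "Pr (zerom T3)"
    and "\<And>X Y. X \<in> carr T3 \<Longrightarrow> Y \<in> carr T3 \<Longrightarrow> Pr X \<Longrightarrow> Pr Y \<Longrightarrow> Pr (addm T3 X Y)"
    and "\<And>x q p. x \<in> carr M \<Longrightarrow> q \<in> carr N \<Longrightarrow> p \<in> carr K \<Longrightarrow> Pr (tens3 x q p)"
  shows "Pr w"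
  using assms(1)
proof (induction rule: Outer.tensor_induct)
  case (tens X p)
  have "tens (tensor M N) K (zerom (tensor M N)) p = zerom T3"
    using Outer.tens_smul1[of "zerom (tensor M N)" p 0] tens by simp
  with tens show ?case
    by (induction X rule: tensor_induct) (auto simp: Outer.tens_add1 intro: assms(2,3) assms(4)[unfolded tens3_def])
qed (use assms in auto)

lemma tens3_ext:
  assumes "w \<in> carr T3" "kmodule L"
    and "\<And>X. X \<in> carr T3 \<Longrightarrow> g X \<in> carr L" "\<And>X. X \<in> carr T3 \<Longrightarrow> h X \<in> carr L"
    and "\<And>X Y. X \<in> carr T3 \<Longrightarrow> Y \<in> carr T3 \<Longrightarrow> g (addm T3 X Y) = addm L (g X) (g Y)"
    and "\<And>X Y. X \<in> carr T3 \<Longrightarrow> Y \<in> carr T3 \<Longrightarrow> h (addm T3 X Y) = addm L (h X) (h Y)"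
    and "\<And>x q p. x \<in> carr M \<Longrightarrow> q \<in> carr N \<Longrightarrow> p \<in> carr K \<Longrightarrow> g (tens3 x q p) = h (tens3 x q p)"
  shows "g w = h w"
proof -
  interpret L: k_module L by (rule k_module.intro, rule assms(2))
  have "g (zerom T3) = zerom L" "h (zerom T3) = zerom L"
    using assms(3-6) Outer.T.zero_closed Outer.T.add_zero L.add_eq_self by metis+
  with assms show ?thesis
    by (induction w rule: tens3_induct) auto
qed

lemma tens3_ksum1: "q \<in> carr N \<Longrightarrow> p \<in> carr K \<Longrightarrow> (\<And>i. i \<in> I \<Longrightarrow> f i \<in> carr M) \<Longrightarrow>
    tens3 (ksum M f I) q p = ksum T3 (\<lambda>i. tens3 (f i) q p) I"
  by (rule k_module_pair.linear_ksum[OF k_module_pair.intro[OF M.k_module_axioms Outer.T.k_module_axioms]])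
    (auto simp: klinear_def tens3_add1 tens3_smul1)

lemma tens3_ksum2: "x \<in> carr M \<Longrightarrow> p \<in> carr K \<Longrightarrow> (\<And>i. i \<in> I \<Longrightarrow> f i \<in> carr N) \<Longrightarrow>
    tens3 x (ksum N f I) p = ksum T3 (\<lambda>i. tens3 x (f i) p) I"
  by (rule k_module_pair.linear_ksum[OF k_module_pair.intro[OF N.k_module_axioms Outer.T.k_module_axioms]])
    (auto simp: klinear_def tens3_add2 tens3_smul2)

lemma tens3_ksum3: "x \<in> carr M \<Longrightarrow> q \<in> carr N \<Longrightarrow> (\<And>i. i \<in> I \<Longrightarrow> f i \<in> carr K) \<Longrightarrow>
    tens3 x q (ksum K f I) = ksum T3 (\<lambda>i. tens3 x q (f i)) I"
  by (rule k_module_pair.linear_ksum[OF k_module_pair.intro[OF K.k_module_axioms Outer.T.k_module_axioms]])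
    (auto simp: klinear_def tens3_add3 tens3_smul3)

lemma tens3_ksum12:
  assumes "finite I" "finite J" "p \<in> carr K"
    and "\<And>i. i \<in> I \<Longrightarrow> f i \<in> carr M" "\<And>j. j \<in> J \<Longrightarrow> g j \<in> carr N"
  shows "ksum T3 (\<lambda>z. tens3 (f (fst z)) (g (snd z)) p) (I \<times> J) = tens3 (ksum M f I) (ksum N g J) p"
proof -
  have "ksum T3 (\<lambda>z. tens3 (f (fst z)) (g (snd z)) p) (I \<times> J) = ksum T3 (\<lambda>i. ksum T3 (\<lambda>j. tens3 (f i) (g j) p) J) I"
    using assms by (subst Outer.T.ksum_product) auto
  also have "\<dots> = ksum T3 (\<lambda>i. tens3 (f i) (ksum N g J) p) I"
    using assms by (intro Outer.T.ksum_cong) (simp_all add: tens3_ksum2)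
  also have "\<dots> = tens3 (ksum M f I) (ksum N g J) p"
    using assms by (simp add: tens3_ksum1)
  finally show ?thesis .
qed

lemma tens3_ksum23:
  assumes "finite I" "finite J" "x \<in> carr M"
    and "\<And>i. i \<in> I \<Longrightarrow> f i \<in> carr N" "\<And>j. j \<in> J \<Longrightarrow> g j \<in> carr K"
  shows "ksum T3 (\<lambda>z. tens3 x (f (fst z)) (g (snd z))) (I \<times> J) = tens3 x (ksum N f I) (ksum K g J)"
proof -
  have "ksum T3 (\<lambda>z. tens3 x (f (fst z)) (g (snd z))) (I \<times> J) = ksum T3 (\<lambda>i. ksum T3 (\<lambda>j. tens3 x (f i) (g j)) J) I"
    using assms by (subst Outer.T.ksum_product) auto
  also have "\<dots> = ksum T3 (\<lambda>i. tens3 x (f i) (ksum K g J)) I"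
    using assms by (intro Outer.T.ksum_cong) (simp_all add: tens3_ksum3)
  also have "\<dots> = tens3 x (ksum N f I) (ksum K g J)"
    using assms by (simp add: tens3_ksum2)
  finally show ?thesis .
qed

definition trilinear :: "('k, 'l, 'z) kmod_scheme \<Rightarrow> ('m \<Rightarrow> 'n \<Rightarrow> 'p \<Rightarrow> 'l) \<Rightarrow> bool" where
  "trilinear L f \<longleftrightarrow> (\<forall>p\<in>carr K. bilinear M N L (\<lambda>x q. f x q p)) \<and>
     (\<forall>x\<in>carr M. \<forall>q\<in>carr N. klinear K L (f x q))"

definition tensor3_lift :: "('k, 'l, 'z) kmod_scheme \<Rightarrow> ('m \<Rightarrow> 'n \<Rightarrow> 'p \<Rightarrow> 'l) \<Rightarrow>
    ((('m \<times> 'n \<Rightarrow> 'k) set) \<times> 'p \<Rightarrow> 'k) set \<Rightarrow> 'l" where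
  "tensor3_lift L f = tensor_lift L (\<lambda>X p. tensor_lift L (\<lambda>x q. f x q p) X)"

lemma tensor3_lift:
  assumes "kmodule L" "trilinear L f"
  shows "\<And>x q p. x \<in> carr M \<Longrightarrow> q \<in> carr N \<Longrightarrow> p \<in> carr K \<Longrightarrow> tensor3_lift L f (tens3 x q p) = f x q p"
    and "klinear T3 L (tensor3_lift L f)"
proof -
  interpret Inner: k_module_triple M N L
    by (intro k_module_triple.intro k_module_pair_axioms k_module.intro assms(1))
  interpret Outer3: k_module_triple "tensor M N" K L
    by (intro k_module_triple.intro Outer.k_module_pair_axioms k_module.intro assms(1))
  have bil: "bilinear M N L (\<lambda>x q. f x q p)" if "p \<in> carr K" for p
    using assms(2) that unfolding trilinear_def by blast
  have lin: "klinear K L (f x q)" if "x \<in> carr M" "q \<in> carr N" for x q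
    using assms(2) that unfolding trilinear_def by blast
  note lift_linear = Inner.tensor_lift_linear[OF bil, unfolded klinear_def]
  have "bilinear (tensor M N) K L (\<lambda>X p. tensor_lift L (\<lambda>x q. f x q p) X)"
    unfolding bilinear_def
  proof (intro conjI ballI allI)
    fix X p p' assume X: "X \<in> carr (tensor M N)" and p: "p \<in> carr K" "p' \<in> carr K"
    have "tensor_lift L (\<lambda>x q. f x q (addm K p p')) X = tensor_lift L (\<lambda>x q. addm L (f x q p) (f x q p')) X"
      using X p lin Inner.bilinear_closed[OF bil] unfolding klinear_def by (intro Inner.tensor_lift_cong) auto
    also have "\<dots> = addm L (tensor_lift L (\<lambda>x q. f x q p) X) (tensor_lift L (\<lambda>x q. f x q p') X)"
      using X p Inner.bilinear_closed[OF bil] by (intro Inner.tensor_lift_fun_add) auto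
    finally show "tensor_lift L (\<lambda>x q. f x q (addm K p p')) X =
        addm L (tensor_lift L (\<lambda>x q. f x q p) X) (tensor_lift L (\<lambda>x q. f x q p') X)" .
  next
    fix r X p assume X: "X \<in> carr (tensor M N)" and p: "p \<in> carr K"
    have "tensor_lift L (\<lambda>x q. f x q (smulm K r p)) X = tensor_lift L (\<lambda>x q. smulm L r (f x q p)) X"
      using X p lin Inner.bilinear_closed[OF bil] unfolding klinear_def by (intro Inner.tensor_lift_cong) auto
    also have "\<dots> = smulm L r (tensor_lift L (\<lambda>x q. f x q p) X)"
      using X p Inner.bilinear_closed[OF bil] by (intro Inner.tensor_lift_fun_smul) auto
    finally show "tensor_lift L (\<lambda>x q. f x q (smulm K r p)) X = smulm L r (tensor_lift L (\<lambda>x q. f x q p) X)" .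
  qed (simp_all add: lift_linear K.add_closed K.smul_closed)
  then show "\<And>x q p. x \<in> carr M \<Longrightarrow> q \<in> carr N \<Longrightarrow> p \<in> carr K \<Longrightarrow> tensor3_lift L f (tens3 x q p) = f x q p"
    and "klinear T3 L (tensor3_lift L f)"
    unfolding tensor3_lift_def tens3_def
    using Outer3.tensor_lift_tens Outer3.tensor_lift_linear Inner.tensor_lift_tens bil by simp_all
qed

sublocale Map_inner: tensor_maps M N M N ..
sublocale Map_outer: tensor_maps "tensor M N" K "tensor M N" K ..

definition tensor3_map1 :: "('m \<Rightarrow> 'm) \<Rightarrow> ((('m \<times> 'n \<Rightarrow> 'k) set) \<times> 'p \<Rightarrow> 'k) set \<Rightarrow>
    ((('m \<times> 'n \<Rightarrow> 'k) set) \<times> 'p \<Rightarrow> 'k) set" where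
  "tensor3_map1 f = tmap (tensor M N) K (tmap M N f id) id"

lemma id_klinear: "kmodule L \<Longrightarrow> klinear L L id"
  unfolding klinear_def kmodule_def by auto

context
  fixes f
  assumes f: "klinear M M f"
begin

lemma tmap1_klinear: "klinear (tensor M N) (tensor M N) (tmap M N f id)"
  using Map_inner.tmap_linear[OF f id_klinear[OF N.kmod]] .

lemma tensor3_map1_tens3: "x \<in> carr M \<Longrightarrow> q \<in> carr N \<Longrightarrow> p \<in> carr K \<Longrightarrow> tensor3_map1 f (tens3 x q p) = tens3 (f x) q p"
  unfolding tensor3_map1_def tens3_def
  using Map_outer.tmap_tens[OF tmap1_klinear id_klinear[OF K.kmod]] Map_inner.tmap_tens[OF f id_klinear[OF N.kmod]]
  by simp

lemma tensor3_map1_klinear: "klinear T3 T3 (tensor3_map1 f)"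
  unfolding tensor3_map1_def using Map_outer.tmap_linear[OF tmap1_klinear id_klinear[OF K.kmod]] .

end

end

section \<open>Algebras and their automorphisms\<close>

locale k_algebra = k_module A
  for A :: "('k::comm_ring_1, 'a, 'z) kalg_scheme" +
  assumes alg: "kalgebra A"
begin

lemma one_closed [simp, intro]: "onem A \<in> carr A"
  using alg unfolding kalgebra_def by blast
lemma mul_closed [simp, intro]: "x \<in> carr A \<Longrightarrow> y \<in> carr A \<Longrightarrow> mulm A x y \<in> carr A"
  using alg unfolding kalgebra_def by blast
lemma mul_assoc: "x \<in> carr A \<Longrightarrow> y \<in> carr A \<Longrightarrow> z \<in> carr A \<Longrightarrow> mulm A (mulm A x y) z = mulm A x (mulm A y z)"
  using alg unfolding kalgebra_def by blast
lemma one_mul [simp]: "x \<in> carr A \<Longrightarrow> mulm A (onem A) x = x"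
  using alg unfolding kalgebra_def by blast
lemma mul_one [simp]: "x \<in> carr A \<Longrightarrow> mulm A x (onem A) = x"
  using alg unfolding kalgebra_def by blast
lemma distrib_left: "x \<in> carr A \<Longrightarrow> y \<in> carr A \<Longrightarrow> z \<in> carr A \<Longrightarrow> mulm A x (addm A y z) = addm A (mulm A x y) (mulm A x z)"
  using alg unfolding kalgebra_def by blast
lemma distrib_right: "x \<in> carr A \<Longrightarrow> y \<in> carr A \<Longrightarrow> z \<in> carr A \<Longrightarrow> mulm A (addm A y z) x = addm A (mulm A y x) (mulm A z x)"
  using alg unfolding kalgebra_def by blast
lemma smul_mul: "x \<in> carr A \<Longrightarrow> y \<in> carr A \<Longrightarrow> mulm A (smulm A r x) y = smulm A r (mulm A x y)"
  using alg unfolding kalgebra_def by metis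
lemma mul_smul: "x \<in> carr A \<Longrightarrow> y \<in> carr A \<Longrightarrow> mulm A x (smulm A r y) = smulm A r (mulm A x y)"
  using alg unfolding kalgebra_def by metis

lemma lmul_klinear: "b \<in> carr A \<Longrightarrow> klinear A A (\<lambda>x. mulm A b x)"
  unfolding klinear_def by (auto simp: distrib_left mul_smul)
lemma rmul_klinear: "b \<in> carr A \<Longrightarrow> klinear A A (\<lambda>x. mulm A x b)"
  unfolding klinear_def by (auto simp: distrib_right smul_mul)

lemma homk_precomp_lmul:
  assumes "g \<in> homk A N" "b \<in> carr A"
  shows "(\<lambda>c. if c \<in> carr A then g (mulm A b c) else zerom N) \<in> homk A N"
  using assms by (intro homkI) (simp_all add: homk_closed homk_add homk_smul distrib_left mul_smul)

lemma homk_precomp_rmul: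
  assumes "g \<in> homk A N" "b \<in> carr A"
  shows "(\<lambda>c. if c \<in> carr A then g (mulm A c b) else zerom N) \<in> homk A N"
  using assms by (intro homkI) (simp_all add: homk_closed homk_add homk_smul distrib_right smul_mul)

end

lemma k_algebra_iff: "k_algebra A \<longleftrightarrow> kalgebra A"
  unfolding k_algebra_def k_algebra_axioms_def k_module_def kalgebra_def by blast

lemma alg_aut_cong:
  assumes "kalgebra A" "alg_aut A f" and eq: "\<And>x. x \<in> carr A \<Longrightarrow> f x = g x"
  shows "alg_aut A g"
proof -
  interpret k_algebra A
    using assms(1) by (simp add: k_algebra_iff)
  have "bij_betw g (carr A) (carr A)"
    using assms(2) eq unfolding alg_aut_def by (metis bij_betw_cong)
  with assms(2) show ?thesis
    unfolding alg_aut_def by (simp add: eq[symmetric])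
qed

lemma alg_aut_comp:
  assumes "alg_aut A f" "alg_aut A g"
  shows "alg_aut A (\<lambda>x. f (g x))"
proof -
  have g: "\<And>x. x \<in> carr A \<Longrightarrow> g x \<in> carr A"
    using assms(2) unfolding alg_aut_def by (blast dest: bij_betwE)
  have "bij_betw (\<lambda>x. f (g x)) (carr A) (carr A)"
    using assms bij_betw_trans[of g "carr A" "carr A" f "carr A"] unfolding alg_aut_def by (simp add: comp_def)
  with assms show ?thesis
    unfolding alg_aut_def by (simp add: g)
qed

lemma alg_aut_inv:
  assumes "kalgebra A" "alg_aut A \<nu>"
  shows "alg_aut A (the_inv_into (carr A) \<nu>)"
proof -
  interpret k_algebra A
    using assms(1) by (simp add: k_algebra_iff)
  let ?\<iota> = "the_inv_into (carr A) \<nu>"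
  have bij: "bij_betw \<nu> (carr A) (carr A)"
    using assms(2) unfolding alg_aut_def by blast
  have \<iota>: "?\<iota> x \<in> carr A" "\<nu> (?\<iota> x) = x" if "x \<in> carr A" for x
    using bij that by (auto intro: the_inv_into_into f_the_inv_into_f simp: bij_betw_def)
  have \<iota>_eq: "?\<iota> z = w" if "w \<in> carr A" "\<nu> w = z" for w z
    using bij that by (auto simp: bij_betw_def the_inv_into_f_f)
  have \<nu>: "\<nu> (addm A x y) = addm A (\<nu> x) (\<nu> y)" "\<nu> (mulm A x y) = mulm A (\<nu> x) (\<nu> y)"
    "\<nu> (smulm A r x) = smulm A r (\<nu> x)" if "x \<in> carr A" "y \<in> carr A" for x y r
    using assms(2) that unfolding alg_aut_def by blast+
  show ?thesis
    unfolding alg_aut_def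
  proof (intro conjI ballI allI)
    show "bij_betw ?\<iota> (carr A) (carr A)"
      using bij by (rule bij_betw_the_inv_into)
    show "?\<iota> (onem A) = onem A"
      using assms(2) unfolding alg_aut_def by (intro \<iota>_eq) auto
    fix x y r assume xy: "x \<in> carr A" "y \<in> carr A"
    show "?\<iota> (addm A x y) = addm A (?\<iota> x) (?\<iota> y)"
      using xy \<iota> by (intro \<iota>_eq) (simp_all add: \<nu>)
    show "?\<iota> (mulm A x y) = mulm A (?\<iota> x) (?\<iota> y)"
      using xy \<iota> by (intro \<iota>_eq) (simp_all add: \<nu>)
    show "?\<iota> (smulm A r x) = smulm A r (?\<iota> x)"
      using xy \<iota> by (intro \<iota>_eq) (simp_all add: \<nu>)
  qed
qed

lemma alg_aut_subalgebra:
  assumes "alg_aut A \<nu>" "subalgebra B A" "\<nu> ` carr B = carr B"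
  shows "alg_aut B \<nu>"
proof -
  have sub: "\<And>x. x \<in> carr B \<Longrightarrow> x \<in> carr A"
    and ops: "\<And>x y. x \<in> carr B \<Longrightarrow> y \<in> carr B \<Longrightarrow> addm B x y = addm A x y \<and> mulm B x y = mulm A x y"
    and smul: "\<And>r x. x \<in> carr B \<Longrightarrow> smulm B r x = smulm A r x"
    and one: "onem B = onem A"
    using assms(2) unfolding subalgebra_def by blast+
  have "bij_betw \<nu> (carr B) (carr B)"
    using assms(1,3) sub unfolding alg_aut_def bij_betw_def by (blast intro: inj_on_subset)
  moreover have \<nu>B: "\<And>x. x \<in> carr B \<Longrightarrow> \<nu> x \<in> carr B"
    using assms(3) by blast
  ultimately show ?thesis
    using assms(1) unfolding alg_aut_def by (simp add: sub ops smul one)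
qed

lemma the_inv_into_image_eq:
  assumes "inj_on f A" "B \<subseteq> A" "f ` B = B" "b \<in> B"
  shows "the_inv_into A f b = the_inv_into B f b"
proof -
  have "inj_on f B" "b \<in> f ` B"
    using assms inj_on_subset by auto
  then have "the_inv_into B f b \<in> B" "f (the_inv_into B f b) = b"
    by (auto intro: the_inv_into_into f_the_inv_into_f)
  with assms show ?thesis
    by (metis subsetD the_inv_into_f_f)
qed

section \<open>The twisted bimodule W\<close>

locale frobenius_setup =
  fixes A B :: "('k::comm_ring_1, 'a) kalg" and P :: "('k, 'p) kmod" and P' :: "('k, 'q) kmod"
    and \<nu>A \<nu>B :: "'a \<Rightarrow> 'a"
  assumes inv_P: "invertible_kmod P" and inv_P': "invertible_kmod P'"
    and frobenius_A: "frobenius A P" and frobenius_B: "frobenius B P'"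
    and sub: "subalgebra B A"
    and fgp_A: "rfgp B (alg_bimod A)"
    and nakayama_A: "nakayama_aut A P \<nu>A" and \<nu>A_B: "\<nu>A ` carr B = carr B"
    and nakayama_B: "nakayama_aut B P' \<nu>B"
begin

lemma kalgebra_A: "kalgebra A" and kalgebra_B: "kalgebra B"
  using sub unfolding subalgebra_def by blast+

sublocale AlgA: k_algebra A
  using kalgebra_A by (simp add: k_algebra_iff)
sublocale AlgB: k_algebra B
  using kalgebra_B by (simp add: k_algebra_iff)
sublocale InvP: invertible_module P
  using inv_P by (simp add: invertible_module_iff)
sublocale InvP': invertible_module P'
  using inv_P' by (simp add: invertible_module_iff)

abbreviation "Q \<equiv> kdual P'"

sublocale ModQ: k_module Q
  by (rule k_module.intro, rule InvP'.kdual_kmodule)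
sublocale BQP: triple_tensor B Q P ..

abbreviation "W \<equiv> tensor (tensor B Q) P"

lemma sub_carr: "x \<in> carr B \<Longrightarrow> x \<in> carr A"
  using sub unfolding subalgebra_def by blast
lemma sub_mul: "x \<in> carr B \<Longrightarrow> y \<in> carr B \<Longrightarrow> mulm B x y = mulm A x y"
  using sub unfolding subalgebra_def by blast
lemma sub_add: "x \<in> carr B \<Longrightarrow> y \<in> carr B \<Longrightarrow> addm B x y = addm A x y"
  using sub unfolding subalgebra_def by blast
lemma sub_smul: "x \<in> carr B \<Longrightarrow> smulm B r x = smulm A r x"
  using sub unfolding subalgebra_def by blast
lemma sub_one: "onem B = onem A"
  using sub unfolding subalgebra_def by blast

definition \<phi> :: "'a \<Rightarrow> 'p" where
  "\<phi> = (SOME \<phi>. frobenius_hom A P \<phi> \<and> alg_aut A \<nu>A \<and>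
      (\<forall>a\<in>carr A. \<forall>x\<in>carr A. \<phi> (mulm A x a) = \<phi> (mulm A (\<nu>A a) x)))"

definition \<psi> :: "'a \<Rightarrow> 'q" where
  "\<psi> = (SOME \<psi>. frobenius_hom B P' \<psi> \<and> alg_aut B \<nu>B \<and>
      (\<forall>a\<in>carr B. \<forall>x\<in>carr B. \<psi> (mulm B x a) = \<psi> (mulm B (\<nu>B a) x)))"

lemma \<phi>: "frobenius_hom A P \<phi> \<and> alg_aut A \<nu>A \<and> (\<forall>a\<in>carr A. \<forall>x\<in>carr A. \<phi> (mulm A x a) = \<phi> (mulm A (\<nu>A a) x))"
  using nakayama_A unfolding nakayama_aut_def \<phi>_def by (rule someI_ex)
lemma \<psi>: "frobenius_hom B P' \<psi> \<and> alg_aut B \<nu>B \<and> (\<forall>a\<in>carr B. \<forall>x\<in>carr B. \<psi> (mulm B x a) = \<psi> (mulm B (\<nu>B a) x))"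
  using nakayama_B unfolding nakayama_aut_def \<psi>_def by (rule someI_ex)

lemma \<phi>_homk: "\<phi> \<in> homk A P"
  using \<phi> unfolding frobenius_hom_def by blast
lemma \<phi>_bij: "bij_betw (hom_ract A P \<phi>) (carr A) (homk A P)"
  using \<phi> unfolding frobenius_hom_def by blast
lemma \<phi>_nakayama: "a \<in> carr A \<Longrightarrow> x \<in> carr A \<Longrightarrow> \<phi> (mulm A x a) = \<phi> (mulm A (\<nu>A a) x)"
  using \<phi> by blast
lemma \<psi>_homk: "\<psi> \<in> homk B P'"
  using \<psi> unfolding frobenius_hom_def by blast
lemma \<psi>_bij: "bij_betw (hom_ract B P' \<psi>) (carr B) (homk B P')"
  using \<psi> unfolding frobenius_hom_def by blast
lemma \<psi>_nakayama: "a \<in> carr B \<Longrightarrow> x \<in> carr B \<Longrightarrow> \<psi> (mulm B x a) = \<psi> (mulm B (\<nu>B a) x)"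
  using \<psi> by blast

lemma \<nu>A_inj: "inj_on \<nu>A (carr A)"
  using \<phi> unfolding alg_aut_def bij_betw_def by blast

lemma \<nu>A_inv_eq: "b \<in> carr B \<Longrightarrow> the_inv_into (carr A) \<nu>A b = the_inv_into (carr B) \<nu>A b"
  using the_inv_into_image_eq[OF \<nu>A_inj _ \<nu>A_B] sub_carr by blast

lemma \<nu>A_inv_B:
  assumes "b \<in> carr B"
  shows "the_inv_into (carr A) \<nu>A b \<in> carr B" "\<nu>A (the_inv_into (carr A) \<nu>A b) = b"
proof -
  have "inj_on \<nu>A (carr B)"
    using \<nu>A_inj sub_carr by (meson inj_on_subset subsetI)
  with assms \<nu>A_B show "the_inv_into (carr A) \<nu>A b \<in> carr B" "\<nu>A (the_inv_into (carr A) \<nu>A b) = b"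
    unfolding \<nu>A_inv_eq[OF assms] by (auto intro: the_inv_into_into f_the_inv_into_f)
qed

definition \<beta> :: "'a \<Rightarrow> 'a" where
  "\<beta> b = \<nu>B (the_inv_into (carr A) \<nu>A b)"

lemma \<beta>_alg_aut: "alg_aut B \<beta>"
proof -
  have "alg_aut B \<nu>A"
    using \<phi> sub \<nu>A_B by (blast intro: alg_aut_subalgebra)
  then have "alg_aut B (\<lambda>b. \<nu>B (the_inv_into (carr B) \<nu>A b))"
    using \<psi> kalgebra_B alg_aut_comp alg_aut_inv by blast
  then show ?thesis
    unfolding \<beta>_def by (rule alg_aut_cong[OF kalgebra_B]) (simp add: \<nu>A_inv_eq)
qed

lemma \<beta>_closed [simp, intro]: "b \<in> carr B \<Longrightarrow> \<beta> b \<in> carr B"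
  using \<beta>_alg_aut unfolding alg_aut_def by (blast dest: bij_betwE)
lemma \<beta>_add: "x \<in> carr B \<Longrightarrow> y \<in> carr B \<Longrightarrow> \<beta> (addm B x y) = addm B (\<beta> x) (\<beta> y)"
  using \<beta>_alg_aut unfolding alg_aut_def by blast
lemma \<beta>_mul: "x \<in> carr B \<Longrightarrow> y \<in> carr B \<Longrightarrow> \<beta> (mulm B x y) = mulm B (\<beta> x) (\<beta> y)"
  using \<beta>_alg_aut unfolding alg_aut_def by blast
lemma \<beta>_one: "\<beta> (onem B) = onem B"
  using \<beta>_alg_aut unfolding alg_aut_def by blast
lemma \<beta>_bij: "bij_betw \<beta> (carr B) (carr B)"
  using \<beta>_alg_aut unfolding alg_aut_def by blast

definition \<Psi>inv :: "('a \<Rightarrow> 'q) \<Rightarrow> 'a" where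
  "\<Psi>inv g = the_inv_into (carr B) (hom_ract B P' \<psi>) g"

lemma \<Psi>inv:
  assumes "g \<in> homk B P'"
  shows "\<Psi>inv g \<in> carr B" "hom_ract B P' \<psi> (\<Psi>inv g) = g"
  using assms \<psi>_bij unfolding \<Psi>inv_def bij_betw_def
  by (auto intro: the_inv_into_into f_the_inv_into_f)

lemma \<Psi>inv_mul:
  assumes "g \<in> homk B P'" "c \<in> carr B"
  shows "\<psi> (mulm B (\<Psi>inv g) c) = g c"
proof -
  have "hom_ract B P' \<psi> (\<Psi>inv g) c = g c"
    using \<Psi>inv(2)[OF assms(1)] by simp
  with assms(2) show ?thesis
    unfolding hom_ract_def by simp
qed

lemma \<Psi>inv_eqI:
  assumes "g \<in> homk B P'" "x \<in> carr B" "\<And>c. c \<in> carr B \<Longrightarrow> \<psi> (mulm B x c) = g c"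
  shows "\<Psi>inv g = x"
proof -
  have "hom_ract B P' \<psi> x c = g c" for c
    using assms homk_ext[OF assms(1), of c] unfolding hom_ract_def by (cases "c \<in> carr B") simp_all
  then have "hom_ract B P' \<psi> x = g" ..
  then show ?thesis
    unfolding \<Psi>inv_def using \<psi>_bij assms(2) by (auto simp: bij_betw_def the_inv_into_f_f)
qed

lemma homk_B_P'_add:
  "g \<in> homk B P' \<Longrightarrow> g' \<in> homk B P' \<Longrightarrow> (\<lambda>c. if c \<in> carr B then addm P' (g c) (g' c) else zerom P') \<in> homk B P'"
  by (intro homkI) (simp_all add: homk_closed homk_add homk_smul InvP'.add_add_swap InvP'.smul_add)

lemma \<Psi>inv_add:
  assumes "g \<in> homk B P'" "g' \<in> homk B P'"
  shows "\<Psi>inv (\<lambda>c. if c \<in> carr B then addm P' (g c) (g' c) else zerom P') = addm B (\<Psi>inv g) (\<Psi>inv g')"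
  using homk_B_P'_add[OF assms] \<Psi>inv[OF assms(1)] \<Psi>inv[OF assms(2)]
  by (intro \<Psi>inv_eqI) (simp_all add: AlgB.distrib_right \<Psi>inv_mul assms homk_add[OF \<psi>_homk])

lemma \<Psi>inv_precomp_lmul:
  assumes "g \<in> homk B P'" "b \<in> carr B"
  shows "\<Psi>inv (\<lambda>c. if c \<in> carr B then g (mulm B b c) else zerom P') = mulm B (\<Psi>inv g) b"
proof (rule \<Psi>inv_eqI)
  show "(\<lambda>c. if c \<in> carr B then g (mulm B b c) else zerom P') \<in> homk B P'"
    using assms by (intro homkI) (simp_all add: homk_closed homk_add homk_smul AlgB.distrib_left AlgB.mul_smul)
  show "mulm B (\<Psi>inv g) b \<in> carr B"
    using assms \<Psi>inv by simp
  fix c assume "c \<in> carr B"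
  then show "\<psi> (mulm B (mulm B (\<Psi>inv g) b) c) = (if c \<in> carr B then g (mulm B b c) else zerom P')"
    using assms \<Psi>inv by (simp add: AlgB.mul_assoc \<Psi>inv_mul)
qed

text \<open>Precomposing with right multiplication is where the Nakayama automorphism of B enters.\<close>

lemma \<Psi>inv_precomp_rmul:
  assumes "g \<in> homk B P'" "b \<in> carr B"
  shows "\<Psi>inv (\<lambda>c. if c \<in> carr B then g (mulm B c b) else zerom P') = mulm B (\<nu>B b) (\<Psi>inv g)"
proof (rule \<Psi>inv_eqI)
  have \<nu>B_b: "\<nu>B b \<in> carr B"
    using assms \<psi> unfolding alg_aut_def by (blast dest: bij_betwE)
  show "(\<lambda>c. if c \<in> carr B then g (mulm B c b) else zerom P') \<in> homk B P'"
    using assms by (intro homkI) (simp_all add: homk_closed homk_add homk_smul AlgB.distrib_right AlgB.smul_mul)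
  show "mulm B (\<nu>B b) (\<Psi>inv g) \<in> carr B"
    using assms \<Psi>inv \<nu>B_b by simp
  fix c assume c: "c \<in> carr B"
  have "\<psi> (mulm B (mulm B (\<nu>B b) (\<Psi>inv g)) c) = \<psi> (mulm B (\<nu>B b) (mulm B (\<Psi>inv g) c))"
    using assms c \<Psi>inv \<nu>B_b by (simp add: AlgB.mul_assoc)
  also have "\<dots> = \<psi> (mulm B (mulm B (\<Psi>inv g) c) b)"
    using assms c \<Psi>inv by (simp add: \<psi>_nakayama)
  also have "\<dots> = \<psi> (mulm B (\<Psi>inv g) (mulm B c b))"
    using assms c \<Psi>inv by (simp add: AlgB.mul_assoc)
  also have "\<dots> = g (mulm B c b)"
    using assms c by (simp add: \<Psi>inv_mul)
  finally show "\<psi> (mulm B (mulm B (\<nu>B b) (\<Psi>inv g)) c) = (if c \<in> carr B then g (mulm B c b) else zerom P')"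
    using c by simp
qed

definition lactW :: "'a \<Rightarrow> _" where
  "lactW b = BQP.tensor3_map1 (\<lambda>x. mulm B (\<beta> b) x)"

definition ractW :: "'a \<Rightarrow> _" where
  "ractW c = BQP.tensor3_map1 (\<lambda>x. mulm B x c)"

abbreviation "W\<^sub>B \<equiv> W_bimod B \<beta> Q P"

lemma W_bimod_simps:
  "bcarr W\<^sub>B = carr W" "badd W\<^sub>B = addm W" "bzero W\<^sub>B = zerom W" "lact W\<^sub>B b = lactW b" "ract W\<^sub>B w c = ractW c w"
  unfolding W_bimod_def Let_def lactW_def ractW_def BQP.tensor3_map1_def by simp_all

lemma W_ext:
  assumes "w \<in> carr W"
    and "\<And>X. X \<in> carr W \<Longrightarrow> g X \<in> carr W" "\<And>X. X \<in> carr W \<Longrightarrow> h X \<in> carr W"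
    and "\<And>X Y. X \<in> carr W \<Longrightarrow> Y \<in> carr W \<Longrightarrow> g (addm W X Y) = addm W (g X) (g Y)"
    and "\<And>X Y. X \<in> carr W \<Longrightarrow> Y \<in> carr W \<Longrightarrow> h (addm W X Y) = addm W (h X) (h Y)"
    and "\<And>x q p. x \<in> carr B \<Longrightarrow> q \<in> carr Q \<Longrightarrow> p \<in> carr P \<Longrightarrow> g (BQP.tens3 x q p) = h (BQP.tens3 x q p)"
  shows "g w = h w"
  by (rule BQP.tens3_ext[OF assms(1) BQP.Outer.T.kmod assms(2-6)])

lemma lactW_klinear: "b \<in> carr B \<Longrightarrow> klinear W W (lactW b)"
  unfolding lactW_def by (simp add: BQP.tensor3_map1_klinear AlgB.lmul_klinear)
lemma ractW_klinear: "c \<in> carr B \<Longrightarrow> klinear W W (ractW c)"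
  unfolding ractW_def by (simp add: BQP.tensor3_map1_klinear AlgB.rmul_klinear)

lemma lactW_tens3: "b \<in> carr B \<Longrightarrow> x \<in> carr B \<Longrightarrow> q \<in> carr Q \<Longrightarrow> p \<in> carr P \<Longrightarrow>
    lactW b (BQP.tens3 x q p) = BQP.tens3 (mulm B (\<beta> b) x) q p"
  unfolding lactW_def by (simp add: BQP.tensor3_map1_tens3 AlgB.lmul_klinear)
lemma ractW_tens3: "c \<in> carr B \<Longrightarrow> x \<in> carr B \<Longrightarrow> q \<in> carr Q \<Longrightarrow> p \<in> carr P \<Longrightarrow>
    ractW c (BQP.tens3 x q p) = BQP.tens3 (mulm B x c) q p"
  unfolding ractW_def by (simp add: BQP.tensor3_map1_tens3 AlgB.rmul_klinear)

lemma lactW_closed [simp, intro]: "b \<in> carr B \<Longrightarrow> w \<in> carr W \<Longrightarrow> lactW b w \<in> carr W"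
  using lactW_klinear unfolding klinear_def by blast
lemma ractW_closed [simp, intro]: "c \<in> carr B \<Longrightarrow> w \<in> carr W \<Longrightarrow> ractW c w \<in> carr W"
  using ractW_klinear unfolding klinear_def by blast
lemma lactW_add: "b \<in> carr B \<Longrightarrow> w \<in> carr W \<Longrightarrow> w' \<in> carr W \<Longrightarrow> lactW b (addm W w w') = addm W (lactW b w) (lactW b w')"
  using lactW_klinear unfolding klinear_def by blast
lemma ractW_add: "c \<in> carr B \<Longrightarrow> w \<in> carr W \<Longrightarrow> w' \<in> carr W \<Longrightarrow> ractW c (addm W w w') = addm W (ractW c w) (ractW c w')"
  using ractW_klinear unfolding klinear_def by blast
lemma lactW_add_left:
  assumes "b \<in> carr B" "c \<in> carr B" "w \<in> carr W"
  shows "lactW (addm B b c) w = addm W (lactW b w) (lactW c w)"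
  using assms(3) by (rule W_ext) (use assms in \<open>simp_all add: lactW_add lactW_tens3 \<beta>_add
    AlgB.distrib_right BQP.tens3_add1 BQP.Outer.T.add_add_swap\<close>)

lemma ractW_add_left:
  assumes "b \<in> carr B" "c \<in> carr B" "w \<in> carr W"
  shows "ractW (addm B b c) w = addm W (ractW b w) (ractW c w)"
  using assms(3) by (rule W_ext) (use assms in \<open>simp_all add: ractW_add ractW_tens3
    AlgB.distrib_left BQP.tens3_add1 BQP.Outer.T.add_add_swap\<close>)

lemma ractW_smul_left:
  assumes "c \<in> carr B" "w \<in> carr W"
  shows "ractW (smulm B r c) w = smulm W r (ractW c w)"
  using assms(2) by (rule W_ext) (use assms in \<open>simp_all add: ractW_add ractW_tens3
    AlgB.mul_smul BQP.tens3_smul1 BQP.Outer.T.smul_add\<close>)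

lemma ractW_scalar: "w \<in> carr W \<Longrightarrow> ractW (smulm B r (onem B)) w = smulm W r w"
  by (erule W_ext) (simp_all add: ractW_add ractW_tens3 AlgB.mul_smul BQP.tens3_smul1 BQP.Outer.T.smul_add)

lemma W_bimodule: "bimodule B W\<^sub>B"
proof -
  have "lactW (mulm B b c) w = lactW b (lactW c w)" "ractW (mulm B b c) w = ractW c (ractW b w)"
    "lactW b (ractW c w) = ractW c (lactW b w)"
    if "b \<in> carr B" "c \<in> carr B" "w \<in> carr W" for b c w
    using that(3)
    by (rule W_ext; use that in \<open>simp add: lactW_add ractW_add lactW_tens3 ractW_tens3 \<beta>_mul AlgB.mul_assoc\<close>)+
  moreover have "lactW (onem B) w = w" "ractW (onem B) w = w" if "w \<in> carr W" for w
    using that by (rule W_ext; simp add: lactW_add ractW_add lactW_tens3 ractW_tens3 \<beta>_one)+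
  ultimately show ?thesis
    unfolding bimodule_def W_bimod_simps
    by (simp add: BQP.Outer.T.add_assoc BQP.Outer.T.add_comm BQP.Outer.T.add_lcomm BQP.Outer.T.neg_ex lactW_add ractW_add
        lactW_add_left ractW_add_left)
qed

lemma dual_P'_add: "q \<in> carr Q \<Longrightarrow> x \<in> carr P' \<Longrightarrow> y \<in> carr P' \<Longrightarrow> q (addm P' x y) = q x + q y"
  using homk_add[of q P' kring] by simp
lemma dual_P'_smul: "q \<in> carr Q \<Longrightarrow> x \<in> carr P' \<Longrightarrow> q (smulm P' r x) = r * q x"
  using homk_smul[of q P' kring] by simp
lemma dual_P_add: "\<pi> \<in> homk P kring \<Longrightarrow> x \<in> carr P \<Longrightarrow> y \<in> carr P \<Longrightarrow> \<pi> (addm P x y) = \<pi> x + \<pi> y"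
  using homk_add[of \<pi> P kring] by simp
lemma dual_P_smul: "\<pi> \<in> homk P kring \<Longrightarrow> x \<in> carr P \<Longrightarrow> \<pi> (smulm P r x) = r * \<pi> x"
  using homk_smul[of \<pi> P kring] by simp
lemma dual_B_add: "\<chi> \<in> homk B kring \<Longrightarrow> x \<in> carr B \<Longrightarrow> y \<in> carr B \<Longrightarrow> \<chi> (addm B x y) = \<chi> x + \<chi> y"
  using homk_add[of \<chi> B kring] by simp
lemma dual_B_smul: "\<chi> \<in> homk B kring \<Longrightarrow> x \<in> carr B \<Longrightarrow> \<chi> (smulm B r x) = r * \<chi> x"
  using homk_smul[of \<chi> B kring] by simp

lemma \<psi>_closed [simp, intro]: "x \<in> carr B \<Longrightarrow> \<psi> x \<in> carr P'"
  by (rule homk_closed[OF \<psi>_homk])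
lemma \<psi>_add: "x \<in> carr B \<Longrightarrow> y \<in> carr B \<Longrightarrow> \<psi> (addm B x y) = addm P' (\<psi> x) (\<psi> y)"
  by (rule homk_add[OF \<psi>_homk])
lemma \<psi>_smul: "x \<in> carr B \<Longrightarrow> \<psi> (smulm B r x) = smulm P' r (\<psi> x)"
  by (rule homk_smul[OF \<psi>_homk])

lemma \<phi>_closed [simp, intro]: "x \<in> carr A \<Longrightarrow> \<phi> x \<in> carr P"
  by (rule homk_closed[OF \<phi>_homk])
lemma \<phi>_add: "x \<in> carr A \<Longrightarrow> y \<in> carr A \<Longrightarrow> \<phi> (addm A x y) = addm P (\<phi> x) (\<phi> y)"
  by (rule homk_add[OF \<phi>_homk])
lemma \<phi>_smul: "x \<in> carr A \<Longrightarrow> \<phi> (smulm A r x) = smulm P r (\<phi> x)"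
  by (rule homk_smul[OF \<phi>_homk])

text \<open>Composed with the right action of B, this evaluation identifies W with Hom(B, P).\<close>

definition \<Theta> :: "_ \<Rightarrow> 'p" where
  "\<Theta> = BQP.tensor3_lift P (\<lambda>x q p. smulm P (q (\<psi> x)) p)"

lemma \<Theta>:
  shows \<Theta>_tens3: "\<And>x q p. x \<in> carr B \<Longrightarrow> q \<in> carr Q \<Longrightarrow> p \<in> carr P \<Longrightarrow> \<Theta> (BQP.tens3 x q p) = smulm P (q (\<psi> x)) p"
    and \<Theta>_klinear: "klinear W P \<Theta>"
proof -
  have "BQP.trilinear P (\<lambda>x q p. smulm P (q (\<psi> x)) p)"
    unfolding BQP.trilinear_def bilinear_def klinear_def
    by (simp add: \<psi>_add \<psi>_smul dual_P'_add dual_P'_smul InvP.add_smul InvP.smul_add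
        InvP.smul_smul[symmetric] mult.commute distrib_right)
  from BQP.tensor3_lift[OF InvP.kmod this]
  show "\<And>x q p. x \<in> carr B \<Longrightarrow> q \<in> carr Q \<Longrightarrow> p \<in> carr P \<Longrightarrow> \<Theta> (BQP.tens3 x q p) = smulm P (q (\<psi> x)) p"
    and "klinear W P \<Theta>"
    unfolding \<Theta>_def by simp_all
qed

lemma \<Theta>_closed [simp, intro]: "w \<in> carr W \<Longrightarrow> \<Theta> w \<in> carr P"
  using \<Theta>_klinear unfolding klinear_def by blast
lemma \<Theta>_add: "w \<in> carr W \<Longrightarrow> w' \<in> carr W \<Longrightarrow> \<Theta> (addm W w w') = addm P (\<Theta> w) (\<Theta> w')"
  using \<Theta>_klinear unfolding klinear_def by blast
lemma \<Theta>_smul: "w \<in> carr W \<Longrightarrow> \<Theta> (smulm W r w) = smulm P r (\<Theta> w)"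
  using \<Theta>_klinear unfolding klinear_def by blast

definition \<theta> :: "'q \<Rightarrow> ('p \<Rightarrow> 'k) \<Rightarrow> _ \<Rightarrow> 'a" where
  "\<theta> y \<pi> w = (if w \<in> carr W then BQP.tensor3_lift B (\<lambda>x q p. smulm B (q y * \<pi> p) x) w else zerom B)"

lemma \<theta>:
  assumes "y \<in> carr P'" "\<pi> \<in> homk P kring"
  shows \<theta>_tens3: "\<And>x q p. x \<in> carr B \<Longrightarrow> q \<in> carr Q \<Longrightarrow> p \<in> carr P \<Longrightarrow> \<theta> y \<pi> (BQP.tens3 x q p) = smulm B (q y * \<pi> p) x"
    and \<theta>_klinear: "klinear W B (\<theta> y \<pi>)"
proof -
  have "BQP.trilinear B (\<lambda>x q p. smulm B (q y * \<pi> p) x)"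
    unfolding BQP.trilinear_def bilinear_def klinear_def using assms
    by (simp add: dual_P_add dual_P_smul AlgB.add_smul AlgB.smul_add AlgB.smul_smul[symmetric]
        mult.commute distrib_right distrib_left mult.left_commute)
  from BQP.tensor3_lift[OF AlgB.kmod this]
  show "\<And>x q p. x \<in> carr B \<Longrightarrow> q \<in> carr Q \<Longrightarrow> p \<in> carr P \<Longrightarrow> \<theta> y \<pi> (BQP.tens3 x q p) = smulm B (q y * \<pi> p) x"
    and "klinear W B (\<theta> y \<pi>)"
    unfolding \<theta>_def klinear_def by simp_all
qed

lemma \<theta>_ractW:
  assumes "y \<in> carr P'" "\<pi> \<in> homk P kring" "b \<in> carr B" "w \<in> carr W"
  shows "\<theta> y \<pi> (ractW b w) = mulm B (\<theta> y \<pi> w) b"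
  using assms(4)
proof (rule BQP.tens3_ext[where g = "\<lambda>w. \<theta> y \<pi> (ractW b w)" and h = "\<lambda>w. mulm B (\<theta> y \<pi> w) b", OF _ AlgB.kmod])
  note \<theta>_lin = \<theta>_klinear[OF assms(1,2), unfolded klinear_def]
  fix x q p assume "x \<in> carr B" "q \<in> carr Q" "p \<in> carr P"
  with assms show "\<theta> y \<pi> (ractW b (BQP.tens3 x q p)) = mulm B (\<theta> y \<pi> (BQP.tens3 x q p)) b"
    by (simp add: \<theta>_tens3 ractW_tens3 AlgB.smul_mul)
qed (use assms \<theta>_klinear[OF assms(1,2)] in \<open>simp_all add: klinear_def ractW_add AlgB.distrib_right\<close>)

lemma \<theta>_rhom: "y \<in> carr P' \<Longrightarrow> \<pi> \<in> homk P kring \<Longrightarrow> \<theta> y \<pi> \<in> rhom B W\<^sub>B (alg_bimod B)"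
  unfolding rhom_def W_bimod_simps alg_bimod_def using \<theta>_klinear \<theta>_ractW
  by (simp add: klinear_def \<theta>_def)

definition \<tau> :: "('a \<Rightarrow> 'k) \<Rightarrow> 'q \<Rightarrow> _ \<Rightarrow> 'p" where
  "\<tau> \<chi> y = BQP.tensor3_lift P (\<lambda>x q p. smulm P (\<chi> x * q y) p)"

lemma \<tau>:
  assumes "\<chi> \<in> homk B kring" "y \<in> carr P'"
  shows \<tau>_tens3: "\<And>x q p. x \<in> carr B \<Longrightarrow> q \<in> carr Q \<Longrightarrow> p \<in> carr P \<Longrightarrow> \<tau> \<chi> y (BQP.tens3 x q p) = smulm P (\<chi> x * q y) p"
    and \<tau>_klinear: "klinear W P (\<tau> \<chi> y)"
proof -
  have "BQP.trilinear P (\<lambda>x q p. smulm P (\<chi> x * q y) p)"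
    unfolding BQP.trilinear_def bilinear_def klinear_def using assms
    by (simp add: dual_B_add dual_B_smul InvP.add_smul InvP.smul_add InvP.smul_smul[symmetric]
        mult.commute distrib_right distrib_left mult.left_commute)
  from BQP.tensor3_lift[OF InvP.kmod this]
  show "\<And>x q p. x \<in> carr B \<Longrightarrow> q \<in> carr Q \<Longrightarrow> p \<in> carr P \<Longrightarrow> \<tau> \<chi> y (BQP.tens3 x q p) = smulm P (\<chi> x * q y) p"
    and "klinear W P (\<tau> \<chi> y)"
    unfolding \<tau>_def by simp_all
qed

lemma \<tau>_add_right:
  assumes "\<chi> \<in> homk B kring" "y \<in> carr P'" "y' \<in> carr P'" "w \<in> carr W"
  shows "\<tau> \<chi> (addm P' y y') w = addm P (\<tau> \<chi> y w) (\<tau> \<chi> y' w)"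
  using assms(4)
proof (rule BQP.tens3_ext[where g = "\<tau> \<chi> (addm P' y y')" and h = "\<lambda>w. addm P (\<tau> \<chi> y w) (\<tau> \<chi> y' w)", OF _ InvP.kmod])
  fix x q p assume "x \<in> carr B" "q \<in> carr Q" "p \<in> carr P"
  with assms show "\<tau> \<chi> (addm P' y y') (BQP.tens3 x q p) = addm P (\<tau> \<chi> y (BQP.tens3 x q p)) (\<tau> \<chi> y' (BQP.tens3 x q p))"
    by (simp add: \<tau>_tens3 dual_P'_add distrib_left InvP.add_smul)
qed (use assms \<tau>_klinear[OF assms(1,2)] \<tau>_klinear[OF assms(1,3)] \<tau>_klinear[OF assms(1) InvP'.add_closed[OF assms(2,3)]]
  in \<open>simp_all add: klinear_def InvP.add_add_swap\<close>)

lemma \<tau>_smul_right: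
  assumes "\<chi> \<in> homk B kring" "y \<in> carr P'" "w \<in> carr W"
  shows "\<tau> \<chi> (smulm P' s y) w = smulm P s (\<tau> \<chi> y w)"
  using assms(3)
proof (rule BQP.tens3_ext[where g = "\<tau> \<chi> (smulm P' s y)" and h = "\<lambda>w. smulm P s (\<tau> \<chi> y w)", OF _ InvP.kmod])
  fix x q p assume "x \<in> carr B" "q \<in> carr Q" "p \<in> carr P"
  with assms show "\<tau> \<chi> (smulm P' s y) (BQP.tens3 x q p) = smulm P s (\<tau> \<chi> y (BQP.tens3 x q p))"
    by (simp add: \<tau>_tens3 dual_P'_smul InvP.smul_smul mult.left_commute)
qed (use assms \<tau>_klinear[OF assms(1,2)] \<tau>_klinear[OF assms(1) InvP'.smul_closed[OF assms(2)]]
  in \<open>simp_all add: klinear_def InvP.smul_add\<close>)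

lemma rhom_W_klinear:
  assumes "F \<in> rhom B (alg_bimod A) W\<^sub>B"
  shows "klinear A W F"
proof -
  have F: "\<And>z. z \<in> carr A \<Longrightarrow> F z \<in> carr W"
    "\<And>z z'. z \<in> carr A \<Longrightarrow> z' \<in> carr A \<Longrightarrow> F (addm A z z') = addm W (F z) (F z')"
    "\<And>z b. z \<in> carr A \<Longrightarrow> b \<in> carr B \<Longrightarrow> F (mulm A z b) = ractW b (F z)"
    using assms unfolding rhom_def alg_bimod_def W_bimod_simps by simp_all
  have smul: "F (smulm A r z) = smulm W r (F z)" if z: "z \<in> carr A" for z r
  proof -
    have "smulm A r z = mulm A z (smulm B r (onem B))"
      using z sub_smul[OF AlgB.one_closed, of r] by (simp add: sub_one AlgA.mul_smul)
    then show ?thesis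
      using z F(1,3)[of z] by (simp add: ractW_scalar)
  qed
  then show ?thesis
    unfolding klinear_def by (simp add: F)
qed

lemma rhom_WW_klinear:
  assumes "F \<in> rhom B W\<^sub>B W\<^sub>B"
  shows "klinear W W F"
proof -
  have F: "\<And>w. w \<in> carr W \<Longrightarrow> F w \<in> carr W"
    "\<And>w w'. w \<in> carr W \<Longrightarrow> w' \<in> carr W \<Longrightarrow> F (addm W w w') = addm W (F w) (F w')"
    "\<And>w b. w \<in> carr W \<Longrightarrow> b \<in> carr B \<Longrightarrow> F (ractW b w) = ractW b (F w)"
    using assms unfolding rhom_def W_bimod_simps by simp_all
  have smul: "F (smulm W r w) = smulm W r (F w)" if w: "w \<in> carr W" for w r
    using w F(1)[of w] F(3)[of w "smulm B r (onem B)"] by (simp add: ractW_scalar)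
  then show ?thesis
    unfolding klinear_def by (simp add: F)
qed
lemma tens3_dual_smul: "x \<in> carr B \<Longrightarrow> q \<in> carr Q \<Longrightarrow> p \<in> carr P \<Longrightarrow>
    BQP.tens3 x (\<lambda>y. r * q y) p = smulm W r (BQP.tens3 x q p)"
  using BQP.tens3_smul2[of x q p r] by simp

lemma tens3_dual_add: "x \<in> carr B \<Longrightarrow> q \<in> carr Q \<Longrightarrow> q' \<in> carr Q \<Longrightarrow> p \<in> carr P \<Longrightarrow>
    BQP.tens3 x (\<lambda>y. q y + q' y) p = addm W (BQP.tens3 x q p) (BQP.tens3 x q' p)"
  using BQP.tens3_add2[of x q q' p] by simp

lemma \<beta>_\<nu>A: "b \<in> carr B \<Longrightarrow> \<beta> (\<nu>A b) = \<nu>B b"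
  unfolding \<beta>_def using \<nu>A_inj sub_carr by (simp add: the_inv_into_f_f)

definition hom_of_W :: "_ \<Rightarrow> 'a \<Rightarrow> 'p" where
  "hom_of_W w = (\<lambda>c. if c \<in> carr B then \<Theta> (ractW c w) else zerom P)"

lemma hom_of_W_homk: "w \<in> carr W \<Longrightarrow> hom_of_W w \<in> homk B P"
  unfolding hom_of_W_def
  by (intro homkI) (simp_all add: ractW_add_left ractW_smul_left \<Theta>_add \<Theta>_smul)

lemma hom_of_W_add: "w \<in> carr W \<Longrightarrow> w' \<in> carr W \<Longrightarrow>
    hom_of_W (addm W w w') = (\<lambda>c. if c \<in> carr B then addm P (hom_of_W w c) (hom_of_W w' c) else zerom P)"
  unfolding hom_of_W_def by (intro ext) (simp add: ractW_add \<Theta>_add)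

definition \<phi>_hom :: "'a \<Rightarrow> 'a \<Rightarrow> 'p" where
  "\<phi>_hom u = (\<lambda>c. if c \<in> carr B then \<phi> (mulm A u c) else zerom P)"

lemma \<phi>_hom_homk:
  assumes "u \<in> carr A"
  shows "\<phi>_hom u \<in> homk B P"
  unfolding \<phi>_hom_def
proof (rule homkI)
  fix x y assume "x \<in> carr B" "y \<in> carr B"
  with assms show "(if addm B x y \<in> carr B then \<phi> (mulm A u (addm B x y)) else zerom P) =
      addm P (if x \<in> carr B then \<phi> (mulm A u x) else zerom P) (if y \<in> carr B then \<phi> (mulm A u y) else zerom P)"
    by (simp add: sub_carr sub_add[symmetric] AlgA.distrib_left[symmetric] \<phi>_add[symmetric])
next
  fix r x assume "x \<in> carr B"
  with assms show "(if smulm B r x \<in> carr B then \<phi> (mulm A u (smulm B r x)) else zerom P) =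
      smulm P r (if x \<in> carr B then \<phi> (mulm A u x) else zerom P)"
    by (simp add: AlgB.smul_closed) (simp add: sub_carr sub_smul AlgA.mul_smul \<phi>_smul)
qed (use assms sub_carr in auto)

lemma \<phi>_hom_add: "u \<in> carr A \<Longrightarrow> u' \<in> carr A \<Longrightarrow>
    \<phi>_hom (addm A u u') = (\<lambda>c. if c \<in> carr B then addm P (\<phi>_hom u c) (\<phi>_hom u' c) else zerom P)"
  unfolding \<phi>_hom_def by (intro ext) (simp add: sub_carr AlgA.distrib_right \<phi>_add)

lemma \<phi>_hom_mul_right:
  "u \<in> carr A \<Longrightarrow> b \<in> carr B \<Longrightarrow> \<phi>_hom (mulm A u b) = (\<lambda>c. if c \<in> carr B then \<phi>_hom u (mulm B b c) else zerom P)"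
proof (rule ext)
  fix c assume "u \<in> carr A" "b \<in> carr B"
  then show "\<phi>_hom (mulm A u b) c = (if c \<in> carr B then \<phi>_hom u (mulm B b c) else zerom P)"
    unfolding \<phi>_hom_def
    by (cases "c \<in> carr B") (simp_all add: AlgB.mul_closed, simp add: sub_carr sub_mul AlgA.mul_assoc)
qed

text \<open>Left multiplication by b becomes right multiplication by the preimage of b under \<nu>A,
  by the Nakayama property of \<phi>.\<close>

lemma \<phi>_hom_mul_left:
  assumes "u \<in> carr A" "b \<in> carr B"
  shows "\<phi>_hom (mulm A b u) = (\<lambda>c. if c \<in> carr B then \<phi>_hom u (mulm B c (the_inv_into (carr A) \<nu>A b)) else zerom P)"
proof (rule ext)
  fix c
  let ?b' = "the_inv_into (carr A) \<nu>A b"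
  have b': "?b' \<in> carr B" "\<nu>A ?b' = b"
    using \<nu>A_inv_B[OF assms(2)] by auto
  show "\<phi>_hom (mulm A b u) c = (if c \<in> carr B then \<phi>_hom u (mulm B c ?b') else zerom P)"
  proof (cases "c \<in> carr B")
    case True
    have "\<phi> (mulm A (mulm A b u) c) = \<phi> (mulm A (\<nu>A ?b') (mulm A u c))"
      using assms True b' by (simp add: sub_carr AlgA.mul_assoc)
    also have "\<dots> = \<phi> (mulm A (mulm A u c) ?b')"
      using assms True b' by (simp add: sub_carr \<phi>_nakayama)
    also have "\<dots> = \<phi> (mulm A u (mulm B c ?b'))"
      using assms True b' by (simp add: sub_carr sub_mul AlgA.mul_assoc)
    finally show ?thesis
      unfolding \<phi>_hom_def using True b' by simp
  qed (simp add: \<phi>_hom_def)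
qed

end

section \<open>The Frobenius isomorphism and invertibility of W\<close>

locale frobenius_bases = frobenius_setup A B P P' \<nu>A \<nu>B
  for A B :: "('k::comm_ring_1, 'a) kalg" and P :: "('k, 'p) kmod" and P' :: "('k, 'q) kmod"
    and \<nu>A \<nu>B :: "'a \<Rightarrow> 'a" +
  fixes np :: nat and pl :: "nat \<Rightarrow> 'p" and \<pi>l :: "nat \<Rightarrow> 'p \<Rightarrow> 'k"
    and I1 :: "(nat \<times> nat) set" and qg :: "nat \<times> nat \<Rightarrow> 'q \<Rightarrow> 'k" and yg :: "nat \<times> nat \<Rightarrow> 'q"
    and ne :: nat and e :: "nat \<Rightarrow> 'q" and \<xi> :: "nat \<Rightarrow> 'q \<Rightarrow> 'k"
    and I2 :: "(nat \<times> nat) set" and \<pi>g :: "nat \<times> nat \<Rightarrow> 'p \<Rightarrow> 'k" and pg :: "nat \<times> nat \<Rightarrow> 'p"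
    and nb :: nat and bb :: "nat \<Rightarrow> 'a" and \<chi> :: "nat \<Rightarrow> 'a \<Rightarrow> 'k"
  assumes basis_P: "\<forall>i<np. pl i \<in> carr P \<and> \<pi>l i \<in> homk P kring"
    and expand_P: "\<forall>y\<in>carr P. y = ksum P (\<lambda>i. smulm P (\<pi>l i y) (pl i)) {..<np}"
    and generator_P': "finite I1" "\<forall>i\<in>I1. qg i \<in> homk P' kring \<and> yg i \<in> carr P'" "(\<Sum>i\<in>I1. qg i (yg i)) = 1"
    and basis_P': "\<forall>i<ne. e i \<in> carr P' \<and> \<xi> i \<in> homk P' kring"
    and expand_P': "\<forall>y\<in>carr P'. y = ksum P' (\<lambda>i. smulm P' (\<xi> i y) (e i)) {..<ne}"
    and generator_P: "finite I2" "\<forall>i\<in>I2. \<pi>g i \<in> homk P kring \<and> pg i \<in> carr P" "(\<Sum>i\<in>I2. \<pi>g i (pg i)) = 1"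
    and basis_B: "\<forall>i<nb. bb i \<in> carr B \<and> \<chi> i \<in> homk B kring"
    and expand_B: "\<forall>y\<in>carr B. y = ksum B (\<lambda>i. smulm B (\<chi> i y) (bb i)) {..<nb}"
begin

lemma pl_closed [simp, intro]: "i < np \<Longrightarrow> pl i \<in> carr P" using basis_P by blast
lemma \<pi>l_homk [simp, intro]: "i < np \<Longrightarrow> \<pi>l i \<in> homk P kring" using basis_P by blast
lemma qg_closed [simp, intro]: "i \<in> I1 \<Longrightarrow> qg i \<in> homk P' kring" using generator_P' by blast
lemma yg_closed [simp, intro]: "i \<in> I1 \<Longrightarrow> yg i \<in> carr P'" using generator_P' by blast
lemma e_closed [simp, intro]: "i < ne \<Longrightarrow> e i \<in> carr P'" using basis_P' by blast
lemma \<xi>_closed [simp, intro]: "i < ne \<Longrightarrow> \<xi> i \<in> homk P' kring" using basis_P' by blast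
lemma \<pi>g_homk [simp, intro]: "i \<in> I2 \<Longrightarrow> \<pi>g i \<in> homk P kring" using generator_P by blast
lemma pg_closed [simp, intro]: "i \<in> I2 \<Longrightarrow> pg i \<in> carr P" using generator_P by blast
lemma bb_closed [simp, intro]: "i < nb \<Longrightarrow> bb i \<in> carr B" using basis_B by blast
lemma \<chi>_homk [simp, intro]: "i < nb \<Longrightarrow> \<chi> i \<in> homk B kring" using basis_B by blast

lemma P_expand: "p \<in> carr P \<Longrightarrow> ksum P (\<lambda>l. smulm P (\<pi>l l p) (pl l)) {..<np} = p"
  using expand_P by (metis (no_types, lifting))
lemma B_expand: "x \<in> carr B \<Longrightarrow> ksum B (\<lambda>m. smulm B (\<chi> m x) (bb m)) {..<nb} = x"
  using expand_B by (metis (no_types, lifting))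
lemma Q_expand: "q \<in> carr Q \<Longrightarrow> ksum Q (\<lambda>i y. q (e i) * \<xi> i y) {..<ne} = q"
  using InvP'.dual_basis_expand_dual[OF basis_P' expand_P'] by simp
lemma Q_expand_generator: "q \<in> carr Q \<Longrightarrow> ksum Q (\<lambda>j y. InvP'.dual_pair q (yg j) * qg j y) I1 = q"
  using InvP'.dual_generator_expand_dual[OF generator_P'] by simp

text \<open>W is identified with Hom(B, P): a linear g: B \<rightarrow> P is sent to the sum over j, l of
  \<Psi>\<inverse>(c \<mapsto> \<pi>l(g c) yg j) \<otimes> qg j \<otimes> pl l, whose image under \<Theta> is g(1).\<close>

definition hom_coeff :: "('a \<Rightarrow> 'p) \<Rightarrow> nat \<times> nat \<Rightarrow> nat \<Rightarrow> 'a \<Rightarrow> 'q" where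
  "hom_coeff g j l = (\<lambda>c. if c \<in> carr B then smulm P' (\<pi>l l (g c)) (yg j) else zerom P')"

definition W_of_hom :: "('a \<Rightarrow> 'p) \<Rightarrow> _" where
  "W_of_hom g = ksum W (\<lambda>z. BQP.tens3 (\<Psi>inv (hom_coeff g (fst z) (snd z))) (qg (fst z)) (pl (snd z)))
     (I1 \<times> {..<np})"

lemma hom_coeff_homk:
  assumes "g \<in> homk B P" "j \<in> I1" "l < np"
  shows "hom_coeff g j l \<in> homk B P'"
  unfolding hom_coeff_def using assms
  by (intro homkI) (simp_all add: homk_closed[OF assms(1)] homk_add[OF assms(1)] homk_smul[OF assms(1)]
      dual_P_add dual_P_smul InvP'.add_smul InvP'.smul_smul)

lemma W_of_hom_term_closed:
  "g \<in> homk B P \<Longrightarrow> z \<in> I1 \<times> {..<np} \<Longrightarrow>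
    BQP.tens3 (\<Psi>inv (hom_coeff g (fst z) (snd z))) (qg (fst z)) (pl (snd z)) \<in> carr W"
  using hom_coeff_homk \<Psi>inv by auto

lemma W_of_hom_closed [simp, intro]: "g \<in> homk B P \<Longrightarrow> W_of_hom g \<in> carr W"
  unfolding W_of_hom_def using W_of_hom_term_closed by blast

lemma W_of_hom_add:
  assumes "g \<in> homk B P" "g' \<in> homk B P"
  shows "W_of_hom (\<lambda>c. if c \<in> carr B then addm P (g c) (g' c) else zerom P) = addm W (W_of_hom g) (W_of_hom g')"
  unfolding W_of_hom_def
proof (rule BQP.Outer.T.ksum_eq_add)
  fix z assume z: "z \<in> I1 \<times> {..<np}"
  have "hom_coeff (\<lambda>c. if c \<in> carr B then addm P (g c) (g' c) else zerom P) (fst z) (snd z) =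
      (\<lambda>c. if c \<in> carr B then addm P' (hom_coeff g (fst z) (snd z) c) (hom_coeff g' (fst z) (snd z) c) else zerom P')"
    unfolding hom_coeff_def using assms z by (auto simp: homk_closed dual_P_add InvP'.add_smul)
  then show "BQP.tens3 (\<Psi>inv (hom_coeff (\<lambda>c. if c \<in> carr B then addm P (g c) (g' c) else zerom P) (fst z) (snd z)))
      (qg (fst z)) (pl (snd z)) =
    addm W (BQP.tens3 (\<Psi>inv (hom_coeff g (fst z) (snd z))) (qg (fst z)) (pl (snd z)))
      (BQP.tens3 (\<Psi>inv (hom_coeff g' (fst z) (snd z))) (qg (fst z)) (pl (snd z)))"
    using assms z hom_coeff_homk \<Psi>inv by (auto simp: \<Psi>inv_add BQP.tens3_add1)
qed (use assms W_of_hom_term_closed in auto)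

lemma W_of_hom_precomp_lmul:
  assumes "g \<in> homk B P" "b \<in> carr B"
  shows "W_of_hom (\<lambda>c. if c \<in> carr B then g (mulm B b c) else zerom P) = ractW b (W_of_hom g)"
proof -
  have "ractW b (W_of_hom g) =
      ksum W (\<lambda>z. ractW b (BQP.tens3 (\<Psi>inv (hom_coeff g (fst z) (snd z))) (qg (fst z)) (pl (snd z)))) (I1 \<times> {..<np})"
    unfolding W_of_hom_def using assms W_of_hom_term_closed
    by (intro k_module_pair.linear_ksum[OF k_module_pair.intro ractW_klinear]) (auto intro: BQP.Outer.T.k_module_axioms)
  also have "\<dots> = W_of_hom (\<lambda>c. if c \<in> carr B then g (mulm B b c) else zerom P)"
    unfolding W_of_hom_def
  proof (rule BQP.Outer.T.ksum_cong[OF refl])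
    fix z assume z: "z \<in> I1 \<times> {..<np}"
    have "hom_coeff (\<lambda>c. if c \<in> carr B then g (mulm B b c) else zerom P) (fst z) (snd z) =
        (\<lambda>c. if c \<in> carr B then hom_coeff g (fst z) (snd z) (mulm B b c) else zerom P')"
      unfolding hom_coeff_def using assms by auto
    with assms z hom_coeff_homk \<Psi>inv
    show "ractW b (BQP.tens3 (\<Psi>inv (hom_coeff g (fst z) (snd z))) (qg (fst z)) (pl (snd z))) =
        BQP.tens3 (\<Psi>inv (hom_coeff (\<lambda>c. if c \<in> carr B then g (mulm B b c) else zerom P) (fst z) (snd z)))
          (qg (fst z)) (pl (snd z))"
      by (auto simp: ractW_tens3 \<Psi>inv_precomp_lmul)
  qed (use W_of_hom_term_closed[OF AlgB.homk_precomp_lmul[OF assms]] in auto)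
  finally show ?thesis ..
qed

lemma W_of_hom_precomp_rmul:
  assumes "g \<in> homk B P" "b \<in> carr B"
  shows "W_of_hom (\<lambda>c. if c \<in> carr B then g (mulm B c b) else zerom P) = lactW (\<nu>A b) (W_of_hom g)"
proof -
  have \<nu>A_b: "\<nu>A b \<in> carr B"
    using assms \<nu>A_B by blast
  have "lactW (\<nu>A b) (W_of_hom g) =
      ksum W (\<lambda>z. lactW (\<nu>A b) (BQP.tens3 (\<Psi>inv (hom_coeff g (fst z) (snd z))) (qg (fst z)) (pl (snd z)))) (I1 \<times> {..<np})"
    unfolding W_of_hom_def using assms \<nu>A_b W_of_hom_term_closed
    by (intro k_module_pair.linear_ksum[OF k_module_pair.intro lactW_klinear]) (auto intro: BQP.Outer.T.k_module_axioms)
  also have "\<dots> = W_of_hom (\<lambda>c. if c \<in> carr B then g (mulm B c b) else zerom P)"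
    unfolding W_of_hom_def
  proof (rule BQP.Outer.T.ksum_cong[OF refl])
    fix z assume z: "z \<in> I1 \<times> {..<np}"
    have "hom_coeff (\<lambda>c. if c \<in> carr B then g (mulm B c b) else zerom P) (fst z) (snd z) =
        (\<lambda>c. if c \<in> carr B then hom_coeff g (fst z) (snd z) (mulm B c b) else zerom P')"
      unfolding hom_coeff_def using assms by auto
    with assms z \<nu>A_b hom_coeff_homk \<Psi>inv
    show "lactW (\<nu>A b) (BQP.tens3 (\<Psi>inv (hom_coeff g (fst z) (snd z))) (qg (fst z)) (pl (snd z))) =
        BQP.tens3 (\<Psi>inv (hom_coeff (\<lambda>c. if c \<in> carr B then g (mulm B c b) else zerom P) (fst z) (snd z)))
          (qg (fst z)) (pl (snd z))"
      by (auto simp: lactW_tens3 \<Psi>inv_precomp_rmul \<beta>_\<nu>A)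
  qed (use W_of_hom_term_closed[OF AlgB.homk_precomp_rmul[OF assms]] in auto)
  finally show ?thesis ..
qed

lemma \<Theta>_W_of_hom:
  assumes g: "g \<in> homk B P"
  shows "\<Theta> (W_of_hom g) = g (onem B)"
proof -
  have g1: "g (onem B) \<in> carr P"
    using g by (simp add: homk_closed)
  have term_eq: "\<Theta> (BQP.tens3 (\<Psi>inv (hom_coeff g j l)) (qg j) (pl l)) =
      smulm P (qg j (yg j)) (smulm P (\<pi>l l (g (onem B))) (pl l))" if "j \<in> I1" "l < np" for j l
  proof -
    have "\<psi> (\<Psi>inv (hom_coeff g j l)) = \<psi> (mulm B (\<Psi>inv (hom_coeff g j l)) (onem B))"
      using that g hom_coeff_homk \<Psi>inv by simp
    also have "\<dots> = smulm P' (\<pi>l l (g (onem B))) (yg j)"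
      using that g hom_coeff_homk by (simp add: \<Psi>inv_mul hom_coeff_def)
    finally show ?thesis
      using that g hom_coeff_homk \<Psi>inv g1
      by (simp add: \<Theta>_tens3 dual_P'_smul InvP.smul_smul[symmetric] mult.commute)
  qed
  have "\<Theta> (W_of_hom g) = ksum P (\<lambda>z. \<Theta> (BQP.tens3 (\<Psi>inv (hom_coeff g (fst z) (snd z))) (qg (fst z)) (pl (snd z))))
      (I1 \<times> {..<np})"
    unfolding W_of_hom_def using g W_of_hom_term_closed
    by (intro k_module_pair.linear_ksum[OF k_module_pair.intro \<Theta>_klinear]) (auto intro: BQP.Outer.T.k_module_axioms InvP.k_module_axioms)
  also have "\<dots> = ksum P (\<lambda>j. ksum P (\<lambda>l. smulm P (qg j (yg j)) (smulm P (\<pi>l l (g (onem B))) (pl l))) {..<np}) I1"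
    using generator_P' g1 term_eq by (subst InvP.ksum_product) (auto intro!: InvP.ksum_cong)
  also have "\<dots> = ksum P (\<lambda>j. smulm P (qg j (yg j)) (g (onem B))) I1"
  proof (rule InvP.ksum_cong[OF refl])
    fix j
    have "ksum P (\<lambda>l. smulm P (qg j (yg j)) (smulm P (\<pi>l l (g (onem B))) (pl l))) {..<np} =
        smulm P (qg j (yg j)) (ksum P (\<lambda>l. smulm P (\<pi>l l (g (onem B))) (pl l)) {..<np})"
      by (subst InvP.ksum_smul) auto
    then show "ksum P (\<lambda>l. smulm P (qg j (yg j)) (smulm P (\<pi>l l (g (onem B))) (pl l))) {..<np} =
        smulm P (qg j (yg j)) (g (onem B))"
      using P_expand[OF g1] by simp
  qed (use g1 in simp)
  also have "\<dots> = g (onem B)"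
    using generator_P' g1 by (simp add: InvP.smul_sum[symmetric])
  finally show ?thesis .
qed

lemma W_of_hom_hom_of_W:
  assumes "w \<in> carr W"
  shows "W_of_hom (hom_of_W w) = w"
  using assms
proof (rule W_ext)
  fix x q p assume x: "x \<in> carr B" and q: "q \<in> carr Q" and p: "p \<in> carr P"
  let ?w = "BQP.tens3 x q p"
  have coeff: "\<Psi>inv (hom_coeff (hom_of_W ?w) j l) = smulm B (\<pi>l l p * InvP'.dual_pair q (yg j)) x"
    if jl: "j \<in> I1" "l < np" for j l
  proof (rule \<Psi>inv_eqI)
    show "hom_coeff (hom_of_W ?w) j l \<in> homk B P'"
      using x q p jl by (intro hom_coeff_homk hom_of_W_homk) auto
    fix c assume c: "c \<in> carr B"
    have "\<psi> (mulm B (smulm B (\<pi>l l p * InvP'.dual_pair q (yg j)) x) c) =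
        smulm P' (\<pi>l l p) (smulm P' (q (\<psi> (mulm B x c))) (yg j))"
      using x c q jl by (simp add: AlgB.smul_mul \<psi>_smul InvP'.smul_smul InvP'.dual_pair)
    also have "\<dots> = hom_coeff (hom_of_W ?w) j l c"
      unfolding hom_coeff_def hom_of_W_def using x q p c jl
      by (simp add: ractW_tens3 \<Theta>_tens3 dual_P_smul InvP'.smul_smul mult.commute)
    finally show "\<psi> (mulm B (smulm B (\<pi>l l p * InvP'.dual_pair q (yg j)) x) c) = hom_coeff (hom_of_W ?w) j l c" .
  qed (use x in simp)
  have term_eq: "BQP.tens3 (\<Psi>inv (hom_coeff (hom_of_W ?w) j l)) (qg j) (pl l) =
      BQP.tens3 x (\<lambda>y. InvP'.dual_pair q (yg j) * qg j y) (smulm P (\<pi>l l p) (pl l))"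
    if jl: "j \<in> I1" "l < np" for j l
  proof -
    have "BQP.tens3 x (\<lambda>y. InvP'.dual_pair q (yg j) * qg j y) (smulm P (\<pi>l l p) (pl l)) =
        smulm W (InvP'.dual_pair q (yg j)) (smulm W (\<pi>l l p) (BQP.tens3 x (qg j) (pl l)))"
      using x jl by (simp add: tens3_dual_smul BQP.tens3_smul3)
    also have "\<dots> = BQP.tens3 (smulm B (\<pi>l l p * InvP'.dual_pair q (yg j)) x) (qg j) (pl l)"
      using x jl by (simp add: BQP.tens3_smul1 BQP.Outer.T.smul_smul[symmetric] mult.commute)
    finally show ?thesis
      using coeff[OF jl] by simp
  qed
  have "W_of_hom (hom_of_W ?w) = ksum W (\<lambda>z. BQP.tens3 x (\<lambda>y. InvP'.dual_pair q (yg (fst z)) * qg (fst z) y)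
      (smulm P (\<pi>l (snd z) p) (pl (snd z)))) (I1 \<times> {..<np})"
    unfolding W_of_hom_def using x q p
    by (intro BQP.Outer.T.ksum_cong) (simp_all add: mem_Times_iff term_eq dual_smul_closed)
  also have "\<dots> = ?w"
    using x q p generator_P'
    by (subst BQP.tens3_ksum23) (auto intro!: dual_smul_closed simp: Q_expand_generator P_expand)
  finally show "W_of_hom (hom_of_W ?w) = ?w" .
qed (simp_all add: hom_of_W_homk hom_of_W_add W_of_hom_add)

definition H :: "'a \<Rightarrow> 'a \<Rightarrow> _" where
  "H a = (\<lambda>z. if z \<in> carr A then W_of_hom (\<phi>_hom (mulm A a z)) else zerom W)"

lemma rhom_A_W_iff: "F \<in> rhom B (alg_bimod A) W\<^sub>B \<longleftrightarrow>
    (\<forall>z\<in>carr A. F z \<in> carr W) \<and> (\<forall>z\<in>carr A. \<forall>z'\<in>carr A. F (addm A z z') = addm W (F z) (F z')) \<and>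
    (\<forall>z\<in>carr A. \<forall>b\<in>carr B. F (mulm A z b) = ractW b (F z)) \<and> (\<forall>z. z \<notin> carr A \<longrightarrow> F z = zerom W)"
  unfolding rhom_def alg_bimod_def W_bimod_simps by simp

lemma H_rhom:
  assumes "a \<in> carr A"
  shows "H a \<in> rhom B (alg_bimod A) W\<^sub>B"
  unfolding rhom_A_W_iff
proof (intro conjI ballI allI impI)
  fix z z' assume "z \<in> carr A" "z' \<in> carr A"
  with assms show "H a (addm A z z') = addm W (H a z) (H a z')"
    unfolding H_def by (simp add: AlgA.distrib_left \<phi>_hom_add W_of_hom_add \<phi>_hom_homk)
next
  fix z b assume "z \<in> carr A" "b \<in> carr B"
  with assms show "H a (mulm A z b) = ractW b (H a z)"
    unfolding H_def by (simp add: sub_carr AlgA.mul_assoc[symmetric] \<phi>_hom_mul_right W_of_hom_precomp_lmul \<phi>_hom_homk)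
qed (use assms in \<open>auto simp: H_def \<phi>_hom_homk\<close>)

lemma H_add: "x \<in> carr A \<Longrightarrow> y \<in> carr A \<Longrightarrow> H (addm A x y) = (\<lambda>z. if z \<in> carr A then addm W (H x z) (H y z) else zerom W)"
  unfolding H_def by (intro ext) (simp add: AlgA.distrib_right \<phi>_hom_add W_of_hom_add \<phi>_hom_homk)

lemma H_mul:
  assumes "b \<in> carr B" "x \<in> carr A" "a \<in> carr A"
  shows "H (mulm A (mulm A b x) a) = (\<lambda>z. if z \<in> carr A then lactW b (H x (mulm A a z)) else zerom W)"
proof (rule ext)
  fix z
  have b': "the_inv_into (carr A) \<nu>A b \<in> carr B" "\<nu>A (the_inv_into (carr A) \<nu>A b) = b"
    using \<nu>A_inv_B[OF assms(1)] by auto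
  show "H (mulm A (mulm A b x) a) z = (if z \<in> carr A then lactW b (H x (mulm A a z)) else zerom W)"
    unfolding H_def using assms b'
    by (simp add: sub_carr AlgA.mul_assoc \<phi>_hom_mul_left W_of_hom_precomp_rmul \<phi>_hom_homk)
qed

lemma H_inj: "inj_on H (carr A)"
proof (rule inj_onI)
  fix a a' assume a: "a \<in> carr A" "a' \<in> carr A" "H a = H a'"
  have "hom_ract A P \<phi> a z = hom_ract A P \<phi> a' z" for z
  proof (cases "z \<in> carr A")
    case True
    then have "\<Theta> (H a z) = \<Theta> (H a' z)"
      using a by simp
    with True a show ?thesis
      unfolding hom_ract_def H_def by (simp add: \<Theta>_W_of_hom \<phi>_hom_homk) (simp add: \<phi>_hom_def, simp add: sub_one)
  qed (simp add: hom_ract_def)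
  then show "a = a'"
    using \<phi>_bij a unfolding bij_betw_def inj_on_def by blast
qed

lemma H_surj:
  assumes F: "F \<in> rhom B (alg_bimod A) W\<^sub>B"
  obtains a where "a \<in> carr A" "H a = F"
proof -
  have F_closed: "F z \<in> carr W" if "z \<in> carr A" for z
    using F that by (simp add: rhom_A_W_iff)
  have F_ract: "F (mulm A z b) = ractW b (F z)" if "z \<in> carr A" "b \<in> carr B" for z b
    using F that by (simp add: rhom_A_W_iff)
  have F_ext: "F z = zerom W" if "z \<notin> carr A" for z
    using F that by (simp add: rhom_A_W_iff)
  note F_lin = rhom_W_klinear[OF F, unfolded klinear_def]
  have "(\<lambda>z. if z \<in> carr A then \<Theta> (F z) else zerom P) \<in> homk A P"
    using F_lin by (intro homkI) (simp_all add: \<Theta>_add \<Theta>_smul)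
  then have "(\<lambda>z. if z \<in> carr A then \<Theta> (F z) else zerom P) \<in> hom_ract A P \<phi> ` carr A"
    using \<phi>_bij unfolding bij_betw_def by simp
  then obtain a where a: "a \<in> carr A" "hom_ract A P \<phi> a = (\<lambda>z. if z \<in> carr A then \<Theta> (F z) else zerom P)"
    by (elim imageE) simp
  have \<Theta>F: "\<Theta> (F z) = \<phi> (mulm A a z)" if "z \<in> carr A" for z
    using fun_cong[OF a(2), of z] that unfolding hom_ract_def by simp
  have "H a z = F z" for z
  proof (cases "z \<in> carr A")
    case z: True
    have "hom_of_W (F z) = \<phi>_hom (mulm A a z)"
      unfolding hom_of_W_def \<phi>_hom_def
      using z a(1) by (intro ext) (simp add: F_ract[symmetric] \<Theta>F sub_carr AlgA.mul_assoc)
    moreover have "W_of_hom (hom_of_W (F z)) = F z"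
      by (rule W_of_hom_hom_of_W[OF F_closed[OF z]])
    ultimately show ?thesis
      unfolding H_def using z by simp
  qed (simp add: H_def F_ext)
  then have "H a = F" ..
  with a(1) show ?thesis
    by (rule that)
qed

lemma H_bij: "bij_betw H (carr A) (rhom B (alg_bimod A) W\<^sub>B)"
  unfolding bij_betw_def
proof (intro conjI H_inj subset_antisym image_subsetI subsetI)
  fix F assume "F \<in> rhom B (alg_bimod A) W\<^sub>B"
  then obtain a where "a \<in> carr A" "H a = F"
    by (rule H_surj)
  then show "F \<in> H ` carr A" by blast
qed (rule H_rhom)

lemma W_dual_basis_expand:
  assumes "w \<in> carr W"
  shows "ksum W (\<lambda>z. ractW (\<theta> (e (fst z)) (\<pi>l (snd z)) w) (BQP.tens3 (onem B) (\<xi> (fst z)) (pl (snd z))))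
    ({..<ne} \<times> {..<np}) = w"
  using assms
proof (rule W_ext)
  note \<theta>_lin = \<theta>_klinear[unfolded klinear_def]
  fix x q p assume x: "x \<in> carr B" and q: "q \<in> carr Q" and p: "p \<in> carr P"
  have "ractW (\<theta> (e a) (\<pi>l l) (BQP.tens3 x q p)) (BQP.tens3 (onem B) (\<xi> a) (pl l)) =
      BQP.tens3 x (\<lambda>y. q (e a) * \<xi> a y) (smulm P (\<pi>l l p) (pl l))" if "a < ne" "l < np" for a l
    using that x q p
    by (simp add: \<theta>_tens3 ractW_tens3 tens3_dual_smul BQP.tens3_smul1 BQP.tens3_smul3
        BQP.Outer.T.smul_smul[symmetric])
  then have "ksum W (\<lambda>z. ractW (\<theta> (e (fst z)) (\<pi>l (snd z)) (BQP.tens3 x q p)) (BQP.tens3 (onem B) (\<xi> (fst z)) (pl (snd z))))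
      ({..<ne} \<times> {..<np}) =
      ksum W (\<lambda>z. BQP.tens3 x (\<lambda>y. q (e (fst z)) * \<xi> (fst z) y) (smulm P (\<pi>l (snd z) p) (pl (snd z))))
      ({..<ne} \<times> {..<np})"
    using x q p by (intro BQP.Outer.T.ksum_cong) (auto intro!: BQP.tens3_closed dual_smul_closed)
  also have "\<dots> = BQP.tens3 x q p"
    using x q p by (subst BQP.tens3_ksum23) (auto intro!: dual_smul_closed simp: Q_expand P_expand)
  finally show "ksum W (\<lambda>z. ractW (\<theta> (e (fst z)) (\<pi>l (snd z)) (BQP.tens3 x q p)) (BQP.tens3 (onem B) (\<xi> (fst z)) (pl (snd z))))
      ({..<ne} \<times> {..<np}) = BQP.tens3 x q p" .
next
  fix w w' assume "w \<in> carr W" "w' \<in> carr W"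
  then show "ksum W (\<lambda>z. ractW (\<theta> (e (fst z)) (\<pi>l (snd z)) (addm W w w')) (BQP.tens3 (onem B) (\<xi> (fst z)) (pl (snd z))))
      ({..<ne} \<times> {..<np}) =
    addm W (ksum W (\<lambda>z. ractW (\<theta> (e (fst z)) (\<pi>l (snd z)) w) (BQP.tens3 (onem B) (\<xi> (fst z)) (pl (snd z)))) ({..<ne} \<times> {..<np}))
      (ksum W (\<lambda>z. ractW (\<theta> (e (fst z)) (\<pi>l (snd z)) w') (BQP.tens3 (onem B) (\<xi> (fst z)) (pl (snd z)))) ({..<ne} \<times> {..<np}))"
    using \<theta>_klinear unfolding klinear_def
    by (intro BQP.Outer.T.ksum_eq_add) (auto simp: ractW_add_left)
qed (use \<theta>_klinear in \<open>auto simp: klinear_def intro!: BQP.Outer.T.ksum_closed\<close>)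

lemma W_rfgp: "rfgp B W\<^sub>B"
proof -
  define J where "J = {..<ne} \<times> {..<np}"
  obtain h where h: "bij_betw h {..<card J} J"
    unfolding J_def using ex_bij_betw_nat_finite lessThan_atLeast0 by (metis finite_SigmaI finite_lessThan)
  have hJ: "fst (h i) < ne \<and> snd (h i) < np" if "i < card J" for i
    using bspec[OF bij_betwE[OF h], of i] that unfolding J_def by auto
  define x where "x i = BQP.tens3 (onem B) (\<xi> (fst (h i))) (pl (snd (h i)))" for i
  define f where "f i = \<theta> (e (fst (h i))) (\<pi>l (snd (h i)))" for i
  have "\<forall>i<card J. x i \<in> bcarr W\<^sub>B \<and> f i \<in> rhom B W\<^sub>B (alg_bimod B)"
    using hJ unfolding x_def f_def W_bimod_simps by (auto intro!: \<theta>_rhom)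
  moreover have "y = msum (badd W\<^sub>B) (bzero W\<^sub>B) (\<lambda>i. ract W\<^sub>B (x i) (f i y)) (card J)" if y: "y \<in> bcarr W\<^sub>B" for y
  proof -
    have "y = ksum W (\<lambda>z. ractW (\<theta> (e (fst z)) (\<pi>l (snd z)) y) (BQP.tens3 (onem B) (\<xi> (fst z)) (pl (snd z)))) J"
      using y W_dual_basis_expand unfolding J_def W_bimod_simps by simp
    also have "\<dots> = msum (addm W) (zerom W) (\<lambda>i. ractW (f i y) (x i)) (card J)"
      using h y \<theta>_klinear unfolding x_def f_def J_def W_bimod_simps klinear_def
      by (subst BQP.Outer.T.ksum_eq_msum) (auto simp: comp_def)
    finally show ?thesis
      unfolding W_bimod_simps .
  qed
  ultimately show ?thesis
    unfolding rfgp_def by blast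
qed

lemma generator_sum: "ksum B (\<lambda>z. \<theta> (yg (fst z)) (\<pi>g (snd z)) (BQP.tens3 (onem B) (qg (fst z)) (pg (snd z)))) (I1 \<times> I2) = onem B"
proof -
  have "ksum B (\<lambda>z. \<theta> (yg (fst z)) (\<pi>g (snd z)) (BQP.tens3 (onem B) (qg (fst z)) (pg (snd z)))) (I1 \<times> I2) =
      ksum B (\<lambda>z. smulm B (qg (fst z) (yg (fst z)) * \<pi>g (snd z) (pg (snd z))) (onem B)) (I1 \<times> I2)"
    by (intro AlgB.ksum_cong) (auto simp: \<theta>_tens3)
  also have "\<dots> = smulm B ((\<Sum>j\<in>I1. qg j (yg j)) * (\<Sum>s\<in>I2. \<pi>g s (pg s))) (onem B)"
    by (simp add: AlgB.smul_sum[symmetric] sum_product sum.cartesian_product case_prod_beta)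
  finally show ?thesis
    using generator_P' generator_P by simp
qed

lemma W_generator: "\<exists>n w f. (\<forall>i<n. w i \<in> bcarr W\<^sub>B \<and> f i \<in> rhom B W\<^sub>B (alg_bimod B)) \<and>
    msum (addm B) (zerom B) (\<lambda>i. f i (w i)) n = onem B"
proof -
  define J where "J = I1 \<times> I2"
  obtain h where h: "bij_betw h {..<card J} J"
    unfolding J_def using ex_bij_betw_nat_finite lessThan_atLeast0 generator_P' generator_P
    by (metis finite_SigmaI)
  have hJ: "fst (h i) \<in> I1 \<and> snd (h i) \<in> I2" if "i < card J" for i
    using bspec[OF bij_betwE[OF h], of i] that unfolding J_def by auto
  define w where "w i = BQP.tens3 (onem B) (qg (fst (h i))) (pg (snd (h i)))" for i
  define f where "f i = \<theta> (yg (fst (h i))) (\<pi>g (snd (h i)))" for i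
  have "\<forall>i<card J. w i \<in> bcarr W\<^sub>B \<and> f i \<in> rhom B W\<^sub>B (alg_bimod B)"
    using hJ unfolding w_def f_def W_bimod_simps by (auto intro!: \<theta>_rhom)
  moreover have "msum (addm B) (zerom B) (\<lambda>i. f i (w i)) (card J) = onem B"
  proof -
    have "msum (addm B) (zerom B) (\<lambda>i. f i (w i)) (card J) =
        ksum B (\<lambda>z. \<theta> (yg (fst z)) (\<pi>g (snd z)) (BQP.tens3 (onem B) (qg (fst z)) (pg (snd z)))) J"
      using h \<theta>_klinear unfolding w_def f_def J_def klinear_def
      by (subst AlgB.ksum_eq_msum) (auto simp: comp_def)
    then show ?thesis
      using generator_sum unfolding J_def by simp
  qed
  ultimately show ?thesis
    by blast
qed

definition lact_map :: "'a \<Rightarrow> _" where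
  "lact_map b = (\<lambda>w. if w \<in> bcarr W\<^sub>B then lact W\<^sub>B b w else bzero W\<^sub>B)"

lemma lact_map_rhom: "b \<in> carr B \<Longrightarrow> lact_map b \<in> rhom B W\<^sub>B W\<^sub>B"
  unfolding rhom_def lact_map_def W_bimod_simps using W_bimodule
  unfolding bimodule_def W_bimod_simps by (simp add: lactW_add)

lemma lact_map_inj: "inj_on lact_map (carr B)"
proof (rule inj_onI)
  fix b b' assume b: "b \<in> carr B" "b' \<in> carr B" "lact_map b = lact_map b'"
  have gen_lact: "ksum B (\<lambda>z. \<theta> (yg (fst z)) (\<pi>g (snd z)) (lactW c (BQP.tens3 (onem B) (qg (fst z)) (pg (snd z))))) (I1 \<times> I2)
      = \<beta> c" if c: "c \<in> carr B" for c
  proof -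
    have "ksum B (\<lambda>z. \<theta> (yg (fst z)) (\<pi>g (snd z)) (lactW c (BQP.tens3 (onem B) (qg (fst z)) (pg (snd z))))) (I1 \<times> I2) =
        ksum B (\<lambda>z. mulm B (\<beta> c) (\<theta> (yg (fst z)) (\<pi>g (snd z)) (BQP.tens3 (onem B) (qg (fst z)) (pg (snd z))))) (I1 \<times> I2)"
      using c by (intro AlgB.ksum_cong) (auto simp: \<theta>_tens3 lactW_tens3 AlgB.mul_smul)
    also have "\<dots> = mulm B (\<beta> c) (ksum B (\<lambda>z. \<theta> (yg (fst z)) (\<pi>g (snd z)) (BQP.tens3 (onem B) (qg (fst z)) (pg (snd z)))) (I1 \<times> I2))"
      using c by (intro k_module_pair.linear_ksum[OF k_module_pair.intro AlgB.lmul_klinear, symmetric])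
        (auto simp: \<theta>_tens3 intro: AlgB.k_module_axioms)
    finally show ?thesis
      using c by (simp add: generator_sum)
  qed
  have "lactW b w = lactW b' w" if "w \<in> carr W" for w
    using fun_cong[OF b(3), of w] that unfolding lact_map_def W_bimod_simps by simp
  then have "ksum B (\<lambda>z. \<theta> (yg (fst z)) (\<pi>g (snd z)) (lactW b (BQP.tens3 (onem B) (qg (fst z)) (pg (snd z))))) (I1 \<times> I2) =
      ksum B (\<lambda>z. \<theta> (yg (fst z)) (\<pi>g (snd z)) (lactW b' (BQP.tens3 (onem B) (qg (fst z)) (pg (snd z))))) (I1 \<times> I2)"
    using b \<theta>_klinear unfolding klinear_def by (intro AlgB.ksum_cong) auto
  then have "\<beta> b = \<beta> b'"
    using gen_lact[OF b(1)] gen_lact[OF b(2)] by simp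
  then show "b = b'"
    using \<beta>_bij b unfolding bij_betw_def inj_on_def by blast
qed

lemma W_coordinate_expand:
  assumes "w \<in> carr W"
  shows "ksum W (\<lambda>z. BQP.tens3 (bb (fst z)) (\<xi> (snd z)) (\<tau> (\<chi> (fst z)) (e (snd z)) w)) ({..<nb} \<times> {..<ne}) = w"
  using assms
proof (rule W_ext)
  fix x q p assume x: "x \<in> carr B" and q: "q \<in> carr Q" and p: "p \<in> carr P"
  have "BQP.tens3 (bb m) (\<xi> i) (\<tau> (\<chi> m) (e i) (BQP.tens3 x q p)) =
      BQP.tens3 (smulm B (\<chi> m x) (bb m)) (\<lambda>y. q (e i) * \<xi> i y) p" if "m < nb" "i < ne" for m i
    using that x q p
    by (simp add: \<tau>_tens3 tens3_dual_smul BQP.tens3_smul1 BQP.tens3_smul3 BQP.Outer.T.smul_smul[symmetric],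
        simp add: mult.commute)
  then have "ksum W (\<lambda>z. BQP.tens3 (bb (fst z)) (\<xi> (snd z)) (\<tau> (\<chi> (fst z)) (e (snd z)) (BQP.tens3 x q p))) ({..<nb} \<times> {..<ne}) =
      ksum W (\<lambda>z. BQP.tens3 (smulm B (\<chi> (fst z) x) (bb (fst z))) (\<lambda>y. q (e (snd z)) * \<xi> (snd z) y) p) ({..<nb} \<times> {..<ne})"
    using x q p by (intro BQP.Outer.T.ksum_cong) (auto intro!: BQP.tens3_closed dual_smul_closed)
  also have "\<dots> = BQP.tens3 x q p"
    using x q p by (subst BQP.tens3_ksum12) (auto intro!: dual_smul_closed simp: Q_expand B_expand)
  finally show "ksum W (\<lambda>z. BQP.tens3 (bb (fst z)) (\<xi> (snd z)) (\<tau> (\<chi> (fst z)) (e (snd z)) (BQP.tens3 x q p)))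
      ({..<nb} \<times> {..<ne}) = BQP.tens3 x q p" .
next
  fix w w' assume "w \<in> carr W" "w' \<in> carr W"
  then show "ksum W (\<lambda>z. BQP.tens3 (bb (fst z)) (\<xi> (snd z)) (\<tau> (\<chi> (fst z)) (e (snd z)) (addm W w w'))) ({..<nb} \<times> {..<ne}) =
      addm W (ksum W (\<lambda>z. BQP.tens3 (bb (fst z)) (\<xi> (snd z)) (\<tau> (\<chi> (fst z)) (e (snd z)) w)) ({..<nb} \<times> {..<ne}))
        (ksum W (\<lambda>z. BQP.tens3 (bb (fst z)) (\<xi> (snd z)) (\<tau> (\<chi> (fst z)) (e (snd z)) w')) ({..<nb} \<times> {..<ne}))"
    using \<tau>_klinear unfolding klinear_def
    by (intro BQP.Outer.T.ksum_eq_add) (auto simp: BQP.tens3_add3)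
qed (use \<tau>_klinear in \<open>auto simp: klinear_def intro!: BQP.Outer.T.ksum_closed\<close>)

text \<open>An endomorphism F of W as right B-module is determined by its values on 1 \<otimes> q \<otimes> p; each
  coordinate of these is a bilinear form in (q, y) and hence a multiple of q(y), since P' is invertible.\<close>

lemma rhom_W_coordinate_scalar:
  assumes F: "F \<in> rhom B W\<^sub>B W\<^sub>B" and m: "m < nb"
  shows "\<exists>c. \<forall>q\<in>carr Q. \<forall>y\<in>carr P'. \<forall>p\<in>carr P. \<tau> (\<chi> m) y (F (BQP.tens3 (onem B) q p)) = smulm P (c * q y) p"
proof -
  note F_lin = rhom_WW_klinear[OF F, unfolded klinear_def]
  note \<tau>_lin = \<tau>_klinear[OF \<chi>_homk[OF m], unfolded klinear_def]
  define \<rho> where "\<rho> q y = InvP.scalar_of (\<lambda>p. if p \<in> carr P then \<tau> (\<chi> m) y (F (BQP.tens3 (onem B) q p)) else zerom P)"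
    for q y
  have \<rho>: "\<tau> (\<chi> m) y (F (BQP.tens3 (onem B) q p)) = smulm P (\<rho> q y) p"
    if "q \<in> carr Q" "y \<in> carr P'" "p \<in> carr P" for q y p
  proof -
    have "(\<lambda>p. if p \<in> carr P then \<tau> (\<chi> m) y (F (BQP.tens3 (onem B) q p)) else zerom P) \<in> homk P P"
      using that F_lin \<tau>_lin by (intro homkI) (simp_all add: BQP.tens3_add3 BQP.tens3_smul3)
    from InvP.scalar_of[OF this that(3)] that(3) show ?thesis
      unfolding \<rho>_def by simp
  qed
  have add1: "\<rho> (\<lambda>x. q x + q' x) y = \<rho> q y + \<rho> q' y"
    if "q \<in> homk P' kring" "q' \<in> homk P' kring" "y \<in> carr P'" for q q' y
    using that F_lin \<tau>_lin \<rho>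
    by (intro InvP.smul_faithful) (simp add: tens3_dual_add dual_add_closed InvP.add_smul flip: \<rho>)
  have smul1: "\<rho> (\<lambda>x. r * q x) y = r * \<rho> q y" if "q \<in> homk P' kring" "y \<in> carr P'" for r q y
    using that F_lin \<tau>_lin \<rho>
    by (intro InvP.smul_faithful) (simp add: tens3_dual_smul dual_smul_closed InvP.smul_smul flip: \<rho>)
  have add2: "\<rho> q (addm P' y y') = \<rho> q y + \<rho> q y'" if "q \<in> homk P' kring" "y \<in> carr P'" "y' \<in> carr P'" for q y y'
    using that F_lin \<rho> \<chi>_homk[OF m]
    by (intro InvP.smul_faithful) (simp add: \<tau>_add_right InvP.add_smul flip: \<rho>)
  have smul2: "\<rho> q (smulm P' r y) = r * \<rho> q y" if "q \<in> homk P' kring" "y \<in> carr P'" for r q y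
    using that F_lin \<rho> \<chi>_homk[OF m]
    by (intro InvP.smul_faithful) (simp add: \<tau>_smul_right InvP.smul_smul flip: \<rho>)
  obtain c where c: "\<And>q y. q \<in> homk P' kring \<Longrightarrow> y \<in> carr P' \<Longrightarrow> \<rho> q y = c * q y"
    using InvP'.bilinear_form_is_scalar[of \<rho>, OF add1 smul1 add2 smul2] by blast
  show ?thesis
    by (intro exI[of _ c] ballI) (simp add: \<rho> c)
qed

lemma rhom_W_on_generators:
  assumes F: "F \<in> rhom B W\<^sub>B W\<^sub>B"
  obtains b where "b \<in> carr B" "\<And>q p. q \<in> carr Q \<Longrightarrow> p \<in> carr P \<Longrightarrow> F (BQP.tens3 (onem B) q p) = BQP.tens3 (\<beta> b) q p"
proof -
  note F_lin = rhom_WW_klinear[OF F, unfolded klinear_def]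
  have "\<forall>m\<in>{..<nb}. \<exists>c. \<forall>q\<in>carr Q. \<forall>y\<in>carr P'. \<forall>p\<in>carr P.
      \<tau> (\<chi> m) y (F (BQP.tens3 (onem B) q p)) = smulm P (c * q y) p"
    using rhom_W_coordinate_scalar[OF F] by simp
  then obtain cF where cF: "\<forall>m\<in>{..<nb}. \<forall>q\<in>carr Q. \<forall>y\<in>carr P'. \<forall>p\<in>carr P.
      \<tau> (\<chi> m) y (F (BQP.tens3 (onem B) q p)) = smulm P (cF m * q y) p"
    by (metis bchoice)
  define c where "c = ksum B (\<lambda>m. smulm B (cF m) (bb m)) {..<nb}"
  have c: "c \<in> carr B"
    unfolding c_def by (intro AlgB.ksum_closed) auto
  have "F (BQP.tens3 (onem B) q p) = BQP.tens3 c q p" if q: "q \<in> carr Q" and p: "p \<in> carr P" for q p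
  proof -
    have Fw: "F (BQP.tens3 (onem B) q p) \<in> carr W"
      using F_lin q p by simp
    have "BQP.tens3 (bb m) (\<xi> i) (\<tau> (\<chi> m) (e i) (F (BQP.tens3 (onem B) q p))) =
        BQP.tens3 (smulm B (cF m) (bb m)) (\<lambda>y. q (e i) * \<xi> i y) p" if "m < nb" "i < ne" for m i
      using that q p cF
      by (simp add: tens3_dual_smul BQP.tens3_smul1 BQP.tens3_smul3 BQP.Outer.T.smul_smul[symmetric],
          simp add: mult.commute)
    then have "ksum W (\<lambda>z. BQP.tens3 (bb (fst z)) (\<xi> (snd z)) (\<tau> (\<chi> (fst z)) (e (snd z)) (F (BQP.tens3 (onem B) q p))))
        ({..<nb} \<times> {..<ne}) =
        ksum W (\<lambda>z. BQP.tens3 (smulm B (cF (fst z)) (bb (fst z))) (\<lambda>y. q (e (snd z)) * \<xi> (snd z) y) p) ({..<nb} \<times> {..<ne})"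
      using q p by (intro BQP.Outer.T.ksum_cong) (auto intro!: BQP.tens3_closed dual_smul_closed)
    then have "F (BQP.tens3 (onem B) q p) =
        ksum W (\<lambda>z. BQP.tens3 (smulm B (cF (fst z)) (bb (fst z))) (\<lambda>y. q (e (snd z)) * \<xi> (snd z) y) p) ({..<nb} \<times> {..<ne})"
      by (simp only: W_coordinate_expand[OF Fw])
    also have "\<dots> = BQP.tens3 c q p"
      unfolding c_def using q p by (subst BQP.tens3_ksum12) (auto intro!: dual_smul_closed simp: Q_expand)
    finally show ?thesis .
  qed
  moreover obtain b where "b \<in> carr B" "\<beta> b = c"
    using \<beta>_bij c unfolding bij_betw_def by (metis imageE)
  ultimately show ?thesis
    using that[of b] by simp
qed

lemma lact_map_surj:
  assumes F: "F \<in> rhom B W\<^sub>B W\<^sub>B"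
  obtains b where "b \<in> carr B" "lact_map b = F"
proof -
  have F_closed: "F w \<in> carr W" if "w \<in> carr W" for w
    using F that unfolding rhom_def W_bimod_simps by simp
  have F_ract: "F (ractW c w) = ractW c (F w)" if "w \<in> carr W" "c \<in> carr B" for w c
    using F that unfolding rhom_def W_bimod_simps by simp
  have F_ext: "F w = zerom W" if "w \<notin> carr W" for w
    using F that unfolding rhom_def W_bimod_simps by simp
  obtain b where b: "b \<in> carr B" "\<And>q p. q \<in> carr Q \<Longrightarrow> p \<in> carr P \<Longrightarrow> F (BQP.tens3 (onem B) q p) = BQP.tens3 (\<beta> b) q p"
    using rhom_W_on_generators[OF F] by blast
  have "lactW b w = F w" if "w \<in> carr W" for w
    using that
  proof (rule W_ext)
    fix x q p assume xqp: "x \<in> carr B" "q \<in> carr Q" "p \<in> carr P"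
    then have "F (BQP.tens3 x q p) = F (ractW x (BQP.tens3 (onem B) q p))"
      by (simp add: ractW_tens3)
    also have "\<dots> = lactW b (BQP.tens3 x q p)"
      using xqp b by (simp add: F_ract, simp add: ractW_tens3 lactW_tens3)
    finally show "lactW b (BQP.tens3 x q p) = F (BQP.tens3 x q p)" ..
  qed (use b rhom_WW_klinear[OF F] in \<open>simp_all add: klinear_def lactW_add\<close>)
  then have "lact_map b = F"
    unfolding lact_map_def W_bimod_simps using F_ext by (intro ext) simp
  with b(1) show ?thesis
    by (rule that)
qed

lemma W_invertible: "invertible_bimod B W\<^sub>B"
proof -
  have "bij_betw lact_map (carr B) (rhom B W\<^sub>B W\<^sub>B)"
    unfolding bij_betw_def
  proof (intro conjI lact_map_inj subset_antisym image_subsetI subsetI)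
    fix F assume "F \<in> rhom B W\<^sub>B W\<^sub>B"
    then obtain b where "b \<in> carr B" "lact_map b = F"
      by (rule lact_map_surj)
    then show "F \<in> lact_map ` carr B" by blast
  qed (rule lact_map_rhom)
  then show ?thesis
    unfolding invertible_bimod_def lact_map_def[abs_def] using W_bimodule W_rfgp W_generator by blast
qed

lemma frobenius_ext_W_from_bases: "frobenius_ext B A W\<^sub>B"
  unfolding frobenius_ext_def W_bimod_simps
  using sub W_invertible fgp_A H_bij H_add H_mul by blast

end

context frobenius_setup
begin

lemma frobenius_ext_W: "frobenius_ext B A W\<^sub>B"
proof -
  obtain np :: nat and pl \<pi>l where P: "\<forall>i<np. pl i \<in> carr P \<and> \<pi>l i \<in> homk P kring"
      "\<forall>y\<in>carr P. y = ksum P (\<lambda>i. smulm P (\<pi>l i y) (pl i)) {..<np}"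
    by (rule InvP.dual_basis)
  obtain ne :: nat and e \<xi> where P': "\<forall>i<ne. e i \<in> carr P' \<and> \<xi> i \<in> homk P' kring"
      "\<forall>y\<in>carr P'. y = ksum P' (\<lambda>i. smulm P' (\<xi> i y) (e i)) {..<ne}"
    by (rule InvP'.dual_basis)
  obtain I1 :: "(nat \<times> nat) set" and qg yg where gen_P': "finite I1"
      "\<forall>i\<in>I1. qg i \<in> homk P' kring \<and> yg i \<in> carr P'" "(\<Sum>i\<in>I1. qg i (yg i)) = 1"
    by (rule InvP'.dual_generator)
  obtain I2 :: "(nat \<times> nat) set" and \<pi>g pg where gen_P: "finite I2"
      "\<forall>i\<in>I2. \<pi>g i \<in> homk P kring \<and> pg i \<in> carr P" "(\<Sum>i\<in>I2. \<pi>g i (pg i)) = 1"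
    by (rule InvP.dual_generator)
  have "kfgp B"
    using frobenius_B unfolding frobenius_def by blast
  then obtain nb :: nat and bb \<chi> where B: "\<forall>i<nb. bb i \<in> carr B \<and> \<chi> i \<in> homk B kring"
      "\<forall>y\<in>carr B. y = ksum B (\<lambda>i. smulm B (\<chi> i y) (bb i)) {..<nb}"
    by (rule AlgB.kfgp_dual_basis)
  interpret frobenius_bases A B P P' \<nu>A \<nu>B np pl \<pi>l I1 qg yg ne e \<xi> I2 \<pi>g pg nb bb \<chi>
    by (rule frobenius_bases.intro[OF frobenius_setup_axioms], unfold_locales) (use P P' gen_P' gen_P B in auto)
  show ?thesis
    by (rule frobenius_ext_W_from_bases)
qed

end

theorem theorem7p4:
  fixes A B :: "('k::comm_ring_1, 'a) kalg"
    and P :: "('k, 'p) kmod" and P' :: "('k, 'q) kmod"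
    and \<nu>A \<nu>B :: "'a \<Rightarrow> 'a"
  assumes "invertible_kmod P" and "invertible_kmod P'"
    and "frobenius A P" and "frobenius B P'"
    and "subalgebra B A"
    and "rfgp B (alg_bimod A)"
    and "nakayama_aut A P \<nu>A" and "\<nu>A ` carr B = carr B"
    and "nakayama_aut B P' \<nu>B"
  shows "frobenius_ext B A
           (W_bimod B (\<lambda>b. \<nu>B (the_inv_into (carr A) \<nu>A b)) (kdual P') P)"
proof -
  interpret frobenius_setup A B P P' \<nu>A \<nu>B
    using assms by unfold_locales
  show ?thesis
    using frobenius_ext_W unfolding \<beta>_def[abs_def] .
qed

end
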